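(* Let $G$ be an abelian group and let $A$ be an augmented algebra in the monoidal category ${}^{\Bbbk G}_{\Bbbk G}\mathcal{YD}$. Suppose that there exists a chain complex $P_\bullet\to A$ of $A$-bimodules in ${}^{\Bbbk G}_{\Bbbk G}\mathcal{YD}$ which is a resolution of $A$ in the category of (ordinary) $A$-bimodules, and such that for every $n\in\mathbb{N}_0$ the $A$-bimodule $P_n$ is isomorphic, as an $A$-bimodule in $G$-graded vector spaces, to $A\otimes V_n\otimes A$ with $V_n$ a finite dimensional $G$-graded vector space. Then there is an isomorphism of $\mathbb{Z}$-graded vector spaces $\mathrm{H}^\bullet(A,\Bbbk)\cong H(\hom_{AA}(P_\bullet,\Bbbk))$.
   Context: For $G$ abelian, a Yetter–Drinfeld module over $\Bbbk G$ is a $G$-graded vector space with a $G$-action preserving each homogeneous component; the tensor product is graded by $(V\otimes W)_g=\bigoplus_{st=g}V_s\otimes W_t$ with diagonal action, unit $\Bbbk$ in degree $1_G$ with trivial action. An augmented algebra in this category is an algebra $A$ whose multiplication and unit are Yetter–Drinfeld morphisms, together with an algebra map $\varepsilon:A\to\Bbbk$ that is a Yetter–Drinfeld morphism; $\Bbbk$ is an $A$-bimodule via $\varepsilon$. An $A$-bimodule in ${}^{\Bbbk G}_{\Bbbk G}\mathcal{YD}$ has actions which are Yetter–Drinfeld morphisms. $\mathrm{H}^\bullet(A,\Bbbk)=\operatorname{Ext}^\bullet_{A\text{-}A}(A,\Bbbk)$ is Hochschild cohomology with trivial coefficients. For $A$-bimodules $M,N$ in the category, $\hom_{AA}(M,N)=\bigoplus_{h\in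 G}\hom_{AA}(M,N)_h$ where $\hom_{AA}(M,N)_h$ consists of $\Bbbk$-linear $A$-bimodule maps $f:M\to N$ with $f(M_s)\subseteq N_{hs}$ for all $s\in G$ (with $G$-action $(g\cdot f)(x)=g\cdot f(g^{-1}\cdot x)$); $\hom_{AA}(P_\bullet,\Bbbk)$ is a cochain complex with differentials given by precomposition with those of $P_\bullet$. *)

theory Defs
  imports Complex_Main
begin

text \<open>The abelian group G is a type
 'g::ab_group_add, written additively (so the unit 1_G is 0). Subspaces of a fixed ambient type are given as sets.\<close>

definition subsp :: "('k::field \<Rightarrow> 'v::ab_group_add \<Rightarrow> 'v) \<Rightarrow> 'v set \<Rightarrow> bool" where
  "subsp sc S \<longleftrightarrow> 0 \<in> S \<and> (\<forall>x\<in>S. \<forall>y\<in>S. x + y \<in> S) \<and> (\<forall>c. \<forall>x\<in>S. sc c x \<in> S)"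

definition lin_on :: "('k::field \<Rightarrow> 'v::ab_group_add \<Rightarrow> 'v) \<Rightarrow> ('k \<Rightarrow> 'w::ab_group_add \<Rightarrow> 'w)
    \<Rightarrow> 'v set \<Rightarrow> ('v \<Rightarrow> 'w) \<Rightarrow> bool" where
  "lin_on sc1 sc2 S f \<longleftrightarrow> (\<forall>x\<in>S. \<forall>y\<in>S. f (x + y) = f x + f y) \<and> (\<forall>c. \<forall>x\<in>S. f (sc1 c x) = sc2 c (f x))"

definition graded_on :: "('k::field \<Rightarrow> 'v::ab_group_add \<Rightarrow> 'v) \<Rightarrow> 'v set \<Rightarrow> ('g \<Rightarrow> 'v set) \<Rightarrow> bool" where
  "graded_on sc S H \<longleftrightarrow> subsp sc S \<and> (\<forall>g. subsp sc (H g) \<and> H g \<subseteq> S) \<and>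
     (\<forall>x\<in>S. \<exists>!c. finite {g. c g \<noteq> 0} \<and> (\<forall>g. c g \<in> H g) \<and> x = (\<Sum>g\<in>{g. c g \<noteq> 0}. c g))"

definition action_on :: "('k::field \<Rightarrow> 'v::ab_group_add \<Rightarrow> 'v) \<Rightarrow> 'v set \<Rightarrow> ('g::ab_group_add \<Rightarrow> 'v set)
    \<Rightarrow> ('g \<Rightarrow> 'v \<Rightarrow> 'v) \<Rightarrow> bool" where
  "action_on sc S H act \<longleftrightarrow> (\<forall>g. lin_on sc sc S (act g) \<and> (\<forall>s. act g ` H s \<subseteq> H s)) \<and>
     (\<forall>x\<in>S. act 0 x = x) \<and> (\<forall>g h. \<forall>x\<in>S. act (g + h) x = act g (act h x))"

definition yd_mod :: "('k::field \<Rightarrow> 'v::ab_group_add \<Rightarrow> 'v) \<Rightarrow> 'v set \<Rightarrow> ('g::ab_group_add \<Rightarrow> 'v set)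
    \<Rightarrow> ('g \<Rightarrow> 'v \<Rightarrow> 'v) \<Rightarrow> bool" where
  "yd_mod sc S H act \<longleftrightarrow> graded_on sc S H \<and> action_on sc S H act"

text \<open>Augmented algebra in the category of Yetter-Drinfeld modules over kG; the
 algebra A is the whole type 'a; k sits in degree 0 with trivial action.\<close>
definition yd_aug_alg :: "('k::field \<Rightarrow> 'a::ab_group_add \<Rightarrow> 'a) \<Rightarrow> ('g::ab_group_add \<Rightarrow> 'a set)
    \<Rightarrow> ('g \<Rightarrow> 'a \<Rightarrow> 'a) \<Rightarrow> ('a \<Rightarrow> 'a \<Rightarrow> 'a) \<Rightarrow> 'a \<Rightarrow> ('a \<Rightarrow> 'k) \<Rightarrow> bool" where
  "yd_aug_alg sc H act mul one eps \<longleftrightarrow>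
     vector_space sc \<and> yd_mod sc UNIV H act \<and>
     (\<forall>x. lin_on sc sc UNIV (mul x)) \<and> (\<forall>y. lin_on sc sc UNIV (\<lambda>x. mul x y)) \<and>
     (\<forall>x y z. mul (mul x y) z = mul x (mul y z)) \<and> (\<forall>x. mul one x = x \<and> mul x one = x) \<and>
     (\<forall>s t. \<forall>x\<in>H s. \<forall>y\<in>H t. mul x y \<in> H (s + t)) \<and>
     (\<forall>g x y. act g (mul x y) = mul (act g x) (act g y)) \<and>
     one \<in> H 0 \<and> (\<forall>g. act g one = one) \<and>
     lin_on sc (*) UNIV eps \<and> eps one = 1 \<and> (\<forall>x y. eps (mul x y) = eps x * eps y) \<and>
     (\<forall>s. s \<noteq> 0 \<longrightarrow> (\<forall>x\<in>H s. eps x = 0)) \<and> (\<forall>g x. eps (act g x) = eps x)"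

definition yd_bimod :: "('k::field \<Rightarrow> 'a::ab_group_add \<Rightarrow> 'a) \<Rightarrow> ('g::ab_group_add \<Rightarrow> 'a set)
    \<Rightarrow> ('g \<Rightarrow> 'a \<Rightarrow> 'a) \<Rightarrow> ('a \<Rightarrow> 'a \<Rightarrow> 'a) \<Rightarrow> 'a
    \<Rightarrow> ('k \<Rightarrow> 'p::ab_group_add \<Rightarrow> 'p) \<Rightarrow> 'p set \<Rightarrow> ('g \<Rightarrow> 'p set) \<Rightarrow> ('g \<Rightarrow> 'p \<Rightarrow> 'p)
    \<Rightarrow> ('a \<Rightarrow> 'p \<Rightarrow> 'p) \<Rightarrow> ('p \<Rightarrow> 'a \<Rightarrow> 'p) \<Rightarrow> bool" where
  "yd_bimod sc H act mul one scp S HP actp lft rgt \<longleftrightarrow>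
     yd_mod scp S HP actp \<and>
     (\<forall>a. \<forall>x\<in>S. lft a x \<in> S \<and> rgt x a \<in> S) \<and>
     (\<forall>a. lin_on scp scp S (lft a)) \<and> (\<forall>x\<in>S. lin_on sc scp UNIV (\<lambda>a. lft a x)) \<and>
     (\<forall>a. lin_on scp scp S (\<lambda>x. rgt x a)) \<and> (\<forall>x\<in>S. lin_on sc scp UNIV (rgt x)) \<and>
     (\<forall>a b. \<forall>x\<in>S. lft (mul a b) x = lft a (lft b x)) \<and> (\<forall>x\<in>S. lft one x = x) \<and>
     (\<forall>a b. \<forall>x\<in>S. rgt x (mul a b) = rgt (rgt x a) b) \<and> (\<forall>x\<in>S. rgt x one = x) \<and>
     (\<forall>a b. \<forall>x\<in>S. lft a (rgt x b) = rgt (lft a x) b) \<and>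
     (\<forall>s t. \<forall>a\<in>H s. \<forall>x\<in>HP t. lft a x \<in> HP (s + t) \<and> rgt x a \<in> HP (t + s)) \<and>
     (\<forall>g a. \<forall>x\<in>S. actp g (lft a x) = lft (act g a) (actp g x) \<and>
                  actp g (rgt x a) = rgt (actp g x) (act g a))"

definition yd_bimod_hom :: "('k::field \<Rightarrow> 'p::ab_group_add \<Rightarrow> 'p) \<Rightarrow> 'p set \<Rightarrow> ('g \<Rightarrow> 'p set)
    \<Rightarrow> ('g \<Rightarrow> 'p \<Rightarrow> 'p) \<Rightarrow> ('a \<Rightarrow> 'p \<Rightarrow> 'p) \<Rightarrow> ('p \<Rightarrow> 'a \<Rightarrow> 'p)
    \<Rightarrow> ('k \<Rightarrow> 'q::ab_group_add \<Rightarrow> 'q) \<Rightarrow> 'q set \<Rightarrow> ('g \<Rightarrow> 'q set)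
    \<Rightarrow> ('g \<Rightarrow> 'q \<Rightarrow> 'q) \<Rightarrow> ('a \<Rightarrow> 'q \<Rightarrow> 'q) \<Rightarrow> ('q \<Rightarrow> 'a \<Rightarrow> 'q) \<Rightarrow> ('p \<Rightarrow> 'q) \<Rightarrow> bool" where
  "yd_bimod_hom scp S HP actp lftp rgtp scq T HQ actq lftq rgtq f \<longleftrightarrow>
     lin_on scp scq S f \<and> f ` S \<subseteq> T \<and> (\<forall>s. f ` HP s \<subseteq> HQ s) \<and>
     (\<forall>g. \<forall>x\<in>S. f (actp g x) = actq g (f x)) \<and>
     (\<forall>a. \<forall>x\<in>S. f (lftp a x) = lftq a (f x) \<and> f (rgtp x a) = rgtq (f x) a)"

definition bilin :: "('k::field \<Rightarrow> 'a::ab_group_add \<Rightarrow> 'a) \<Rightarrow> ('a \<Rightarrow> 'a \<Rightarrow> 'k) \<Rightarrow> bool" where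
  "bilin sc \<beta> \<longleftrightarrow> (\<forall>x. lin_on sc (*) UNIV (\<beta> x)) \<and> (\<forall>y. lin_on sc (*) UNIV (\<lambda>x. \<beta> x y))"

text \<open>The bimodule S is isomorphic, as an A-bimodule in G-graded vector spaces, to
 A \<otimes> V \<otimes> A with V a finite-dimensional G-graded vector space.  Unfolded: there is a
 finite set B of homogeneous elements of S (the images of 1 \<otimes> v \<otimes> 1 for a homogeneous
 basis v of V) such that the map from the direct sum over b \<in> B of A \<otimes> A to S,
 x \<otimes> y (in summand b) \<mapsto> x b y, is bijective. Injectivity is expressed by: an element
 sum_j x_j \<otimes> y_j of A \<otimes> A vanishes iff every bilinear form \<beta> on A has sum_j \<beta> x_j y_j = 0.\<close>
definition free_fin_graded :: "('k::field \<Rightarrow> 'a::ab_group_add \<Rightarrow> 'a) \<Rightarrow> ('a \<Rightarrow> 'p::ab_group_add \<Rightarrow> 'p)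
    \<Rightarrow> ('p \<Rightarrow> 'a \<Rightarrow> 'p) \<Rightarrow> 'p set \<Rightarrow> ('g \<Rightarrow> 'p set) \<Rightarrow> bool" where
  "free_fin_graded sc lft rgt S HP \<longleftrightarrow> (\<exists>B. finite B \<and> B \<subseteq> S \<and> (\<forall>b\<in>B. \<exists>s. b \<in> HP s) \<and>
     (\<forall>x\<in>S. \<exists>ts :: ('a \<times> 'p \<times> 'a) list. (\<forall>(a, b, c)\<in>set ts. b \<in> B) \<and>
            x = sum_list (map (\<lambda>(a, b, c). lft a (rgt b c)) ts)) \<and>
     (\<forall>ts :: ('a \<times> 'p \<times> 'a) list. (\<forall>(a, b, c)\<in>set ts. b \<in> B) \<and>
            sum_list (map (\<lambda>(a, b, c). lft a (rgt b c)) ts) = 0 \<longrightarrow>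
            (\<forall>b0\<in>B. \<forall>\<beta>. bilin sc \<beta> \<longrightarrow>
               sum_list (map (\<lambda>(a, b, c). if b = b0 then \<beta> a c else 0) ts) = 0)))"

subsection \<open>Hochschild cohomology H^n(A,k) = Ext^n_{A-A}(A,k) via the (normalized-free)
 bar resolution: cochains are k-multilinear maps A^n \<rightarrow> k (= linear maps A^{\<otimes>n} \<rightarrow> k).\<close>

definition hoch_cochains :: "('k::field \<Rightarrow> 'a::ab_group_add \<Rightarrow> 'a) \<Rightarrow> nat \<Rightarrow> ('a list \<Rightarrow> 'k) set" where
  "hoch_cochains sc n = {f. (\<forall>xs. length xs \<noteq> n \<longrightarrow> f xs = 0) \<and>
      (\<forall>us vs. length us + length vs + 1 = n \<longrightarrow> lin_on sc (*) UNIV (\<lambda>x. f (us @ x # vs)))}"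

definition hoch_diff :: "('a \<Rightarrow> 'a \<Rightarrow> 'a) \<Rightarrow> ('a \<Rightarrow> 'k::field) \<Rightarrow> nat \<Rightarrow> ('a list \<Rightarrow> 'k) \<Rightarrow> 'a list \<Rightarrow> 'k" where
  "hoch_diff mul eps n f xs = (if length xs = Suc n then
      eps (xs ! 0) * f (tl xs)
      + (\<Sum>i<n. (-1) ^ (i + 1) * f (take i xs @ mul (xs ! i) (xs ! Suc i) # drop (i + 2) xs))
      + (-1) ^ (n + 1) * f (butlast xs) * eps (last xs)
    else 0)"

definition hoch_cocycles :: "('k::field \<Rightarrow> 'a::ab_group_add \<Rightarrow> 'a) \<Rightarrow> ('a \<Rightarrow> 'a \<Rightarrow> 'a) \<Rightarrow> ('a \<Rightarrow> 'k)
    \<Rightarrow> nat \<Rightarrow> ('a list \<Rightarrow> 'k) set" where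
  "hoch_cocycles sc mul eps n = {f \<in> hoch_cochains sc n. hoch_diff mul eps n f = (\<lambda>_. 0)}"

definition hoch_coboundaries :: "('k::field \<Rightarrow> 'a::ab_group_add \<Rightarrow> 'a) \<Rightarrow> ('a \<Rightarrow> 'a \<Rightarrow> 'a) \<Rightarrow> ('a \<Rightarrow> 'k)
    \<Rightarrow> nat \<Rightarrow> ('a list \<Rightarrow> 'k) set" where
  "hoch_coboundaries sc mul eps n = (case n of 0 \<Rightarrow> {\<lambda>_. 0}
      | Suc m \<Rightarrow> hoch_diff mul eps m ` hoch_cochains sc m)"

text \<open>hom_AA(M,k)_h: A-bimodule maps M \<rightarrow> k (k a bimodule via eps, concentrated in degree 0)
 with f(M_s) \<subseteq> k_{h+s}, i.e. f vanishes on M_s unless h + s = 0. Maps are normalized to be 0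
 outside the carrier S.\<close>
definition homAA_deg :: "('k::field \<Rightarrow> 'p::ab_group_add \<Rightarrow> 'p) \<Rightarrow> 'p set \<Rightarrow> ('g::ab_group_add \<Rightarrow> 'p set)
    \<Rightarrow> ('a \<Rightarrow> 'p \<Rightarrow> 'p) \<Rightarrow> ('p \<Rightarrow> 'a \<Rightarrow> 'p) \<Rightarrow> ('a \<Rightarrow> 'k) \<Rightarrow> 'g \<Rightarrow> ('p \<Rightarrow> 'k) set" where
  "homAA_deg scp S HP lft rgt eps h = {f. (\<forall>x. x \<notin> S \<longrightarrow> f x = 0) \<and> lin_on scp (*) S f \<and>
      (\<forall>a. \<forall>x\<in>S. f (lft a x) = eps a * f x \<and> f (rgt x a) = f x * eps a) \<and>
      (\<forall>s. h + s \<noteq> 0 \<longrightarrow> (\<forall>x\<in>HP s. f x = 0))}"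

definition homAA :: "('k::field \<Rightarrow> 'p::ab_group_add \<Rightarrow> 'p) \<Rightarrow> 'p set \<Rightarrow> ('g::ab_group_add \<Rightarrow> 'p set)
    \<Rightarrow> ('a \<Rightarrow> 'p \<Rightarrow> 'p) \<Rightarrow> ('p \<Rightarrow> 'a \<Rightarrow> 'p) \<Rightarrow> ('a \<Rightarrow> 'k) \<Rightarrow> ('p \<Rightarrow> 'k) set" where
  "homAA scp S HP lft rgt eps = {f. \<exists>F fs. finite F \<and> (\<forall>h\<in>F. fs h \<in> homAA_deg scp S HP lft rgt eps h) \<and>
      f = (\<lambda>x. \<Sum>h\<in>F. fs h x)}"

definition hom_diff :: "(nat \<Rightarrow> 'p set) \<Rightarrow> (nat \<Rightarrow> 'p \<Rightarrow> 'p) \<Rightarrow> nat \<Rightarrow> ('p \<Rightarrow> 'k::field) \<Rightarrow> 'p \<Rightarrow> 'k" where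
  "hom_diff P d n f = (\<lambda>x. if x \<in> P (Suc n) then f (d n x) else 0)"

definition hom_cocycles :: "('k::field \<Rightarrow> 'p::ab_group_add \<Rightarrow> 'p) \<Rightarrow> (nat \<Rightarrow> 'p set) \<Rightarrow> (nat \<Rightarrow> 'g::ab_group_add \<Rightarrow> 'p set)
    \<Rightarrow> ('a \<Rightarrow> 'p \<Rightarrow> 'p) \<Rightarrow> ('p \<Rightarrow> 'a \<Rightarrow> 'p) \<Rightarrow> ('a \<Rightarrow> 'k) \<Rightarrow> (nat \<Rightarrow> 'p \<Rightarrow> 'p) \<Rightarrow> nat \<Rightarrow> ('p \<Rightarrow> 'k) set" where
  "hom_cocycles scp P HP lft rgt eps d n =
     {f \<in> homAA scp (P n) (HP n) lft rgt eps. hom_diff P d n f = (\<lambda>_. 0)}"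

definition hom_coboundaries :: "('k::field \<Rightarrow> 'p::ab_group_add \<Rightarrow> 'p) \<Rightarrow> (nat \<Rightarrow> 'p set) \<Rightarrow> (nat \<Rightarrow> 'g::ab_group_add \<Rightarrow> 'p set)
    \<Rightarrow> ('a \<Rightarrow> 'p \<Rightarrow> 'p) \<Rightarrow> ('p \<Rightarrow> 'a \<Rightarrow> 'p) \<Rightarrow> ('a \<Rightarrow> 'k) \<Rightarrow> (nat \<Rightarrow> 'p \<Rightarrow> 'p) \<Rightarrow> nat \<Rightarrow> ('p \<Rightarrow> 'k) set" where
  "hom_coboundaries scp P HP lft rgt eps d n = (case n of 0 \<Rightarrow> {\<lambda>_. 0}
      | Suc m \<Rightarrow> hom_diff P d m ` homAA scp (P m) (HP m) lft rgt eps)"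

text \<open>Z1/B1 and Z2/B2 are isomorphic k-vector spaces: there is a k-linear map Z1 \<rightarrow> Z2
 inducing a bijection Z1/B1 \<rightarrow> Z2/B2.\<close>
definition quot_iso :: "('x \<Rightarrow> 'k::field) set \<Rightarrow> ('x \<Rightarrow> 'k) set \<Rightarrow> ('y \<Rightarrow> 'k) set \<Rightarrow> ('y \<Rightarrow> 'k) set \<Rightarrow> bool" where
  "quot_iso Z1 B1 Z2 B2 \<longleftrightarrow> (\<exists>\<phi>. (\<forall>z\<in>Z1. \<phi> z \<in> Z2) \<and>
     (\<forall>z\<in>Z1. \<forall>w\<in>Z1. \<phi> (\<lambda>x. z x + w x) = (\<lambda>y. \<phi> z y + \<phi> w y)) \<and>
     (\<forall>c. \<forall>z\<in>Z1. \<phi> (\<lambda>x. c * z x) = (\<lambda>y. c * \<phi> z y)) \<and>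
     (\<forall>z\<in>Z1. \<phi> z \<in> B2 \<longleftrightarrow> z \<in> B1) \<and>
     (\<forall>w\<in>Z2. \<exists>z\<in>Z1. (\<lambda>y. w y - \<phi> z y) \<in> B2))"

end

theory Submission
  imports Defs
begin

(* Both sides compute Ext of A into k from a projective resolution of A by A-bimodules:
   H(A,k) from the bar resolution B_n = A \<otimes> A^(\<otimes>n) \<otimes> A, whose bimodule maps to k are the
   Hochschild cochains, and the right-hand side from P.  Since every P_n is free of finite rank
   on homogeneous generators, every bimodule map P_n \<rightarrow> k is a finite sum of homogeneous
   ones, so hom_AA(P_n,k) is the space of all bimodule maps P_n \<rightarrow> k.  The comparison theorem
   then applies: chain maps F : P \<rightarrow> B and G : B \<rightarrow> P over the identity of A are built
   degree by degree, F from the contracting homotopy x \<mapsto> 1 \<otimes> x of B and freeness of P,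
   G from a linear section of the differential of P, and the same two devices produce chain
   homotopies GF \<simeq> id and FG \<simeq> id.  Hence F^* and G^* are mutually inverse on cohomology. *)

section \<open>Linear algebra\<close>

lemma field_vector_space: "vector_space ((*) :: 'k::field \<Rightarrow> 'k \<Rightarrow> 'k)"
  by unfold_locales (auto simp: algebra_simps)

lemma linear_imp_lin_on: "Vector_Spaces.linear s1 s2 f \<Longrightarrow> lin_on s1 s2 S f"
  by (auto simp: Vector_Spaces.linear_iff lin_on_def)

lemma exists_functional_nonzero:
  fixes scv :: "'k::field \<Rightarrow> 'v::ab_group_add \<Rightarrow> 'v"
  assumes vs: "vector_space scv" and v: "v \<noteq> 0"
  shows "\<exists>l. lin_on scv (*) UNIV l \<and> l v \<noteq> 0"
proof -
  interpret vs1: vector_space scv by fact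
  interpret vs2: vector_space "(*) :: 'k::field \<Rightarrow> 'k \<Rightarrow> 'k" by (rule field_vector_space)
  interpret p: vector_space_pair scv "(*) :: 'k \<Rightarrow> 'k \<Rightarrow> 'k" by unfold_locales
  have ind: "vs1.independent {v}"
    using v vs1.independent_insert[of v "{}"] by auto
  show ?thesis
  proof (intro exI conjI)
    show "lin_on scv (*) UNIV (p.construct {v} (\<lambda>_. 1))"
      using p.linear_construct[OF ind] by (rule linear_imp_lin_on)
    show "p.construct {v} (\<lambda>_. 1) v \<noteq> 0" using p.construct_basis[OF ind, of v] by simp
  qed
qed

lemma zero_if_functionals_vanish:
  fixes scv :: "'k::field \<Rightarrow> 'v::ab_group_add \<Rightarrow> 'v"
  assumes vs: "vector_space scv" and "\<And>l. lin_on scv (*) UNIV l \<Longrightarrow> (l v :: 'k::field) = 0"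
  shows "v = 0"
  using exists_functional_nonzero[OF vs, of v] assms(2) by blast

lemma lin_on_0: "lin_on s1 s2 V f \<Longrightarrow> 0 \<in> V \<Longrightarrow> f 0 = 0"
  unfolding lin_on_def by (metis add.right_neutral add_left_cancel)

lemma lin_on_extend_linear:
  assumes vs1: "vector_space s1" and vs2: "vector_space s2"
    and V: "subsp s1 V" and f: "lin_on s1 s2 V f"
  shows "\<exists>f'. Vector_Spaces.linear s1 s2 f' \<and> (\<forall>x\<in>V. f' x = f x)"
proof -
  interpret vs1: vector_space s1 by fact
  interpret vs2: vector_space s2 by fact
  interpret p: vector_space_pair s1 s2 by unfold_locales
  obtain B where B: "B \<subseteq> V" "vs1.independent B" "V \<subseteq> vs1.span B"
    using vs1.maximal_independent_subset by blast
  define f' where "f' = p.construct B f"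
  have lf: "Vector_Spaces.linear s1 s2 f'" unfolding f'_def by (rule p.linear_construct[OF B(2)])
  have sub: "vs1.subspace {x \<in> V. f' x = f x}"
    unfolding vs1.subspace_def
  proof (intro conjI ballI allI)
    show "0 \<in> {x \<in> V. f' x = f x}"
      using V f lf lin_on_0[OF f] by (auto simp: subsp_def p.linear_0)
    fix x y assume x: "x \<in> {x \<in> V. f' x = f x}" and y: "y \<in> {x \<in> V. f' x = f x}"
    then show "x + y \<in> {x \<in> V. f' x = f x}"
      using V f p.linear_add[OF lf] by (auto simp: subsp_def lin_on_def)
  next
    fix c x assume x: "x \<in> {x \<in> V. f' x = f x}"
    then show "s1 c x \<in> {x \<in> V. f' x = f x}"
      using V f p.linear_scale[OF lf] by (auto simp: subsp_def lin_on_def)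
  qed
  have "B \<subseteq> {x \<in> V. f' x = f x}"
    using B p.construct_basis[OF B(2)] by (auto simp: f'_def)
  then have "vs1.span B \<subseteq> {x \<in> V. f' x = f x}" by (rule vs1.span_minimal[OF _ sub])
  then show ?thesis using B lf by blast
qed

lemma exists_linear_section:
  assumes vs1: "vector_space s1" and vs2: "vector_space s2"
    and V: "subsp s1 V" and f: "lin_on s1 s2 V f"
  shows "\<exists>g. (\<forall>y. g y \<in> V) \<and> Vector_Spaces.linear s2 s1 g \<and> (\<forall>y\<in>f ` V. f (g y) = y)"
proof -
  interpret vs1: vector_space s1 by fact
  interpret vs2: vector_space s2 by fact
  interpret p: vector_space_pair s1 s2 by unfold_locales
  obtain f' where f': "Vector_Spaces.linear s1 s2 f'" "\<forall>x\<in>V. f' x = f x"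
    using lin_on_extend_linear[OF vs1 vs2 V f] by blast
  have "vs1.subspace V" using V by (simp add: subsp_def vs1.subspace_def)
  from p.linear_exists_right_inverse_on[OF f'(1) this]
  obtain g where g: "g ` UNIV \<subseteq> V" "Vector_Spaces.linear s2 s1 g" "\<forall>v\<in>f' ` V. f' (g v) = v" by blast
  have "f' ` V = f ` V" using f'(2) by auto
  moreover have "f (g y) = y" if "y \<in> f ` V" for y
  proof -
    have "g y \<in> V" using g(1) by auto
    then have "f (g y) = f' (g y)" using f'(2) by auto
    also have "\<dots> = y" using g(3) that \<open>f' ` V = f ` V\<close> by auto
    finally show ?thesis .
  qed
  ultimately show ?thesis using g by (intro exI[of _ g]) auto
qed

lemma additive_on:
  assumes "\<forall>x\<in>S. \<forall>y\<in>S. f (x+y) = f x + f y" "0 \<in> S" "\<forall>x\<in>S. -x \<in> S"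
  shows additive_on_0: "f 0 = (0::'b::ab_group_add)" and additive_on_minus: "x\<in>S \<Longrightarrow> f (-(x::'a::ab_group_add)) = - f x"
    and additive_on_diff: "x\<in>S \<Longrightarrow> y\<in>S \<Longrightarrow> f (x - y) = f x - f y"
proof -
  show z: "f 0 = 0" using assms(1,2) by (metis add.right_neutral add_left_cancel)
  show m: "x\<in>S \<Longrightarrow> f (-x) = - f x" for x
    using assms(1,3)[rule_format, of x] z by (metis add.right_inverse eq_neg_iff_add_eq_0)
  show "x\<in>S \<Longrightarrow> y\<in>S \<Longrightarrow> f (x - y) = f x - f y"
    using assms(1) m assms(3) by (metis diff_conv_add_uminus)
qed

lemma lin_on_diff:
  assumes "vector_space scv" "lin_on s scv S f" "lin_on s scv S g"
  shows "lin_on s scv S (\<lambda>x. f x - g x)"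
proof -
  interpret V: vector_space scv by fact
  show ?thesis using assms(2,3) by (auto simp: lin_on_def V.scale_right_diff_distrib)
qed

lemma lin_on_add:
  assumes "vector_space scv" "lin_on s scv S f" "lin_on s scv S g"
  shows "lin_on s scv S (\<lambda>x. f x + g x)"
proof -
  interpret V: vector_space scv by fact
  show ?thesis using assms(2,3) by (auto simp: lin_on_def V.scale_right_distrib)
qed

lemma lin_on_const_0:
  assumes "vector_space scv"
  shows "lin_on s scv S (\<lambda>x. 0)"
proof -
  interpret V: vector_space scv by fact
  show ?thesis by (auto simp: lin_on_def)
qed

lemma additive_sum_list:
  fixes l :: "'b::ab_group_add \<Rightarrow> 'c::ab_group_add"
  assumes "\<forall>x y. l (x + y) = l x + l y"
  shows "l (sum_list (map f ts)) = sum_list (map (\<lambda>t. l (f t)) ts)"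
proof -
  have "l 0 = 0" using assms by (metis add.right_neutral add_left_cancel)
  then show ?thesis by (induction ts) (simp_all add: assms)
qed

lemma scale_sum_list: assumes "vector_space scv" shows "scv c (sum_list (map f ts)) = sum_list (map (\<lambda>t. scv c (f t)) ts)"
proof -
  interpret V: vector_space scv by fact
  show ?thesis by (induction ts) (auto simp: V.scale_right_distrib)
qed

lemma lin_on_comp: "lin_on s s UNIV g \<Longrightarrow> lin_on s scv UNIV f \<Longrightarrow> lin_on s scv UNIV (\<lambda>x. f (g x))"
  by (auto simp: lin_on_def)

lemma lin_on_comp_into: "lin_on s1 s2 UNIV h \<Longrightarrow> (\<And>x. h x \<in> S) \<Longrightarrow> lin_on s2 s3 S l \<Longrightarrow>
    lin_on s1 s3 UNIV (\<lambda>x. l (h x))"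
  by (simp add: lin_on_def)

lemma length_ge2_split: assumes "2 \<le> length ys" shows "\<exists>y0 mid yl. ys = y0 # mid @ [yl]"
proof (cases ys)
  case Nil then show ?thesis using assms by simp
next
  case (Cons y0 rest)
  then have "rest \<noteq> []" using assms by auto
  then obtain mid yl where "rest = mid @ [yl]" using rev_exhaust by blast
  then show ?thesis using Cons by blast
qed

lemma graded_on_homogeneous_unique:
  assumes gr: "graded_on sc S HS" and x: "x \<in> HS s"
    and c: "finite {g. c g \<noteq> 0}" "\<forall>g. c g \<in> HS g" "x = (\<Sum>g\<in>{g. c g \<noteq> 0}. c g)"
  shows "c = (\<lambda>g. if g = s then x else 0)"
proof -
  define Q where "Q c \<longleftrightarrow> finite {g. c g \<noteq> 0} \<and> (\<forall>g. c g \<in> HS g) \<and> x = (\<Sum>g\<in>{g. c g \<noteq> 0}. c g)"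
    for c
  have "x \<in> S" using gr x by (auto simp: graded_on_def)
  then have uniq: "\<exists>!c. Q c" using gr unfolding graded_on_def Q_def by blast
  define c' where "c' = (\<lambda>g. if g = s then x else 0)"
  have "{g. c' g \<noteq> 0} \<subseteq> {s}" by (auto simp: c'_def)
  moreover have "(\<Sum>g\<in>{g. c' g \<noteq> 0}. c' g) = x"
  proof (cases "x = 0")
    case False
    then have "{g. c' g \<noteq> 0} = {s}" by (auto simp: c'_def)
    then show ?thesis by (simp add: c'_def)
  qed (simp add: c'_def)
  moreover have "\<forall>g. c' g \<in> HS g" using x gr by (auto simp: c'_def graded_on_def subsp_def)
  ultimately have "Q c'" unfolding Q_def using finite_subset by fastforce
  moreover have "Q c" using c by (simp add: Q_def)
  ultimately show ?thesis using uniq unfolding c'_def by blast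
qed

lemma quot_iso_intro:
  fixes \<phi> :: "('x \<Rightarrow> 'k::field) \<Rightarrow> 'y \<Rightarrow> 'k" and \<gamma> :: "('y \<Rightarrow> 'k) \<Rightarrow> 'x \<Rightarrow> 'k"
  assumes maps: "\<forall>z\<in>Z1. \<phi> z \<in> Z2" "\<forall>w\<in>Z2. \<gamma> w \<in> Z1"
    and add: "\<forall>z\<in>Z1. \<forall>w\<in>Z1. \<phi> (\<lambda>x. z x + w x) = (\<lambda>y. \<phi> z y + \<phi> w y)"
    and scale: "\<forall>c. \<forall>z\<in>Z1. \<phi> (\<lambda>x. c * z x) = (\<lambda>y. c * \<phi> z y)"
    and bounds: "\<forall>z\<in>Z1 \<inter> B1. \<phi> z \<in> B2" "\<forall>w\<in>Z2 \<inter> B2. \<gamma> w \<in> B1"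
    and htpy: "\<forall>z\<in>Z1. (\<lambda>x. z x - \<gamma> (\<phi> z) x) \<in> B1" "\<forall>w\<in>Z2. (\<lambda>y. w y - \<phi> (\<gamma> w) y) \<in> B2"
    and B1_add: "\<forall>u\<in>B1. \<forall>v\<in>B1. (\<lambda>x. u x + v x) \<in> B1"
  shows "quot_iso Z1 B1 Z2 B2"
proof -
  have reflect: "z \<in> B1" if z: "z \<in> Z1" and "\<phi> z \<in> B2" for z
  proof -
    have g: "\<gamma> (\<phi> z) \<in> B1" using that maps bounds by blast
    have h: "(\<lambda>x. z x - \<gamma> (\<phi> z) x) \<in> B1" using htpy z by blast
    from B1_add[rule_format, OF h g] show ?thesis by simp
  qed
  show ?thesis
    unfolding quot_iso_def using maps add scale bounds htpy reflect by (intro exI[of _ \<phi>]) blast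
qed

section \<open>The bar resolution\<close>

locale yd_augmented_algebra =
  fixes sc :: "'k::field \<Rightarrow> 'a::ab_group_add \<Rightarrow> 'a"
    and H :: "'g::ab_group_add \<Rightarrow> 'a set"
    and act :: "'g \<Rightarrow> 'a \<Rightarrow> 'a"
    and mul :: "'a \<Rightarrow> 'a \<Rightarrow> 'a" and one :: 'a and eps :: "'a \<Rightarrow> 'k"
  assumes alg: "yd_aug_alg sc H act mul one eps"
begin

lemma vector_space_A: "vector_space sc" using alg by (simp add: yd_aug_alg_def)

lemma mul_addL: "mul (x + y) z = mul x z + mul y z"
  and mul_addR: "mul z (x + y) = mul z x + mul z y"
  and mul_scL: "mul (sc c x) y = sc c (mul x y)"
  and mul_scR: "mul x (sc c y) = sc c (mul x y)"
  and mul_assoc: "mul (mul x y) z = mul x (mul y z)"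
  and mul_oneL: "mul one x = x" and mul_oneR: "mul x one = x"
  and eps_add: "eps (x + y) = eps x + eps y"
  and eps_sc: "eps (sc c x) = c * eps x"
  and eps_mul: "eps (mul x y) = eps x * eps y"
  and eps_one: "eps one = 1"
  using alg by (auto simp: yd_aug_alg_def lin_on_def)

definition lmul :: "'a \<Rightarrow> 'a list \<Rightarrow> 'a list" where
  "lmul a xs = (case xs of [] \<Rightarrow> [] | x # r \<Rightarrow> mul a x # r)"
definition rmul :: "'a \<Rightarrow> 'a list \<Rightarrow> 'a list" where
  "rmul c xs = (if xs = [] then [] else butlast xs @ [mul (last xs) c])"

lemma lmul_Nil[simp]: "lmul a [] = []" and lmul_Cons[simp]: "lmul a (x # r) = mul a x # r"
  by (simp_all add: lmul_def)
lemma rmul_Nil[simp]: "rmul c [] = []"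
  and rmul_single[simp]: "rmul c [x] = [mul x c]"
  and rmul_Cons: "r \<noteq> [] \<Longrightarrow> rmul c (x # r) = x # rmul c r"
  by (auto simp: rmul_def)
lemma rmul_Cons_len: "length r = Suc k \<Longrightarrow> rmul c (x # r) = x # rmul c r"
  by (auto intro: rmul_Cons)
lemma rmul_Cons2[simp]: "rmul c (x # y # r) = x # rmul c (y # r)"
  by (simp add: rmul_Cons)
lemma length_lmul[simp]: "length (lmul a xs) = length xs" by (cases xs) auto
lemma length_rmul[simp]: "length (rmul c xs) = length xs" by (auto simp: rmul_def)
lemma rmul_rmul: "rmul c (rmul c' xs) = rmul (mul c' c) xs"
  by (auto simp: rmul_def mul_assoc)
lemma lmul_one: "lmul one xs = xs" by (cases xs) (auto simp: mul_oneL)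
lemma rmul_one: "rmul one xs = xs" by (auto simp: rmul_def mul_oneR)

(* A k-linear map on the bar module B_n = A^(\<otimes> n+2) is represented by a function on lists of
   length n + 2 that is linear in every entry (multilin below); bar_diff f is f \<circ> b' for the bar
   differential b' (a_0 \<otimes> \<dots> \<otimes> a_m) = \<Sum>i. (-1)^i a_0 \<otimes> \<dots> \<otimes> a_i a_(i+1) \<otimes> \<dots> \<otimes> a_m. *)
fun bar_diff :: "('a list \<Rightarrow> 'v::ab_group_add) \<Rightarrow> 'a list \<Rightarrow> 'v" where
  "bar_diff f (a0 # a1 # r) = f (mul a0 a1 # r) - bar_diff (\<lambda>ys. f (a0 # ys)) (a1 # r)"
| "bar_diff f _ = 0"

definition agree_len :: "nat \<Rightarrow> ('a list \<Rightarrow> 'v) \<Rightarrow> ('a list \<Rightarrow> 'v) \<Rightarrow> bool" where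
  "agree_len m f g \<longleftrightarrow> (\<forall>xs. length xs = m \<longrightarrow> f xs = g xs)"

lemma bar_diff_cong: "agree_len m f g \<Longrightarrow> length xs = Suc m \<Longrightarrow> bar_diff f xs = bar_diff g xs"
proof (induction f xs arbitrary: g m rule: bar_diff.induct)
  case (1 f a0 a1 r)
  have "agree_len (m - 1) (\<lambda>ys. f (a0 # ys)) (\<lambda>ys. g (a0 # ys))"
    using 1(2,3) by (auto simp: agree_len_def)
  with 1 show ?case by (auto simp: agree_len_def)
qed auto

lemma bar_diff_add: "bar_diff (\<lambda>ys. f ys + g ys) xs = bar_diff f xs + bar_diff g xs"
  by (induction f xs arbitrary: g rule: bar_diff.induct) auto

lemma bar_diff_natural:
  assumes "\<forall>x y. l (x + y) = l x + l y"
  shows "l (bar_diff f xs) = bar_diff (\<lambda>ys. l (f ys)) xs"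
proof -
  have l0: "l 0 = 0" and ld: "\<And>x y. l (x - y) = l x - l y"
    using additive_on[of UNIV l] assms by auto
  show ?thesis by (induction f xs rule: bar_diff.induct) (auto simp: l0 ld)
qed

lemma bar_diff_natural_on:
  assumes "\<forall>x\<in>S. \<forall>y\<in>S. l (x + y) = l x + l y" "0 \<in> S" "\<forall>x\<in>S. \<forall>y\<in>S. x - y \<in> S"
    and "\<forall>ys. f ys \<in> S"
  shows "bar_diff f xs \<in> S \<and> l (bar_diff f xs) = bar_diff (\<lambda>ys. l (f ys)) xs"
proof -
  have mS: "\<forall>x\<in>S. -x \<in> S" using assms(2,3) by (metis diff_0)
  have l0: "l 0 = 0" and ld: "\<And>x y. x \<in> S \<Longrightarrow> y \<in> S \<Longrightarrow> l (x - y) = l x - l y"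
    using additive_on[of S l] assms(1,2) mS by auto
  show ?thesis using assms(4)
    by (induction f xs rule: bar_diff.induct) (auto simp: l0 ld assms(2,3))
qed

lemma bar_diff_minus: "bar_diff (\<lambda>ys. - f ys) xs = - bar_diff f xs"
  using bar_diff_natural[of uminus f xs] by simp
lemma bar_diff_diff: "bar_diff (\<lambda>ys. f ys - g ys) xs = bar_diff f xs - bar_diff g xs"
  using bar_diff_add[of f "\<lambda>ys. - g ys" xs] bar_diff_minus[of g xs] by simp
lemma bar_diff_zero: "bar_diff (\<lambda>ys. 0) xs = 0"
  using bar_diff_natural[of "\<lambda>x. 0" f xs] by simp

lemma bar_diff_lmul: "bar_diff (\<lambda>ys. f (lmul a ys)) xs = bar_diff f (lmul a xs)"
proof (cases xs rule: remdups_adj.cases)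
  case (3 a0 a1 r)
  then show ?thesis by (simp add: mul_assoc)
qed auto

lemma bar_diff_rmul: "bar_diff (\<lambda>ys. f (rmul c ys)) xs = bar_diff f (rmul c xs)"
proof (induction f xs rule: bar_diff.induct)
  case (1 f a0 a1 r)
  show ?case
  proof (cases r)
    case Nil then show ?thesis by (simp add: mul_assoc)
  next
    case (Cons r0 r')
    have "bar_diff (\<lambda>ys. f (rmul c (a0 # ys))) (a1 # r) = bar_diff (\<lambda>ys. f (a0 # rmul c ys)) (a1 # r)"
      by (rule bar_diff_cong[of "length r"]) (auto simp: agree_len_def Cons rmul_Cons_len)
    also have "\<dots> = bar_diff (\<lambda>ys. f (a0 # ys)) (rmul c (a1 # r))" using 1 by simp
    finally show ?thesis using Cons by (simp add: rmul_Cons)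
  qed
qed auto

lemma bar_diff_Cons: "ys \<noteq> [] \<Longrightarrow> bar_diff f (a0 # ys) = f (lmul a0 ys) - bar_diff (\<lambda>zs. f (a0 # zs)) ys"
  by (cases ys) auto

lemma bar_diff_bar_diff: "bar_diff (bar_diff f) xs = 0"
proof (induction "length xs" arbitrary: f xs rule: less_induct)
  case less
  show ?case
  proof (cases xs rule: remdups_adj.cases)
    case (3 a0 a1 r)
    show ?thesis
    proof (cases r)
      case Nil then show ?thesis using 3 by simp
    next
      case (Cons r0 r')
      have "bar_diff (\<lambda>ys. bar_diff f (a0 # ys)) (a1 # r)
          = bar_diff (\<lambda>ys. f (lmul a0 ys) - bar_diff (\<lambda>zs. f (a0 # zs)) ys) (a1 # r)"
        by (rule bar_diff_cong[of "length r"]) (auto simp: agree_len_def Cons intro!: bar_diff_Cons)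
      also have "\<dots> = bar_diff f (lmul a0 (a1 # r)) - bar_diff (bar_diff (\<lambda>zs. f (a0 # zs))) (a1 # r)"
        by (simp add: bar_diff_diff bar_diff_lmul)
      also have "bar_diff (bar_diff (\<lambda>zs. f (a0 # zs))) (a1 # r) = 0"
        using less[of "a1 # r"] 3 by simp
      finally show ?thesis using 3 Cons by simp
    qed
  qed auto
qed

lemma bar_diff_one: "ys \<noteq> [] \<Longrightarrow> bar_diff f (one # ys) = f ys - bar_diff (\<lambda>zs. f (one # zs)) ys"
  by (simp add: bar_diff_Cons lmul_one)

definition multilin :: "('k \<Rightarrow> 'v::ab_group_add \<Rightarrow> 'v) \<Rightarrow> nat \<Rightarrow> ('a list \<Rightarrow> 'v) \<Rightarrow> bool" where
  "multilin scv m f \<longleftrightarrow> (\<forall>us vs. length us + length vs + 1 = m \<longrightarrow> lin_on sc scv UNIV (\<lambda>x. f (us @ x # vs)))"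

lemma lin_on_mulL: "lin_on sc sc UNIV (\<lambda>x. mul x v)" by (auto simp: lin_on_def mul_addL mul_scL)
lemma lin_on_mulR: "lin_on sc sc UNIV (\<lambda>x. mul v x)" by (auto simp: lin_on_def mul_addR mul_scR)

lemma multilin_slot: "multilin scv m f \<Longrightarrow> length us + length vs + 1 = m \<Longrightarrow>
    lin_on sc scv UNIV (\<lambda>x. f (us @ x # vs))"
  by (auto simp: multilin_def)

lemma multilin_Cons: assumes a: "multilin scv m f" shows "multilin scv (m - 1) (\<lambda>ys. f (u # ys))"
proof (unfold multilin_def, intro allI impI)
  fix us vs :: "'a list" assume l: "length us + length vs + 1 = m - 1"
  then have "length (u # us) + length vs + 1 = m" by simp
  from a[unfolded multilin_def, rule_format, OF this] show "lin_on sc scv UNIV (\<lambda>x. f (u # us @ x # vs))" by simp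
qed

lemma multilin_comp_left:
  assumes f: "multilin scv m f" and S: "\<And>xs. f xs \<in> S" and l: "lin_on scv scw S l"
  shows "multilin scw m (\<lambda>xs. l (f xs))"
  unfolding multilin_def
proof (intro allI impI)
  fix us vs :: "'a list" assume "length us + length vs + 1 = m"
  from lin_on_comp_into[OF multilin_slot[OF f this] S l]
  show "lin_on sc scw UNIV (\<lambda>x. l (f (us @ x # vs)))" .
qed

lemma lin_on_bar_diff_family:
  assumes V: "vector_space scv"
    and add: "\<And>x y. agree_len m (F (x + y)) (\<lambda>ys. F x ys + F y ys)"
    and scale: "\<And>c x. agree_len m (F (sc c x)) (\<lambda>ys. scv c (F x ys))"
    and l: "length xs = Suc m"
  shows "lin_on sc scv UNIV (\<lambda>x. bar_diff (F x) xs)"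
proof -
  interpret V: vector_space scv by fact
  show ?thesis unfolding lin_on_def
  proof (intro conjI ballI allI)
    fix x y show "bar_diff (F (x + y)) xs = bar_diff (F x) xs + bar_diff (F y) xs"
      using bar_diff_cong[OF add l] by (simp add: bar_diff_add)
  next
    fix c x show "bar_diff (F (sc c x)) xs = scv c (bar_diff (F x) xs)"
      using bar_diff_cong[OF scale l] bar_diff_natural[of "scv c" "F x" xs] by (simp add: V.scale_right_distrib)
  qed
qed

lemma multilin_bar_diff_slot:
  assumes V: "vector_space scv"
  shows "multilin scv m f \<Longrightarrow> length us + length vs = m \<Longrightarrow> lin_on sc scv UNIV (\<lambda>x. bar_diff f (us @ x # vs))"
proof (induction us arbitrary: f m vs)
  case Nil
  show ?case
  proof (cases vs)
    case Nil then show ?thesis by (simp add: lin_on_const_0[OF V])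
  next
    case (Cons v r)
    have l1: "lin_on sc scv UNIV (\<lambda>x. f (mul x v # r))"
      using lin_on_comp[OF lin_on_mulL multilin_slot[OF Nil.prems(1), of "[]" r]] Nil.prems Cons by simp
    have l2: "lin_on sc scv UNIV (\<lambda>x. bar_diff (\<lambda>ys. f (x # ys)) (v # r))"
      by (rule lin_on_bar_diff_family[OF V, where m = "length r"])
        (use multilin_slot[OF Nil.prems(1), of "[]"] Nil.prems Cons in \<open>auto simp: agree_len_def lin_on_def\<close>)
    show ?thesis using lin_on_diff[OF V l1 l2] Cons by simp
  qed
next
  case (Cons u us')
  have l2: "lin_on sc scv UNIV (\<lambda>x. bar_diff (\<lambda>ys. f (u # ys)) (us' @ x # vs))"
    using Cons.IH[OF multilin_Cons[OF Cons.prems(1), of u]] Cons.prems by simp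
  show ?case
  proof (cases us')
    case Nil
    have l1: "lin_on sc scv UNIV (\<lambda>x. f (mul u x # vs))"
      using lin_on_comp[OF lin_on_mulR multilin_slot[OF Cons.prems(1), of "[]" vs]] Cons.prems Nil by simp
    show ?thesis using lin_on_diff[OF V l1 l2] Nil by simp
  next
    case Cons2: (Cons u' us'')
    have l1: "lin_on sc scv UNIV (\<lambda>x. f ((mul u u' # us'') @ x # vs))"
      using multilin_slot[OF Cons.prems(1), of "mul u u' # us''" vs] Cons.prems Cons2 by simp
    show ?thesis using lin_on_diff[OF V l1 l2] Cons2 by simp
  qed
qed

lemma multilin_bar_diff: "vector_space scv \<Longrightarrow> multilin scv m f \<Longrightarrow> multilin scv (Suc m) (bar_diff f)"
  unfolding multilin_def[of _ "Suc m"] using multilin_bar_diff_slot[of scv m f] by auto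

lemma rmul_append_Cons: "vs \<noteq> [] \<Longrightarrow> rmul c (us @ x # vs) = us @ x # rmul c vs"
  by (auto simp: rmul_def butlast_append)
lemma rmul_append_single: "rmul c (us @ [x]) = us @ [mul x c]"
  by (simp add: rmul_def)

lemma multilin_rmul: "multilin scv m f \<Longrightarrow> multilin scv m (\<lambda>ys. f (rmul c ys))"
  unfolding multilin_def
proof (intro allI impI)
  fix us vs :: "'a list"
  assume f: "\<forall>us vs. length us + length vs + 1 = m \<longrightarrow> lin_on sc scv UNIV (\<lambda>x. f (us @ x # vs))"
    and l: "length us + length vs + 1 = m"
  show "lin_on sc scv UNIV (\<lambda>x. f (rmul c (us @ x # vs)))"
  proof (cases "vs = []")
    case True
    then show ?thesis using lin_on_comp[OF lin_on_mulL f[rule_format, OF l]] by (simp add: rmul_append_single)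
  next
    case False
    have "length us + length (rmul c vs) + 1 = m" using l by simp
    then show ?thesis using f False by (simp add: rmul_append_Cons)
  qed
qed

lemma lin_on_rmul:
  assumes f: "multilin scv m f" and l: "length ys = m" and ne: "ys \<noteq> []"
  shows "lin_on sc scv UNIV (\<lambda>c. f (rmul c ys))"
proof -
  obtain zs z where ys: "ys = zs @ [z]" using ne rev_exhaust by blast
  have "lin_on sc scv UNIV (\<lambda>c. f (zs @ [mul z c]))"
    using lin_on_comp[OF lin_on_mulR multilin_slot[OF f, of zs "[]"]] l ys by simp
  then show ?thesis by (simp add: ys rmul_append_single)
qed

lemma multilin_lmul: "multilin scv m f \<Longrightarrow> multilin scv m (\<lambda>ys. f (lmul a ys))"
  unfolding multilin_def
proof (intro allI impI)
  fix us vs :: "'a list"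
  assume f: "\<forall>us vs. length us + length vs + 1 = m \<longrightarrow> lin_on sc scv UNIV (\<lambda>x. f (us @ x # vs))"
    and l: "length us + length vs + 1 = m"
  show "lin_on sc scv UNIV (\<lambda>x. f (lmul a (us @ x # vs)))"
  proof (cases us)
    case Nil
    then show ?thesis using lin_on_comp[OF lin_on_mulR f[rule_format, OF l]] by simp
  next
    case (Cons u us')
    have "length (mul a u # us') + length vs + 1 = m" using l Cons by simp
    then show ?thesis using f[rule_format, of "mul a u # us'" vs] Cons by simp
  qed
qed

lemma multilin_slot_0: "multilin scv m f \<Longrightarrow> vector_space scv \<Longrightarrow> length us + length vs + 1 = m \<Longrightarrow>
    f (us @ 0 # vs) = 0"
  using multilin_slot[of scv m f us vs] lin_on_0[of sc scv UNIV] by blast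

lemma multilin_frame: "multilin scv (Suc (Suc m)) F \<Longrightarrow> multilin scv m (\<lambda>xs. F (u # xs @ [v]))"
  unfolding multilin_def
proof (intro allI impI)
  fix us vs :: "'a list"
  assume F: "\<forall>us vs. length us + length vs + 1 = Suc (Suc m) \<longrightarrow> lin_on sc scv UNIV (\<lambda>x. F (us @ x # vs))"
    and l: "length us + length vs + 1 = m"
  have "length (u # us) + length (vs @ [v]) + 1 = Suc (Suc m)" using l by simp
  from F[rule_format, OF this] show "lin_on sc scv UNIV (\<lambda>x. F (u # (us @ x # vs) @ [v]))" by simp
qed

lemma multilinI_frame:
  assumes lin_first: "\<And>mid yl. length mid = m \<Longrightarrow> lin_on sc scv UNIV (\<lambda>x. f (x # mid @ [yl]))"
    and lin_last: "\<And>y0 mid. length mid = m \<Longrightarrow> lin_on sc scv UNIV (\<lambda>x. f (y0 # mid @ [x]))"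
    and ml_middle: "\<And>y0 yl. multilin scv m (\<lambda>mid. f (y0 # mid @ [yl]))"
  shows "multilin scv (Suc (Suc m)) f"
  unfolding multilin_def
proof (intro allI impI)
  fix us vs :: "'a list" assume l: "length us + length vs + 1 = Suc (Suc m)"
  show "lin_on sc scv UNIV (\<lambda>x. f (us @ x # vs))"
  proof (cases us)
    case Nil
    then have "vs \<noteq> []" using l by auto
    then obtain mid yl where "vs = mid @ [yl]" using rev_exhaust by blast
    then show ?thesis using lin_first[of mid yl] l Nil by simp
  next
    case (Cons y0 us')
    show ?thesis
    proof (cases "vs = []")
      case True then show ?thesis using lin_last[of us' y0] l Cons by simp
    next
      case False
      then obtain vs' yl where "vs = vs' @ [yl]" using rev_exhaust by blast
      then show ?thesis using multilin_slot[OF ml_middle[of y0 yl], of us' vs'] l Cons by simp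
    qed
  qed
qed

lemma bar_diff_closed_form:
  fixes f :: "'a list \<Rightarrow> 'k"
  shows "bar_diff f xs = (\<Sum>i<length xs - 1. (-1)^i * f (take i xs @ mul (xs ! i) (xs ! Suc i) # drop (i + 2) xs))"
proof (induction f xs rule: bar_diff.induct)
  case (1 f a0 a1 r)
  have "bar_diff f (a0 # a1 # r) = f (mul a0 a1 # r) - bar_diff (\<lambda>ys. f (a0 # ys)) (a1 # r)" by simp
  also have "\<dots> = f (mul a0 a1 # r) +
     (\<Sum>i<length r. (-1)^(Suc i) * f (take (Suc i) (a0 # a1 # r) @ mul ((a0 # a1 # r) ! Suc i) ((a0 # a1 # r) ! Suc (Suc i)) # drop (Suc i + 2) (a0 # a1 # r)))"
    using 1 by (simp add: sum_negf[symmetric])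
  also have "\<dots> = (\<Sum>i<Suc (length r). (-1)^i * f (take i (a0 # a1 # r) @ mul ((a0 # a1 # r) ! i) ((a0 # a1 # r) ! Suc i) # drop (i + 2) (a0 # a1 # r)))"
    by (simp only: sum.lessThan_Suc_shift) simp
  finally show ?case by simp
qed auto

definition bar_cochain :: "('a list \<Rightarrow> 'k) \<Rightarrow> 'a list \<Rightarrow> 'k" where
  "bar_cochain \<psi> zs = eps (hd zs) * \<psi> (butlast (tl zs)) * eps (last zs)"

lemma bar_cochain_frame: "bar_cochain \<psi> (y0 # M @ [yl]) = eps y0 * \<psi> M * eps yl"
  by (simp add: bar_cochain_def)

lemma bar_diff_bar_cochain:
  assumes l: "length xs = Suc n"
  shows "bar_diff (bar_cochain \<psi>) (y0 # xs @ [yl]) = eps y0 * hoch_diff mul eps n \<psi> xs * eps yl"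
proof -
  define L where "L = y0 # xs @ [yl]"
  define F where "F i = (-1)^i * bar_cochain \<psi> (take i L @ mul (L ! i) (L ! Suc i) # drop (i + 2) L)" for i
  obtain x0 xs' where xs: "xs = x0 # xs'" using l by (cases xs) auto
  have "bar_diff (bar_cochain \<psi>) L = (\<Sum>i<Suc (Suc n). F i)"
    unfolding bar_diff_closed_form F_def using l by (simp add: L_def)
  also have "\<dots> = F 0 + ((\<Sum>i<n. F (Suc i)) + F (Suc n))"
    by (subst sum.lessThan_Suc_shift) (simp only: sum.lessThan_Suc)
  finally have main: "bar_diff (bar_cochain \<psi>) L = F 0 + ((\<Sum>i<n. F (Suc i)) + F (Suc n))" .
  have F0: "F 0 = eps y0 * (eps x0 * \<psi> xs') * eps yl"
    by (simp add: F_def L_def xs eps_mul bar_cochain_def)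
  have FS: "F (Suc i) = eps y0 * ((-1)^(i+1) * \<psi> (take i xs @ mul (xs ! i) (xs ! Suc i) # drop (i + 2) xs)) * eps yl"
    if i: "i < n" for i
  proof -
    have "take (Suc i) L @ mul (L ! Suc i) (L ! Suc (Suc i)) # drop (Suc i + 2) L
        = y0 # (take i xs @ mul (xs ! i) (xs ! Suc i) # drop (i + 2) xs) @ [yl]"
      using i l by (simp add: L_def nth_append)
    then show ?thesis
      using bar_cochain_frame[of \<psi> y0 "take i xs @ mul (xs ! i) (xs ! Suc i) # drop (i + 2) xs" yl] by (simp add: F_def)
  qed
  have Fn: "F (Suc n) = eps y0 * ((-1)^(n+1) * \<psi> (butlast xs) * eps (last xs)) * eps yl"
  proof -
    have lx: "last xs = xs ! n" using l by (metis diff_Suc_1 last_conv_nth list.size(3) nat.distinct(1))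
    have "take (Suc n) L @ mul (L ! Suc n) (L ! Suc (Suc n)) # drop (Suc n + 2) L
        = y0 # butlast xs @ [mul (last xs) yl]"
      using l lx by (simp add: L_def nth_append butlast_conv_take)
    then show ?thesis by (simp add: F_def bar_cochain_frame eps_mul)
  qed
  have sumeq: "(\<Sum>i<n. F (Suc i)) = (\<Sum>i<n. eps y0 * ((-1)^(i+1) * \<psi> (take i xs @ mul (xs ! i) (xs ! Suc i) # drop (i + 2) xs)) * eps yl)"
    by (rule sum.cong) (simp_all add: FS)
  show ?thesis
    using main F0 sumeq Fn l
    by (simp add: L_def hoch_diff_def xs sum_distrib_left sum_distrib_right algebra_simps)
qed

lemma hoch_cochain_slot: "\<psi> \<in> hoch_cochains sc n \<Longrightarrow> length us + length vs + 1 = n \<Longrightarrow>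
    lin_on sc (*) UNIV (\<lambda>x. \<psi> (us @ x # vs))"
  by (simp add: hoch_cochains_def)
lemma hoch_cochain_length: "\<psi> \<in> hoch_cochains sc n \<Longrightarrow> length xs \<noteq> n \<Longrightarrow> \<psi> xs = 0"
  by (simp add: hoch_cochains_def)

lemma multilin_bar_cochain:
  assumes \<psi>: "\<psi> \<in> hoch_cochains sc n"
  shows "multilin (*) (Suc (Suc n)) (bar_cochain \<psi>)"
proof (rule multilinI_frame)
  fix y0 yl show "multilin (*) n (\<lambda>mid. bar_cochain \<psi> (y0 # mid @ [yl]))"
    using hoch_cochain_slot[OF \<psi>] by (auto simp: multilin_def bar_cochain_frame lin_on_def algebra_simps)
qed (simp_all add: bar_cochain_frame lin_on_def eps_add eps_sc algebra_simps)

lemma bar_cochain_lmul_rmul: "2 \<le> length ys \<Longrightarrow>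
    bar_cochain \<psi> (lmul a (rmul c ys)) = (eps a * eps c) * bar_cochain \<psi> ys"
proof -
  assume "2 \<le> length ys"
  then obtain y0 mid yl where ys: "ys = y0 # mid @ [yl]" using length_ge2_split by blast
  have "lmul a (rmul c ys) = mul a y0 # mid @ [mul yl c]" by (simp add: ys rmul_def butlast_append)
  then show ?thesis by (simp add: ys bar_cochain_frame eps_mul algebra_simps)
qed

lemma bar_cochain_add: "bar_cochain (\<lambda>xs. \<psi>1 xs + \<psi>2 xs) = (\<lambda>xs. bar_cochain \<psi>1 xs + bar_cochain \<psi>2 xs)"
  by (rule ext) (simp add: bar_cochain_def algebra_simps)
lemma bar_cochain_scale: "bar_cochain (\<lambda>xs. c * \<psi> xs) = (\<lambda>xs. c * bar_cochain \<psi> xs)"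
  by (rule ext) (simp add: bar_cochain_def algebra_simps)

lemma bar_diff_bar_cochain_cochain:
  assumes "length ys = Suc (Suc (Suc n))"
  shows "bar_diff (bar_cochain \<psi>) ys = bar_cochain (hoch_diff mul eps n \<psi>) ys"
proof -
  obtain y0 xs yl where ys: "ys = y0 # xs @ [yl]" using assms length_ge2_split[of ys] by fastforce
  then have l: "length xs = Suc n" using assms by simp
  show ?thesis using bar_diff_bar_cochain[OF l] by (simp add: ys bar_cochain_frame)
qed

lemma multilin_hd: "multilin sc 1 hd"
  by (auto simp: multilin_def lin_on_def)

lemma bar_diff_lmul_rmul: "bar_diff f (lmul a (rmul c ys)) = bar_diff (\<lambda>z. f (lmul a (rmul c z))) ys"
  by (simp add: bar_diff_lmul[symmetric] bar_diff_rmul[symmetric])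

lemma hoch_diff_add:
  "hoch_diff mul eps n (\<lambda>xs. f1 xs + f2 xs) = (\<lambda>xs. hoch_diff mul eps n f1 xs + hoch_diff mul eps n f2 xs)"
proof (rule ext)
  fix xs :: "'a list"
  define L where "L i = take i xs @ mul (xs ! i) (xs ! Suc i) # drop (i + 2) xs" for i
  have S: "(\<Sum>i<n. (-1) ^ (i + 1) * (f1 (L i) + f2 (L i))) = (\<Sum>i<n. (-1) ^ (i + 1) * f1 (L i)) + (\<Sum>i<n. (-1) ^ (i + 1) * f2 (L i))"
    by (simp only: distrib_left sum.distrib)
  show "hoch_diff mul eps n (\<lambda>xs. f1 xs + f2 xs) xs = hoch_diff mul eps n f1 xs + hoch_diff mul eps n f2 xs"
    unfolding hoch_diff_def L_def[symmetric] using S by (simp add: algebra_simps)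
qed

lemma hoch_cochains_add: "f1 \<in> hoch_cochains sc n \<Longrightarrow> f2 \<in> hoch_cochains sc n \<Longrightarrow>
    (\<lambda>xs. f1 xs + f2 xs) \<in> hoch_cochains sc n"
  unfolding hoch_cochains_def by (auto intro: lin_on_add[OF field_vector_space])

lemma hoch_coboundaries_add:
  assumes "u \<in> hoch_coboundaries sc mul eps n" "v \<in> hoch_coboundaries sc mul eps n"
  shows "(\<lambda>xs. u xs + v xs) \<in> hoch_coboundaries sc mul eps n"
proof (cases n)
  case 0 then show ?thesis using assms by (simp add: hoch_coboundaries_def)
next
  case (Suc m)
  then obtain f1 f2 where f: "f1 \<in> hoch_cochains sc m" "f2 \<in> hoch_cochains sc m"
    "u = hoch_diff mul eps m f1" "v = hoch_diff mul eps m f2"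
    using assms by (auto simp: hoch_coboundaries_def)
  then have "(\<lambda>xs. u xs + v xs) = hoch_diff mul eps m (\<lambda>xs. f1 xs + f2 xs)" by (simp add: hoch_diff_add)
  then show ?thesis using Suc hoch_cochains_add[OF f(1,2)] by (simp add: hoch_coboundaries_def)
qed

end

section \<open>Free bimodules of finite rank\<close>

locale free_yd_resolution = yd_augmented_algebra sc H act mul one eps
  for sc :: "'k::field \<Rightarrow> 'a::ab_group_add \<Rightarrow> 'a"
    and H :: "'g::ab_group_add \<Rightarrow> 'a set"
    and act :: "'g \<Rightarrow> 'a \<Rightarrow> 'a"
    and mul :: "'a \<Rightarrow> 'a \<Rightarrow> 'a" and one :: 'a and eps :: "'a \<Rightarrow> 'k" +
  fixes scp :: "'k \<Rightarrow> 'p::ab_group_add \<Rightarrow> 'p"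
    and P :: "nat \<Rightarrow> 'p set" and HP :: "nat \<Rightarrow> 'g \<Rightarrow> 'p set" and actp :: "'g \<Rightarrow> 'p \<Rightarrow> 'p"
    and lft :: "'a \<Rightarrow> 'p \<Rightarrow> 'p" and rgt :: "'p \<Rightarrow> 'a \<Rightarrow> 'p"
    and d :: "nat \<Rightarrow> 'p \<Rightarrow> 'p" and aug :: "'p \<Rightarrow> 'a"
  assumes vsp: "vector_space scp"
    and bimod: "\<forall>n. yd_bimod sc H act mul one scp (P n) (HP n) actp lft rgt"
    and diff: "\<forall>n. yd_bimod_hom scp (P (Suc n)) (HP (Suc n)) actp lft rgt scp (P n) (HP n) actp lft rgt (d n)"
    and augm: "yd_bimod_hom scp (P 0) (HP 0) actp lft rgt sc UNIV H act mul mul aug"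
    and exact_aug: "aug ` P 0 = UNIV"
    and exact_0: "{x \<in> P 0. aug x = 0} = d 0 ` P 1"
    and exact_n: "\<forall>n. {x \<in> P (Suc n). d n x = 0} = d (Suc n) ` P (Suc (Suc n))"
    and free: "\<forall>n. free_fin_graded sc lft rgt (P n) (HP n)"
begin

sublocale Pv: vector_space scp by (rule vsp)

lemma bimod_P: "yd_bimod sc H act mul one scp (P n) (HP n) actp lft rgt" using bimod by blast

lemma subsp_P: "subsp scp (P n)" using bimod_P[of n] by (simp add: yd_bimod_def yd_mod_def graded_on_def)
lemma P_0: "0 \<in> P n" and P_add: "x \<in> P n \<Longrightarrow> y \<in> P n \<Longrightarrow> x + y \<in> P n"
  and P_sc: "x \<in> P n \<Longrightarrow> scp c x \<in> P n"
  using subsp_P[of n] by (auto simp: subsp_def)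
lemma P_minus: "x \<in> P n \<Longrightarrow> -x \<in> P n"
  using P_sc[of x n "-1"] by simp
lemma P_diff: "x \<in> P n \<Longrightarrow> y \<in> P n \<Longrightarrow> x - y \<in> P n"
  using P_add P_minus by (metis diff_conv_add_uminus)
lemma P_sum: "(\<And>i. i \<in> I \<Longrightarrow> f i \<in> P n) \<Longrightarrow> sum f I \<in> P n"
  by (induction I rule: infinite_finite_induct) (auto intro: P_0 P_add)
lemma P_sum_list: "(\<And>t. t \<in> set ts \<Longrightarrow> f t \<in> P n) \<Longrightarrow> sum_list (map f ts) \<in> P n"
  by (induction ts) (auto intro: P_0 P_add)

lemma lft_P: "x \<in> P n \<Longrightarrow> lft a x \<in> P n" and rgt_P: "x \<in> P n \<Longrightarrow> rgt x a \<in> P n"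
  using bimod_P[of n] by (auto simp: yd_bimod_def)

lemma lft_add: "x \<in> P n \<Longrightarrow> y \<in> P n \<Longrightarrow> lft a (x + y) = lft a x + lft a y"
  and lft_sc: "x \<in> P n \<Longrightarrow> lft a (scp c x) = scp c (lft a x)"
  and lft_addL: "x \<in> P n \<Longrightarrow> lft (a + a') x = lft a x + lft a' x"
  and lft_scL: "x \<in> P n \<Longrightarrow> lft (sc c a) x = scp c (lft a x)"
  and rgt_add: "x \<in> P n \<Longrightarrow> y \<in> P n \<Longrightarrow> rgt (x + y) a = rgt x a + rgt y a"
  and rgt_sc: "x \<in> P n \<Longrightarrow> rgt (scp c x) a = scp c (rgt x a)"
  and rgt_addR: "x \<in> P n \<Longrightarrow> rgt x (a + a') = rgt x a + rgt x a'"
  and rgt_scR: "x \<in> P n \<Longrightarrow> rgt x (sc c a) = scp c (rgt x a)"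
  and lft_mul: "x \<in> P n \<Longrightarrow> lft (mul a b) x = lft a (lft b x)"
  and lft_one: "x \<in> P n \<Longrightarrow> lft one x = x"
  and rgt_mul: "x \<in> P n \<Longrightarrow> rgt x (mul a b) = rgt (rgt x a) b"
  and rgt_one: "x \<in> P n \<Longrightarrow> rgt x one = x"
  and lft_rgt: "x \<in> P n \<Longrightarrow> lft a (rgt x b) = rgt (lft a x) b"
  using bimod_P[of n] by (auto simp: yd_bimod_def lin_on_def)

lemma lft_0: "lft a 0 = 0"
  using lft_add[OF P_0 P_0, where a = a] by simp
lemma rgt_0: "rgt 0 a = 0"
  using rgt_add[OF P_0 P_0, where a = a] by simp
lemma lft_minus: "x \<in> P n \<Longrightarrow> lft a (-x) = - lft a x"
  using lft_add[OF _ P_minus, of x n x a] lft_0 by (metis add.right_inverse eq_neg_iff_add_eq_0)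
lemma rgt_minus: "x \<in> P n \<Longrightarrow> rgt (-x) a = - rgt x a"
  using rgt_add[OF _ P_minus, of x n x a] rgt_0 by (metis add.right_inverse eq_neg_iff_add_eq_0)
lemma lft_diff: "x \<in> P n \<Longrightarrow> y \<in> P n \<Longrightarrow> lft a (x - y) = lft a x - lft a y"
  by (metis P_minus diff_conv_add_uminus lft_add lft_minus)
lemma rgt_diff: "x \<in> P n \<Longrightarrow> y \<in> P n \<Longrightarrow> rgt (x - y) a = rgt x a - rgt y a"
  by (metis P_minus diff_conv_add_uminus rgt_add rgt_minus)
lemma lft_zeroL: "x \<in> P n \<Longrightarrow> lft 0 x = 0"
  using lft_addL[of x n 0 0] by simp
lemma rgt_zeroR: "x \<in> P n \<Longrightarrow> rgt x 0 = 0"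
  using rgt_addR[of x n 0 0] by simp
lemma lft_minusL: "x \<in> P n \<Longrightarrow> lft (-a) x = - lft a x"
  using lft_addL[of x n a "-a"] lft_zeroL[of x n] by (simp add: eq_neg_iff_add_eq_0 add.commute)

lemma lin_on_lft_rgt: "lin_on scp scp (P n) (\<lambda>v. lft a (rgt v c))"
  unfolding lin_on_def
proof (intro conjI ballI allI)
  fix x y assume x: "x \<in> P n" and y: "y \<in> P n"
  show "lft a (rgt (x + y) c) = lft a (rgt x c) + lft a (rgt y c)"
    by (simp add: rgt_add[OF x y] lft_add[OF rgt_P[OF x] rgt_P[OF y]])
next
  fix k x assume x: "x \<in> P n"
  show "lft a (rgt (scp k x) c) = scp k (lft a (rgt x c))"
    by (simp add: rgt_sc[OF x] lft_sc[OF rgt_P[OF x]])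
qed

lemma lft_sum: "x \<in> P n \<Longrightarrow> lft (sum f I) x = (\<Sum>i\<in>I. lft (f i) x)"
  by (induction I rule: infinite_finite_induct) (auto simp: lft_zeroL lft_addL)
lemma rgt_sum: "x \<in> P n \<Longrightarrow> rgt x (sum f I) = (\<Sum>i\<in>I. rgt x (f i))"
  by (induction I rule: infinite_finite_induct) (auto simp: rgt_zeroR rgt_addR)
lemma lft_sumP: "(\<And>i. i \<in> I \<Longrightarrow> f i \<in> P n) \<Longrightarrow> lft a (sum f I) = (\<Sum>i\<in>I. lft a (f i))"
  by (induction I rule: infinite_finite_induct) (auto simp: lft_0 intro!: trans[OF lft_add] P_sum)

lemma bimod_hom_d: "yd_bimod_hom scp (P (Suc n)) (HP (Suc n)) actp lft rgt scp (P n) (HP n) actp lft rgt (d n)"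
  using diff by blast
lemma d_P: "x \<in> P (Suc n) \<Longrightarrow> d n x \<in> P n"
  and d_add: "x \<in> P (Suc n) \<Longrightarrow> y \<in> P (Suc n) \<Longrightarrow> d n (x + y) = d n x + d n y"
  and d_sc: "x \<in> P (Suc n) \<Longrightarrow> d n (scp c x) = scp c (d n x)"
  and d_lft: "x \<in> P (Suc n) \<Longrightarrow> d n (lft a x) = lft a (d n x)"
  and d_rgt: "x \<in> P (Suc n) \<Longrightarrow> d n (rgt x a) = rgt (d n x) a"
  using bimod_hom_d[of n] by (auto simp: yd_bimod_hom_def lin_on_def)
lemma d_0: "d n 0 = 0"
  using d_add[OF P_0 P_0] by simp
lemma d_minus: "x \<in> P (Suc n) \<Longrightarrow> d n (-x) = - d n x"
  using d_add[OF _ P_minus, of x n x] d_0 by (metis add.right_inverse eq_neg_iff_add_eq_0)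
lemma d_diff: "x \<in> P (Suc n) \<Longrightarrow> y \<in> P (Suc n) \<Longrightarrow> d n (x - y) = d n x - d n y"
  by (metis P_minus diff_conv_add_uminus d_add d_minus)

lemma aug_add: "x \<in> P 0 \<Longrightarrow> y \<in> P 0 \<Longrightarrow> aug (x + y) = aug x + aug y"
  and aug_lft: "x \<in> P 0 \<Longrightarrow> aug (lft a x) = mul a (aug x)"
  and aug_rgt: "x \<in> P 0 \<Longrightarrow> aug (rgt x a) = mul (aug x) a"
  using augm by (auto simp: yd_bimod_hom_def lin_on_def)

lemma d_d: "x \<in> P (Suc (Suc n)) \<Longrightarrow> d n (d (Suc n) x) = 0"
  using exact_n d_P by blast
lemma aug_d0: "x \<in> P 1 \<Longrightarrow> aug (d 0 x) = 0"
  using exact_0 by blast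
lemma ker_d_subset_image: "x \<in> P (Suc n) \<Longrightarrow> d n x = 0 \<Longrightarrow> x \<in> d (Suc n) ` P (Suc (Suc n))"
  using exact_n by blast
lemma ker_aug_subset_image: "x \<in> P 0 \<Longrightarrow> aug x = 0 \<Longrightarrow> x \<in> d 0 ` P 1"
  using exact_0 by blast

definition gen_sum :: "('a \<times> 'p \<times> 'a) list \<Rightarrow> 'p" where
  "gen_sum ts = sum_list (map (\<lambda>(a, b, c). lft a (rgt b c)) ts)"

definition free_basis :: "nat \<Rightarrow> 'p set \<Rightarrow> bool" where
  "free_basis n B \<longleftrightarrow> finite B \<and> B \<subseteq> P n \<and> (\<forall>b\<in>B. \<exists>s. b \<in> HP n s) \<and>
     (\<forall>x\<in>P n. \<exists>ts. (\<forall>(a, b, c)\<in>set ts. b \<in> B) \<and> x = gen_sum ts) \<and>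
     (\<forall>ts. (\<forall>(a, b, c)\<in>set ts. b \<in> B) \<and> gen_sum ts = 0 \<longrightarrow>
        (\<forall>b0\<in>B. \<forall>\<beta>. bilin sc \<beta> \<longrightarrow> sum_list (map (\<lambda>(a, b, c). if b = b0 then \<beta> a c else 0) ts) = 0))"

definition basis :: "nat \<Rightarrow> 'p set" where "basis n = (SOME B. free_basis n B)"

lemma free_basis_basis: "free_basis n (basis n)"
proof -
  have "free_fin_graded sc lft rgt (P n) (HP n)" using free by blast
  then have "\<exists>B. free_basis n B" unfolding free_fin_graded_def free_basis_def gen_sum_def .
  then show ?thesis unfolding basis_def by (rule someI_ex)
qed

definition on_basis :: "nat \<Rightarrow> ('a \<times> 'p \<times> 'a) list \<Rightarrow> bool" where
  "on_basis n ts \<longleftrightarrow> (\<forall>(a, b, c)\<in>set ts. b \<in> basis n)"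

lemma finite_basis: "finite (basis n)"
  and basis_in_P: "b \<in> basis n \<Longrightarrow> b \<in> P n"
  and basis_homogeneous: "b \<in> basis n \<Longrightarrow> \<exists>s. b \<in> HP n s"
  using free_basis_basis[of n] unfolding free_basis_def by blast+

lemma basis_spans: "x \<in> P n \<Longrightarrow> \<exists>ts. on_basis n ts \<and> gen_sum ts = x"
  using free_basis_basis[of n] unfolding free_basis_def on_basis_def by metis

lemma basis_independent: "on_basis n ts \<Longrightarrow> gen_sum ts = 0 \<Longrightarrow> b0 \<in> basis n \<Longrightarrow>
    bilin sc \<beta> \<Longrightarrow>
    sum_list (map (\<lambda>(a, b, c). if b = b0 then \<beta> a c else 0) ts) = 0"
  using free_basis_basis[of n] unfolding free_basis_def on_basis_def by blast

definition basis_rep :: "nat \<Rightarrow> 'p \<Rightarrow> ('a \<times> 'p \<times> 'a) list" where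
  "basis_rep n x = (SOME ts. on_basis n ts \<and> gen_sum ts = x)"

lemma basis_rep_spec: assumes "x \<in> P n" shows "on_basis n (basis_rep n x) \<and> gen_sum (basis_rep n x) = x"
proof -
  obtain ts where "on_basis n ts \<and> gen_sum ts = x" using basis_spans[OF assms] by blast
  then show ?thesis unfolding basis_rep_def by (rule someI)
qed

(* free_ext n T extends T, given on the terms a b c with b a generator, along a chosen
   representation; by free_ext_gen_sum the choice is irrelevant when T is bilinear. *)
definition free_ext :: "nat \<Rightarrow> ('a \<Rightarrow> 'p \<Rightarrow> 'a \<Rightarrow> 'v::ab_group_add) \<Rightarrow> 'p \<Rightarrow> 'v" where
  "free_ext n T x = sum_list (map (\<lambda>(a, b, c). T a b c) (basis_rep n x))"

definition bilinear_on_basis :: "('k \<Rightarrow> 'v::ab_group_add \<Rightarrow> 'v) \<Rightarrow> nat \<Rightarrow> ('a \<Rightarrow> 'p \<Rightarrow> 'a \<Rightarrow> 'v) \<Rightarrow> bool" where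
  "bilinear_on_basis scv n T \<longleftrightarrow> (\<forall>b\<in>basis n. \<forall>c. lin_on sc scv UNIV (\<lambda>a. T a b c)) \<and>
                      (\<forall>b\<in>basis n. \<forall>a. lin_on sc scv UNIV (\<lambda>c. T a b c))"

lemma on_basis_append[simp]: "on_basis n (xs @ ys) \<longleftrightarrow> on_basis n xs \<and> on_basis n ys"
  unfolding on_basis_def by (simp only: set_append ball_Un)
lemma on_basis_Cons[simp]: "on_basis n ((a, b, c) # ts) \<longleftrightarrow> b \<in> basis n \<and> on_basis n ts"
  by (auto simp: on_basis_def)
lemma on_basis_Nil[simp]: "on_basis n []" by (simp add: on_basis_def)

lemma gen_sum_Nil[simp]: "gen_sum [] = 0" and gen_sum_Cons[simp]: "gen_sum ((a, b, c) # ts) = lft a (rgt b c) + gen_sum ts"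
  and gen_sum_append[simp]: "gen_sum (xs @ ys) = gen_sum xs + gen_sum ys"
  by (auto simp: gen_sum_def)

lemma gen_sum_scale: "on_basis n ts \<Longrightarrow> gen_sum (map (\<lambda>(a, b, c'). (sc c a, b, c')) ts) = scp c (gen_sum ts)"
proof (induction ts)
  case (Cons t ts)
  obtain a b c' where t: "t = (a, b, c')" and b: "b \<in> basis n" and i: "on_basis n ts"
    using Cons.prems by (cases t) auto
  have "gen_sum (map (\<lambda>(a, b, c'). (sc c a, b, c')) (t # ts))
      = lft (sc c a) (rgt b c') + gen_sum (map (\<lambda>(a, b, c'). (sc c a, b, c')) ts)" by (simp add: t)
  also have "\<dots> = scp c (lft a (rgt b c')) + scp c (gen_sum ts)"
    using Cons.IH[OF i] lft_scL[OF rgt_P[OF basis_in_P[OF b]]] by simp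
  also have "\<dots> = scp c (gen_sum (t # ts))" by (simp add: t Pv.scale_right_distrib)
  finally show ?case .
qed simp

lemma gen_term_in_P: "b \<in> basis n \<Longrightarrow> lft a (rgt b c) \<in> P n"
  using basis_in_P lft_P rgt_P by blast

lemma gen_sum_in_P: "on_basis n ts \<Longrightarrow> gen_sum ts \<in> P n"
  by (induction ts) (auto intro!: P_add P_0 gen_term_in_P)

lemma sum_list_split_basis:
  "on_basis n ts \<Longrightarrow> sum_list (map (\<lambda>(a, b, c). T a b c) ts) =
     (\<Sum>b0\<in>basis n. sum_list (map (\<lambda>(a, b, c). if b = b0 then T a b0 c else 0) ts))"
proof (induction ts)
  case Nil then show ?case by simp
next
  case (Cons t ts)
  obtain a b c where t: "t = (a, b, c)" by (cases t) auto
  have b: "b \<in> basis n" and i: "on_basis n ts" using Cons.prems t by auto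
  have e: "(\<Sum>b0\<in>basis n. (if b = b0 then T a b0 c else 0)) = T a b c"
    using b finite_basis[of n] by (simp add: sum.delta)
  have "sum_list (map (\<lambda>(a, b, c). T a b c) (t # ts)) = T a b c + sum_list (map (\<lambda>(a, b, c). T a b c) ts)"
    by (simp add: t)
  also have "\<dots> = (\<Sum>b0\<in>basis n. (if b = b0 then T a b0 c else 0)) +
      (\<Sum>b0\<in>basis n. sum_list (map (\<lambda>(a, b, c). if b = b0 then T a b0 c else 0) ts))"
    using Cons.IH[OF i] e by simp
  also have "\<dots> = (\<Sum>b0\<in>basis n. (if b = b0 then T a b0 c else 0) + sum_list (map (\<lambda>(a, b, c). if b = b0 then T a b0 c else 0) ts))"
    by (rule sum.distrib[symmetric])
  also have "\<dots> = (\<Sum>b0\<in>basis n. sum_list (map (\<lambda>(a, b, c). if b = b0 then T a b0 c else 0) (t # ts)))"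
    by (simp add: t)
  finally show ?case .
qed

(* The freeness hypothesis only tests relations against k-valued bilinear forms; a sum with values
   in a vector space is reduced to these by composing with all linear functionals. *)
lemma free_ext_well_defined:
  fixes T :: "'a \<Rightarrow> 'p \<Rightarrow> 'a \<Rightarrow> 'v::ab_group_add" and scv :: "'k \<Rightarrow> 'v \<Rightarrow> 'v"
  assumes V: "vector_space scv" and g: "bilinear_on_basis scv n T" and ts: "on_basis n ts" "gen_sum ts = 0"
  shows "sum_list (map (\<lambda>(a, b, c). T a b c) ts) = 0"
proof -
  have "sum_list (map (\<lambda>(a, b, c). if b = b0 then T a b0 c else 0) ts) = 0" if b0: "b0 \<in> basis n" for b0
  proof (rule zero_if_functionals_vanish[OF V])
    fix l :: "'v \<Rightarrow> 'k" assume l: "lin_on scv (*) UNIV l"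
    have la: "\<forall>x y. l (x + y) = l x + l y" using l by (simp add: lin_on_def)
    have l0: "l 0 = 0" using la by (metis add.right_neutral add_left_cancel)
    have bil: "bilin sc (\<lambda>a c. l (T a b0 c))"
      using g b0 l unfolding bilin_def bilinear_on_basis_def lin_on_def by auto
    have "l (sum_list (map (\<lambda>(a, b, c). if b = b0 then T a b0 c else 0) ts))
       = sum_list (map (\<lambda>t. l ((\<lambda>(a, b, c). if b = b0 then T a b0 c else 0) t)) ts)"
      by (rule additive_sum_list[OF la])
    also have "map (\<lambda>t. l ((\<lambda>(a, b, c). if b = b0 then T a b0 c else 0) t)) ts
       = map (\<lambda>(a, b, c). if b = b0 then l (T a b0 c) else 0) ts"
      by (rule map_cong) (auto simp: l0 split: prod.splits)
    also have "sum_list \<dots> = 0" using basis_independent[OF ts b0 bil] .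
    finally show "l (sum_list (map (\<lambda>(a, b, c). if b = b0 then T a b0 c else 0) ts)) = 0" .
  qed
  then show ?thesis using sum_list_split_basis[OF ts(1), of T] by simp
qed

lemma bilinear_on_basis_minus:
  assumes "bilinear_on_basis scv n T" "b \<in> basis n" shows "T (-a) b c = - T a b c"
proof -
  have "\<forall>x\<in>UNIV. \<forall>y\<in>UNIV. T (x + y) b c = T x b c + T y b c"
    using assms by (auto simp: bilinear_on_basis_def lin_on_def)
  then show ?thesis using additive_on_minus[of UNIV "\<lambda>a. T a b c"] by auto
qed

lemma gen_sum_uminus: "on_basis n ts \<Longrightarrow> gen_sum (map (\<lambda>(a, b, c). (-a, b, c)) ts) = - gen_sum ts"
proof (induction ts)
  case (Cons t ts)
  obtain a b c' where t: "t = (a, b, c')" and b: "b \<in> basis n" and i: "on_basis n ts"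
    using Cons.prems by (cases t) auto
  show ?case using Cons.IH[OF i] lft_minusL[OF rgt_P[OF basis_in_P[OF b]]] by (simp add: t)
qed simp

lemma free_ext_gen_sum:
  fixes T :: "'a \<Rightarrow> 'p \<Rightarrow> 'a \<Rightarrow> 'v::ab_group_add" and scv :: "'k \<Rightarrow> 'v \<Rightarrow> 'v"
  assumes V: "vector_space scv" and g: "bilinear_on_basis scv n T" and ts: "on_basis n ts"
  shows "free_ext n T (gen_sum ts) = sum_list (map (\<lambda>(a, b, c). T a b c) ts)"
proof -
  define r where "r = basis_rep n (gen_sum ts)"
  have r: "on_basis n r" "gen_sum r = gen_sum ts" using basis_rep_spec[OF gen_sum_in_P[OF ts]] by (auto simp: r_def)
  define ts' where "ts' = ts @ map (\<lambda>(a, b, c). (-a, b, c)) r"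
  have "on_basis n ts'" using ts r by (auto simp: ts'_def on_basis_def)
  moreover have "gen_sum ts' = 0" using gen_sum_uminus[OF r(1)] r by (simp add: ts'_def)
  ultimately have "sum_list (map (\<lambda>(a, b, c). T a b c) ts') = 0" by (rule free_ext_well_defined[OF V g])
  moreover have "sum_list (map (\<lambda>(a, b, c). T a b c) (map (\<lambda>(a, b, c). (-a, b, c)) r))
     = - sum_list (map (\<lambda>(a, b, c). T a b c) r)"
    using r(1) by (induction r) (auto simp: bilinear_on_basis_minus[OF g])
  ultimately have "sum_list (map (\<lambda>(a, b, c). T a b c) ts) + - sum_list (map (\<lambda>(a, b, c). T a b c) r) = 0"
    by (simp only: ts'_def map_append sum_list_append)
  then show ?thesis by (simp add: free_ext_def r_def[symmetric] add_eq_0_iff)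
qed

lemma free_ext_basis:
  assumes V: "vector_space scv" and g: "bilinear_on_basis scv n T" and b: "b \<in> basis n"
  shows "free_ext n T b = T one b one"
  using free_ext_gen_sum[OF V g, of "[(one, b, one)]"] b lft_one[OF basis_in_P[OF b]] rgt_one[OF basis_in_P[OF b]]
  by simp

lemma free_ext_add:
  assumes V: "vector_space scv" and g: "bilinear_on_basis scv n T" and x: "x \<in> P n" and y: "y \<in> P n"
  shows "free_ext n T (x + y) = free_ext n T x + free_ext n T y"
proof -
  have "free_ext n T (gen_sum (basis_rep n x @ basis_rep n y)) = sum_list (map (\<lambda>(a, b, c). T a b c) (basis_rep n x @ basis_rep n y))"
    using basis_rep_spec[OF x] basis_rep_spec[OF y] by (intro free_ext_gen_sum[OF V g]) auto
  then show ?thesis using basis_rep_spec[OF x] basis_rep_spec[OF y] by (simp add: free_ext_def)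
qed

lemma free_ext_scale:
  assumes V: "vector_space scv" and g: "bilinear_on_basis scv n T" and x: "x \<in> P n"
  shows "free_ext n T (scp c x) = scv c (free_ext n T x)"
proof -
  define ts where "ts = map (\<lambda>(a, b, c'). (sc c a, b, c')) (basis_rep n x)"
  have its: "on_basis n ts" using basis_rep_spec[OF x] by (auto simp: ts_def on_basis_def)
  have "gen_sum ts = scp c (gen_sum (basis_rep n x))" unfolding ts_def using gen_sum_scale basis_rep_spec[OF x] by blast
  then have "gen_sum ts = scp c x" using basis_rep_spec[OF x] by simp
  then have "free_ext n T (scp c x) = sum_list (map (\<lambda>(a, b, c). T a b c) ts)"
    using free_ext_gen_sum[OF V g its] by simp
  also have "\<dots> = scv c (free_ext n T x)"
  proof -
    have "\<forall>t\<in>set (basis_rep n x). (\<lambda>(a, b, c'). T (sc c a) b c') t = scv c ((\<lambda>(a, b, c). T a b c) t)"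
      using basis_rep_spec[OF x] g unfolding on_basis_def bilinear_on_basis_def lin_on_def by auto
    then show ?thesis unfolding free_ext_def ts_def scale_sum_list[OF V]
      by (simp add: case_prod_unfold cong: map_cong)
  qed
  finally show ?thesis .
qed

lemma lin_on_free_ext:
  assumes V: "vector_space scv" and g: "bilinear_on_basis scv n T"
  shows "lin_on scp scv (P n) (free_ext n T)"
  using free_ext_add[OF V g] free_ext_scale[OF V g] by (auto simp: lin_on_def)

lemma free_ext_cong: "x \<in> P n \<Longrightarrow> (\<And>a b c. b \<in> basis n \<Longrightarrow> T a b c = T' a b c) \<Longrightarrow>
    free_ext n T x = free_ext n T' x"
  using basis_rep_spec[of x n] unfolding free_ext_def on_basis_def
  by (intro arg_cong[where f=sum_list] map_cong) auto

lemma free_ext_natural: "\<forall>x y. l (x + y) = l x + l y \<Longrightarrow>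
    l (free_ext n T x) = free_ext n (\<lambda>a b c. l (T a b c)) x"
  unfolding free_ext_def by (simp add: additive_sum_list case_prod_unfold)

lemma free_ext_add_family: "free_ext n (\<lambda>a b c. T a b c + T' a b c) x = free_ext n T x + free_ext n T' x"
  unfolding free_ext_def by (simp add: case_prod_unfold sum_list_addf)

lemma free_ext_in:
  assumes "x \<in> P n" "\<And>a b c. b \<in> basis n \<Longrightarrow> T a b c \<in> S" "0 \<in> S" "\<And>u v. u \<in> S \<Longrightarrow> v \<in> S \<Longrightarrow> u + v \<in> S"
  shows "free_ext n T x \<in> S"
proof -
  have "\<forall>t\<in>set ts. (\<lambda>(a, b, c). T a b c) t \<in> S \<Longrightarrow> sum_list (map (\<lambda>(a, b, c). T a b c) ts) \<in> S" for ts
    by (induction ts) (auto simp: assms(3,4))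
  then show ?thesis using basis_rep_spec[OF assms(1)] assms(2) unfolding free_ext_def on_basis_def by fastforce
qed

lemma gen_sum_lft_rgt: "on_basis n ts \<Longrightarrow>
    lft a (rgt (gen_sum ts) c) = gen_sum (map (\<lambda>(a', b, c'). (mul a a', b, mul c' c)) ts)"
proof (induction ts)
  case Nil then show ?case by (simp add: lft_0 rgt_0)
next
  case (Cons t ts)
  obtain a' b c' where t: "t = (a', b, c')" and b: "b \<in> basis n" and i: "on_basis n ts"
    using Cons.prems by (cases t) auto
  have tP: "lft a' (rgt b c') \<in> P n" by (rule gen_term_in_P[OF b])
  have "lft a (rgt (gen_sum (t # ts)) c) = lft a (rgt (lft a' (rgt b c')) c) + lft a (rgt (gen_sum ts) c)"
    by (simp add: t rgt_add[OF tP gen_sum_in_P[OF i]] lft_add[OF rgt_P[OF tP] rgt_P[OF gen_sum_in_P[OF i]]])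
  also have "lft a (rgt (lft a' (rgt b c')) c) = lft (mul a a') (rgt b (mul c' c))"
  proof -
    have y: "rgt b c' \<in> P n" using basis_in_P[OF b] by (rule rgt_P)
    have "lft a (rgt (lft a' (rgt b c')) c) = lft a (lft a' (rgt (rgt b c') c))"
      by (simp add: lft_rgt[OF y])
    also have "\<dots> = lft (mul a a') (rgt (rgt b c') c)" by (simp add: lft_mul[OF rgt_P[OF y]])
    also have "\<dots> = lft (mul a a') (rgt b (mul c' c))" by (simp add: rgt_mul[OF basis_in_P[OF b]])
    finally show ?thesis .
  qed
  finally show ?case using Cons.IH[OF i] by (simp add: t)
qed

lemma free_ext_lft_rgt:
  assumes V: "vector_space scv" and g: "bilinear_on_basis scv n T" and x: "x \<in> P n"
  shows "free_ext n T (lft a (rgt x c)) = free_ext n (\<lambda>a' b c'. T (mul a a') b (mul c' c)) x"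
proof -
  define ts where "ts = map (\<lambda>(a', b, c'). (mul a a', b, mul c' c)) (basis_rep n x)"
  have its: "on_basis n ts" using basis_rep_spec[OF x] by (auto simp: ts_def on_basis_def)
  have "gen_sum ts = lft a (rgt x c)" using gen_sum_lft_rgt[of n "basis_rep n x" a c] basis_rep_spec[OF x] by (simp add: ts_def)
  then have "free_ext n T (lft a (rgt x c)) = sum_list (map (\<lambda>(a, b, c). T a b c) ts)"
    using free_ext_gen_sum[OF V g its] by simp
  then show ?thesis by (simp add: free_ext_def ts_def case_prod_unfold comp_def)
qed

lemma free_ext_unique:
  assumes add: "\<forall>x\<in>P n. \<forall>y\<in>P n. f (x + y) = f x + f y"
    and gen: "\<And>a b c. b \<in> basis n \<Longrightarrow> f (lft a (rgt b c)) = T a b c" and x: "x \<in> P n"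
  shows "f x = free_ext n T x"
proof -
  have f0: "f 0 = 0" using add P_0 by (metis add.right_neutral add_left_cancel)
  have "on_basis n ts \<Longrightarrow> f (gen_sum ts) = sum_list (map (\<lambda>(a, b, c). T a b c) ts)" for ts
  proof (induction ts)
    case (Cons t ts)
    obtain a b c where t: "t = (a, b, c)" and b: "b \<in> basis n" and i: "on_basis n ts"
      using Cons.prems by (cases t) auto
    show ?case using add gen_term_in_P[OF b] gen_sum_in_P[OF i] Cons.IH[OF i] gen[OF b] by (simp add: t)
  qed (simp add: f0)
  then show ?thesis using basis_rep_spec[OF x] unfolding free_ext_def by metis
qed

lemma free_ext_sum_family: "free_ext n (\<lambda>a b c. \<Sum>h\<in>F. T h a b c) x = (\<Sum>h\<in>F. free_ext n (T h) x)"
  unfolding free_ext_def by (induction F rule: infinite_finite_induct) (auto simp: case_prod_unfold sum_list_addf)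

lemma free_ext_natural_on:
  assumes l: "\<forall>u\<in>S. \<forall>v\<in>S. l (u + v) = l u + l v" and S0: "0 \<in> S" and Sadd: "\<forall>u\<in>S. \<forall>v\<in>S. u + v \<in> S"
    and T: "\<And>a b c. b \<in> basis n \<Longrightarrow> T a b c \<in> S" and x: "x \<in> P n"
  shows "l (free_ext n T x) = free_ext n (\<lambda>a b c. l (T a b c)) x"
proof -
  have l0: "l 0 = 0" using l S0 by (metis add.right_neutral add_left_cancel)
  have "\<forall>t\<in>set ts. (\<lambda>(a, b, c). T a b c) t \<in> S \<Longrightarrow>
    l (sum_list (map (\<lambda>(a, b, c). T a b c) ts)) = sum_list (map (\<lambda>(a, b, c). l (T a b c)) ts)" for ts
  proof (induction ts)
    case Nil then show ?case by (simp add: l0)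
  next
    case (Cons t ts)
    have "sum_list (map (\<lambda>(a, b, c). T a b c) ts) \<in> S"
      using Cons.prems by (induction ts) (auto simp: S0 Sadd)
    then show ?case using Cons l by (auto simp: case_prod_unfold)
  qed
  moreover have "\<forall>t\<in>set (basis_rep n x). (\<lambda>(a, b, c). T a b c) t \<in> S"
    using basis_rep_spec[OF x] T unfolding on_basis_def by auto
  ultimately show ?thesis unfolding free_ext_def by (simp add: case_prod_unfold)
qed

section \<open>Bimodule maps to the ground field\<close>

definition bimod_functional :: "nat \<Rightarrow> ('p \<Rightarrow> 'k) \<Rightarrow> bool" where
  "bimod_functional n f \<longleftrightarrow> (\<forall>x. x \<notin> P n \<longrightarrow> f x = 0) \<and> lin_on scp (*) (P n) f \<and>
     (\<forall>a. \<forall>x\<in>P n. f (lft a x) = eps a * f x \<and> f (rgt x a) = f x * eps a)"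

lemma bimod_functional_zero: "bimod_functional n (\<lambda>x. 0)" by (simp add: bimod_functional_def lin_on_def)

lemma bimod_functional_plus: "bimod_functional n f \<Longrightarrow> bimod_functional n g \<Longrightarrow>
    bimod_functional n (\<lambda>x. f x + g x)"
  by (simp add: bimod_functional_def lin_on_def algebra_simps lft_P rgt_P)

lemma bimod_functional_sum: "finite F \<Longrightarrow> (\<And>h. h \<in> F \<Longrightarrow> bimod_functional n (fs h)) \<Longrightarrow>
    bimod_functional n (\<lambda>x. \<Sum>h\<in>F. fs h x)"
  by (induction F rule: finite_induct) (auto simp: bimod_functional_zero bimod_functional_plus)

lemma bimod_functional_if_homAA: "f \<in> homAA scp (P n) (HP n) lft rgt eps \<Longrightarrow> bimod_functional n f"
proof -
  assume "f \<in> homAA scp (P n) (HP n) lft rgt eps"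
  then obtain F fs where F: "finite F" "\<forall>h\<in>F. fs h \<in> homAA_deg scp (P n) (HP n) lft rgt eps h"
    "f = (\<lambda>x. \<Sum>h\<in>F. fs h x)" unfolding homAA_def by blast
  have "bimod_functional n (fs h)" if "h \<in> F" for h
    using F(2) that unfolding homAA_deg_def bimod_functional_def by blast
  then show ?thesis using bimod_functional_sum[OF F(1)] F(3) by blast
qed

lemma bimod_functional_lin: "bimod_functional n f \<Longrightarrow> lin_on scp (*) (P n) f" by (simp add: bimod_functional_def)
lemma bimod_functional_outside: "bimod_functional n f \<Longrightarrow> x \<notin> P n \<Longrightarrow> f x = 0"
  by (simp add: bimod_functional_def)
lemma bimod_functional_lft: "bimod_functional n f \<Longrightarrow> x \<in> P n \<Longrightarrow> f (lft a x) = eps a * f x"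
  by (simp add: bimod_functional_def)
lemma bimod_functional_rgt: "bimod_functional n f \<Longrightarrow> x \<in> P n \<Longrightarrow> f (rgt x a) = f x * eps a"
  by (simp add: bimod_functional_def)
lemma bimod_functional_add: "bimod_functional n f \<Longrightarrow> x \<in> P n \<Longrightarrow> y \<in> P n \<Longrightarrow>
    f (x + y) = f x + f y"
  by (simp add: bimod_functional_def lin_on_def)
lemma bimod_functional_0: "bimod_functional n f \<Longrightarrow> f 0 = 0"
proof -
  assume "bimod_functional n f"
  then have "f (0 + 0) = f 0 + f 0" using bimod_functional_add[OF _ P_0 P_0] by blast
  then show ?thesis by (metis add.right_neutral add_left_cancel)
qed

lemma graded_A: "graded_on sc UNIV H"
  using alg by (simp add: yd_aug_alg_def yd_mod_def)

lemma eps_homogeneous: "s \<noteq> 0 \<Longrightarrow> x \<in> H s \<Longrightarrow> eps x = 0"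
  using alg by (simp add: yd_aug_alg_def)

definition hcomp :: "'a \<Rightarrow> 'g \<Rightarrow> 'a" where
  "hcomp a = (THE c. finite {g. c g \<noteq> 0} \<and> (\<forall>g. c g \<in> H g) \<and> a = (\<Sum>g\<in>{g. c g \<noteq> 0}. c g))"

lemma hcomp_spec:
  "finite {g. hcomp a g \<noteq> 0} \<and> (\<forall>g. hcomp a g \<in> H g) \<and> a = (\<Sum>g\<in>{g. hcomp a g \<noteq> 0}. hcomp a g)"
proof -
  have "\<exists>!c. finite {g. c g \<noteq> 0} \<and> (\<forall>g. c g \<in> H g) \<and> a = (\<Sum>g\<in>{g. c g \<noteq> 0}. c g)"
    using graded_A unfolding graded_on_def by blast
  then show ?thesis unfolding hcomp_def by (rule theI')
qed

lemma graded_P: "graded_on scp (P n) (HP n)"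
  using bimod_P[of n] by (simp add: yd_bimod_def yd_mod_def)

lemma subsp_HP: "subsp scp (HP n g)" and HP_P: "HP n g \<subseteq> P n"
  using graded_P[of n] unfolding graded_on_def by blast+

lemma lft_homogeneous: "a \<in> H s \<Longrightarrow> x \<in> HP n t \<Longrightarrow> lft a x \<in> HP n (s + t)"
  and rgt_homogeneous: "a \<in> H s \<Longrightarrow> x \<in> HP n t \<Longrightarrow> rgt x a \<in> HP n (t + s)"
  using bimod_P[of n] unfolding yd_bimod_def by blast+

lemma HP_0: "0 \<in> HP n g" and HP_add: "x \<in> HP n g \<Longrightarrow> y \<in> HP n g \<Longrightarrow> x + y \<in> HP n g"
  using subsp_HP[of n g] by (auto simp: subsp_def)

definition basis_deg :: "nat \<Rightarrow> 'p \<Rightarrow> 'g" where "basis_deg n b = (SOME s. b \<in> HP n s)"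
lemma basis_deg_spec: "b \<in> basis n \<Longrightarrow> b \<in> HP n (basis_deg n b)"
  unfolding basis_deg_def using basis_homogeneous by (rule someI_ex)

definition hdeg :: "'a \<Rightarrow> 'g" where "hdeg a = (SOME g. a \<in> H g)"

lemma homogeneous_component_sum_list:
  assumes x: "x \<in> HP n s" and xs: "x = sum_list (map y js)" and hj: "\<forall>j\<in>set js. y j \<in> HP n (\<delta> j)"
  shows "sum_list (map (\<lambda>j. if \<delta> j = t then y j else 0) js) = (if t = s then x else 0)"
proof -
  define c where "c g = sum_list (map (\<lambda>j. if \<delta> j = g then y j else 0) js)" for g
  have cH: "\<forall>g. c g \<in> HP n g"
    unfolding c_def using hj by (induction js) (auto intro: HP_add HP_0)
  have supp: "{g. c g \<noteq> 0} \<subseteq> \<delta> ` set js"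
  proof
    fix g assume "g \<in> {g. c g \<noteq> 0}"
    then have "c g \<noteq> 0" by simp
    then show "g \<in> \<delta> ` set js" unfolding c_def by (induction js) (auto split: if_splits)
  qed
  have fin: "finite {g. c g \<noteq> 0}" by (rule finite_subset[OF supp]) auto
  have regroup: "finite D \<Longrightarrow> \<delta> ` set js \<subseteq> D \<Longrightarrow> (\<Sum>g\<in>D. c g) = sum_list (map y js)" for D
    unfolding c_def
  proof (induction js)
    case (Cons j js)
    have "(\<Sum>g\<in>D. (if \<delta> j = g then y j else 0)) = y j" using Cons.prems by (simp add: sum.delta)
    then show ?case using Cons by (simp add: sum.distrib)
  qed simp
  have "(\<Sum>g\<in>{g. c g \<noteq> 0}. c g) = (\<Sum>g\<in>\<delta> ` set js. c g)"
    by (rule sum.mono_neutral_left) (use supp in auto)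
  then have "x = (\<Sum>g\<in>{g. c g \<noteq> 0}. c g)" using regroup[of "\<delta> ` set js"] xs by simp
  from graded_on_homogeneous_unique[OF graded_P x fin cH this] show ?thesis by (simp add: c_def fun_eq_iff)
qed

definition homogeneous_terms :: "('a \<times> 'p \<times> 'a) list \<Rightarrow> bool" where
  "homogeneous_terms ts \<longleftrightarrow> (\<forall>(a, b, c)\<in>set ts. (\<exists>g. a \<in> H g) \<and> (\<exists>g. c \<in> H g))"

definition has_homogeneous_rep :: "nat \<Rightarrow> 'p \<Rightarrow> bool" where
  "has_homogeneous_rep n x \<longleftrightarrow> (\<exists>ts. on_basis n ts \<and> gen_sum ts = x \<and> homogeneous_terms ts)"

lemma has_homogeneous_rep_0: "has_homogeneous_rep n 0"
  unfolding has_homogeneous_rep_def by (rule exI[of _ "[]"]) (simp add: homogeneous_terms_def)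

lemma has_homogeneous_rep_add: "has_homogeneous_rep n x \<Longrightarrow> has_homogeneous_rep n y \<Longrightarrow>
    has_homogeneous_rep n (x + y)"
proof -
  assume "has_homogeneous_rep n x" "has_homogeneous_rep n y"
  then obtain t1 t2 where "on_basis n t1" "gen_sum t1 = x" "homogeneous_terms t1" "on_basis n t2" "gen_sum t2 = y" "homogeneous_terms t2"
    unfolding has_homogeneous_rep_def by blast
  then show ?thesis unfolding has_homogeneous_rep_def
    by (intro exI[of _ "t1 @ t2"]) (simp add: homogeneous_terms_def ball_Un)
qed

lemma has_homogeneous_rep_sum: "(\<And>i. i \<in> I \<Longrightarrow> has_homogeneous_rep n (F i)) \<Longrightarrow>
    has_homogeneous_rep n (sum F I)"
  by (induction I rule: infinite_finite_induct) (auto simp: has_homogeneous_rep_0 has_homogeneous_rep_add)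

lemma has_homogeneous_rep_single: "b \<in> basis n \<Longrightarrow> a \<in> H g \<Longrightarrow> c \<in> H g' \<Longrightarrow>
    has_homogeneous_rep n (lft a (rgt b c))"
  unfolding has_homogeneous_rep_def homogeneous_terms_def by (rule exI[of _ "[(a, b, c)]"]) auto

lemma has_homogeneous_rep_term:
  assumes b: "b \<in> basis n" shows "has_homogeneous_rep n (lft a (rgt b c))"
proof -
  have bP: "b \<in> P n" using basis_in_P[OF b] .
  have e1: "lft a (rgt b c) = (\<Sum>g\<in>{g. hcomp a g \<noteq> 0}. lft (hcomp a g) (rgt b c))"
    using lft_sum[OF rgt_P[OF bP], of "hcomp a" "{g. hcomp a g \<noteq> 0}"] hcomp_spec[of a] by simp
  have e2: "lft a' (rgt b c) = (\<Sum>g'\<in>{g. hcomp c g \<noteq> 0}. lft a' (rgt b (hcomp c g')))" for a'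
  proof -
    have "rgt b c = (\<Sum>g'\<in>{g. hcomp c g \<noteq> 0}. rgt b (hcomp c g'))"
      using rgt_sum[OF bP, of "hcomp c" "{g. hcomp c g \<noteq> 0}"] hcomp_spec[of c] by simp
    then show ?thesis using lft_sumP[of "{g. hcomp c g \<noteq> 0}" "\<lambda>g'. rgt b (hcomp c g')" n a'] rgt_P[OF bP] by simp
  qed
  show ?thesis unfolding e1
    by (rule has_homogeneous_rep_sum, subst e2, rule has_homogeneous_rep_sum, rule has_homogeneous_rep_single[OF b]) (use hcomp_spec in blast)+
qed

lemma homogeneous_rep_exists: assumes x: "x \<in> P n" shows "\<exists>ts. on_basis n ts \<and> gen_sum ts = x \<and> homogeneous_terms ts"
proof -
  have "on_basis n ts \<Longrightarrow> has_homogeneous_rep n (gen_sum ts)" for ts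
  proof (induction ts)
    case (Cons t ts)
    then show ?case by (cases t) (auto intro!: has_homogeneous_rep_add has_homogeneous_rep_term)
  qed (simp add: has_homogeneous_rep_0)
  then have "has_homogeneous_rep n (gen_sum (basis_rep n x))" using basis_rep_spec[OF x] by blast
  then show ?thesis using basis_rep_spec[OF x] unfolding has_homogeneous_rep_def by simp
qed

lemma additive_on_P_sum_list:
  assumes "\<And>x y. x \<in> P n \<Longrightarrow> y \<in> P n \<Longrightarrow> f (x + y) = f x + f y" "f 0 = 0"
  shows "\<forall>j\<in>set ts. g j \<in> P n \<Longrightarrow> f (sum_list (map g ts)) = sum_list (map (\<lambda>j. f (g j)) ts)"
  by (induction ts) (auto simp: assms P_sum_list)

definition deg_part :: "nat \<Rightarrow> ('p \<Rightarrow> 'k) \<Rightarrow> 'g \<Rightarrow> 'p \<Rightarrow> 'k" where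
  "deg_part n f t = free_ext n (\<lambda>a b c. if basis_deg n b = t then eps a * f b * eps c else 0)"

lemma bilinear_on_basis_deg_part: "bilinear_on_basis (*) n (\<lambda>a b c. if basis_deg n b = t then eps a * f b * eps c else 0)"
  unfolding bilinear_on_basis_def lin_on_def by (auto simp: eps_add eps_sc algebra_simps)

lemma gen_term_homogeneous:
  "b \<in> basis n \<Longrightarrow> a \<in> H ga \<Longrightarrow> c \<in> H gc \<Longrightarrow> lft a (rgt b c) \<in> HP n (ga + basis_deg n b + gc)"
  using lft_homogeneous[OF _ rgt_homogeneous[OF _ basis_deg_spec]] by (simp add: add.assoc)

lemma deg_part_gen_term:
  assumes f: "bimod_functional n f" and b: "b \<in> basis n" and a: "a \<in> H ga" and c: "c \<in> H gc"
  shows "(if basis_deg n b = t then eps a * f b * eps c else 0)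
    = f (if ga + basis_deg n b + gc = t then lft a (rgt b c) else 0)"
proof -
  have fy: "f (lft a (rgt b c)) = eps a * f b * eps c"
    using bimod_functional_lft[OF f rgt_P[OF basis_in_P[OF b]]] bimod_functional_rgt[OF f basis_in_P[OF b]] by simp
  show ?thesis
  proof (cases "ga = 0 \<and> gc = 0")
    case True then show ?thesis using fy by (simp add: bimod_functional_0[OF f])
  next
    case False
    then have "eps a = 0 \<or> eps c = 0" using eps_homogeneous a c by blast
    then show ?thesis using fy by (auto simp: bimod_functional_0[OF f])
  qed
qed

lemma deg_part_vanish:
  assumes f: "bimod_functional n f" and x: "x \<in> HP n s" and tne: "t \<noteq> s"
  shows "deg_part n f t x = 0"
proof -
  obtain ts where ts: "on_basis n ts" "gen_sum ts = x" "homogeneous_terms ts"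
    using homogeneous_rep_exists x HP_P by blast
  define y where "y = (\<lambda>(a, b, c). lft a (rgt b c))"
  define \<delta> where "\<delta> = (\<lambda>(a::'a, b, c::'a). hdeg a + basis_deg n b + hdeg c)"
  have terms: "b \<in> basis n \<and> a \<in> H (hdeg a) \<and> c \<in> H (hdeg c)" if "(a, b, c) \<in> set ts" for a b c
    using ts(1,3) that unfolding on_basis_def homogeneous_terms_def hdeg_def by (auto intro: someI_ex)
  have hom: "\<forall>j\<in>set ts. y j \<in> HP n (\<delta> j)"
    using terms gen_term_homogeneous by (auto simp: y_def \<delta>_def)
  have "deg_part n f t x = sum_list (map (\<lambda>(a, b, c). if basis_deg n b = t then eps a * f b * eps c else 0) ts)"
    unfolding deg_part_def using free_ext_gen_sum[OF field_vector_space bilinear_on_basis_deg_part ts(1)] ts(2) by simp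
  also have "\<dots> = sum_list (map (\<lambda>j. f (if \<delta> j = t then y j else 0)) ts)"
  proof (intro arg_cong[where f=sum_list] map_cong refl)
    fix j assume j: "j \<in> set ts"
    obtain a b c where abc: "j = (a, b, c)" by (cases j)
    then have "b \<in> basis n" "a \<in> H (hdeg a)" "c \<in> H (hdeg c)" using terms j by auto
    from deg_part_gen_term[OF f this, of t]
    show "(\<lambda>(a, b, c). if basis_deg n b = t then eps a * f b * eps c else 0) j = f (if \<delta> j = t then y j else 0)"
      by (simp add: abc y_def \<delta>_def)
  qed
  also have "\<dots> = f (sum_list (map (\<lambda>j. if \<delta> j = t then y j else 0) ts))"
    by (rule additive_on_P_sum_list[OF bimod_functional_add[OF f] bimod_functional_0[OF f], symmetric])
      (use hom HP_P P_0 in auto)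
  also have "sum_list (map (\<lambda>j. if \<delta> j = t then y j else 0) ts) = 0"
    using homogeneous_component_sum_list[OF x _ hom, of t] ts(2) tne by (simp add: gen_sum_def y_def)
  finally show ?thesis using bimod_functional_0[OF f] by simp
qed

lemma deg_part_lft: "x \<in> P n \<Longrightarrow> deg_part n f t (lft a x) = eps a * deg_part n f t x"
proof -
  assume x: "x \<in> P n"
  have "deg_part n f t (lft a x) = deg_part n f t (lft a (rgt x one))" by (simp add: rgt_one[OF x])
  also have "\<dots> = free_ext n (\<lambda>a' b c'. (\<lambda>a b c. if basis_deg n b = t then eps a * f b * eps c else 0) (mul a a') b (mul c' one)) x"
    unfolding deg_part_def by (rule free_ext_lft_rgt[OF field_vector_space bilinear_on_basis_deg_part x])
  also have "\<dots> = free_ext n (\<lambda>a' b c'. eps a * (if basis_deg n b = t then eps a' * f b * eps c' else 0)) x"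
    by (rule free_ext_cong[OF x]) (simp add: eps_mul mul_oneR)
  also have "\<dots> = eps a * deg_part n f t x"
    unfolding deg_part_def by (rule free_ext_natural[symmetric]) (simp add: algebra_simps)
  finally show ?thesis .
qed

lemma deg_part_rgt: "x \<in> P n \<Longrightarrow> deg_part n f t (rgt x a) = deg_part n f t x * eps a"
proof -
  assume x: "x \<in> P n"
  have "deg_part n f t (rgt x a) = deg_part n f t (lft one (rgt x a))" by (simp add: lft_one[OF rgt_P[OF x]])
  also have "\<dots> = free_ext n (\<lambda>a' b c'. (\<lambda>a b c. if basis_deg n b = t then eps a * f b * eps c else 0) (mul one a') b (mul c' a)) x"
    unfolding deg_part_def by (rule free_ext_lft_rgt[OF field_vector_space bilinear_on_basis_deg_part x])
  also have "\<dots> = free_ext n (\<lambda>a' b c'. (\<lambda>v. v * eps a) (if basis_deg n b = t then eps a' * f b * eps c' else 0)) x"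
    by (rule free_ext_cong[OF x]) (simp add: eps_mul mul_oneL)
  also have "\<dots> = deg_part n f t x * eps a"
    unfolding deg_part_def by (rule free_ext_natural[where l="\<lambda>v. v * eps a", symmetric]) (simp add: algebra_simps)
  finally show ?thesis .
qed

lemma deg_part_in_homAA_deg:
  assumes f: "bimod_functional n f"
  shows "(\<lambda>x. if x \<in> P n then deg_part n f (-h) x else 0) \<in> homAA_deg scp (P n) (HP n) lft rgt eps h"
  unfolding homAA_deg_def
proof (intro CollectI conjI allI ballI impI)
  show "lin_on scp (*) (P n) (\<lambda>x. if x \<in> P n then deg_part n f (-h) x else 0)"
    using lin_on_free_ext[OF field_vector_space bilinear_on_basis_deg_part, of n "-h" f]
    by (simp add: lin_on_def deg_part_def P_add P_sc)
  show "(if x \<in> P n then deg_part n f (-h) x else 0) = 0" if "h + s \<noteq> 0" "x \<in> HP n s" for s x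
  proof -
    have "-h \<noteq> s" using that(1) by (metis add.right_inverse minus_minus)
    then show ?thesis using deg_part_vanish[OF f that(2)] by simp
  qed
qed (simp_all add: deg_part_lft deg_part_rgt lft_P rgt_P)

lemma sum_deg_part:
  assumes f: "bimod_functional n f" and x: "x \<in> P n"
  shows "(\<Sum>h\<in>(\<lambda>b. - basis_deg n b) ` basis n. deg_part n f (-h) x) = f x"
proof -
  let ?F = "(\<lambda>b. - basis_deg n b) ` basis n"
  have "(\<Sum>h\<in>?F. deg_part n f (-h) x)
      = free_ext n (\<lambda>a b c. \<Sum>h\<in>?F. (if basis_deg n b = -h then eps a * f b * eps c else 0)) x"
    unfolding deg_part_def by (rule free_ext_sum_family[symmetric])
  also have "\<dots> = free_ext n (\<lambda>a b c. eps a * f b * eps c) x"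
  proof (rule free_ext_cong[OF x])
    fix a b c assume b: "b \<in> basis n"
    have "(\<Sum>h\<in>?F. (if basis_deg n b = -h then eps a * f b * eps c else 0))
        = (\<Sum>h\<in>?F. (if h = - basis_deg n b then eps a * f b * eps c else 0))"
      by (rule sum.cong) (auto simp: minus_equation_iff)
    also have "\<dots> = eps a * f b * eps c" using b finite_basis by simp
    finally show "(\<Sum>h\<in>?F. (if basis_deg n b = -h then eps a * f b * eps c else 0)) = eps a * f b * eps c" .
  qed
  also have "\<dots> = f x"
  proof (rule free_ext_unique[symmetric, OF _ _ x])
    show "\<forall>x\<in>P n. \<forall>y\<in>P n. f (x + y) = f x + f y" using bimod_functional_add[OF f] by blast
    fix a b c assume b: "b \<in> basis n"
    show "f (lft a (rgt b c)) = eps a * f b * eps c"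
      using bimod_functional_lft[OF f rgt_P[OF basis_in_P[OF b]]] bimod_functional_rgt[OF f basis_in_P[OF b]] by simp
  qed
  finally show ?thesis .
qed

lemma homAA_if_bimod_functional:
  assumes f: "bimod_functional n f"
  shows "f \<in> homAA scp (P n) (HP n) lft rgt eps"
  unfolding homAA_def
proof (intro CollectI exI[of _ "(\<lambda>b. - basis_deg n b) ` basis n"]
    exI[of _ "\<lambda>h x. if x \<in> P n then deg_part n f (-h) x else 0"] conjI ballI)
  show "finite ((\<lambda>b. - basis_deg n b) ` basis n)" using finite_basis by simp
  show "f = (\<lambda>x. \<Sum>h\<in>(\<lambda>b. - basis_deg n b) ` basis n. if x \<in> P n then deg_part n f (-h) x else 0)"
  proof
    fix x show "f x = (\<Sum>h\<in>(\<lambda>b. - basis_deg n b) ` basis n. if x \<in> P n then deg_part n f (-h) x else 0)"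
      by (cases "x \<in> P n") (simp_all add: sum_deg_part[OF f] bimod_functional_outside[OF f])
  qed
qed (rule deg_part_in_homAA_deg[OF f])

lemma homAA_iff_bimod_functional: "f \<in> homAA scp (P n) (HP n) lft rgt eps \<longleftrightarrow> bimod_functional n f"
  using bimod_functional_if_homAA homAA_if_bimod_functional by blast

section \<open>The comparison map from P to the bar resolution\<close>

(* F_dual n f = f \<circ> F_n, where F_0 (a b c) = a \<otimes> aug(b) c and F_(n+1) (a b c) = a s(F_n (d b)) c
   for generators b, with s the contraction y \<mapsto> 1 \<otimes> y of the bar resolution. *)
primrec F_dual :: "nat \<Rightarrow> ('a list \<Rightarrow> 'v::ab_group_add) \<Rightarrow> 'p \<Rightarrow> 'v" where
  "F_dual 0 f = free_ext 0 (\<lambda>a b c. f [a, mul (aug b) c])"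
| "F_dual (Suc n) f = free_ext (Suc n) (\<lambda>a b c. F_dual n (\<lambda>ys. f (a # rmul c ys)) (d n b))"

definition F_dual_gen :: "nat \<Rightarrow> ('a list \<Rightarrow> 'v::ab_group_add) \<Rightarrow> 'a \<Rightarrow> 'p \<Rightarrow> 'a \<Rightarrow> 'v" where
  "F_dual_gen n f = (case n of 0 \<Rightarrow> (\<lambda>a b c. f [a, mul (aug b) c])
      | Suc m \<Rightarrow> (\<lambda>a b c. F_dual m (\<lambda>ys. f (a # rmul c ys)) (d m b)))"

lemma F_dual_eq_free_ext: "F_dual n f = free_ext n (F_dual_gen n f)"
  by (cases n) (simp_all add: F_dual_gen_def)

lemma F_dual_cong: "agree_len (Suc (Suc n)) f g \<Longrightarrow> x \<in> P n \<Longrightarrow> F_dual n f x = F_dual n g x"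
proof (induction n arbitrary: f g x)
  case 0 then show ?case by (simp add: agree_len_def cong: free_ext_cong)
next
  case (Suc n)
  show ?case unfolding F_dual.simps
  proof (rule free_ext_cong[OF Suc.prems(2)])
    fix a b c assume b: "b \<in> basis (Suc n)"
    have "agree_len (Suc (Suc n)) (\<lambda>ys. f (a # rmul c ys)) (\<lambda>ys. g (a # rmul c ys))"
      using Suc.prems(1) by (auto simp: agree_len_def)
    then show "F_dual n (\<lambda>ys. f (a # rmul c ys)) (d n b) = F_dual n (\<lambda>ys. g (a # rmul c ys)) (d n b)"
      using Suc.IH d_P[OF basis_in_P[OF b]] by blast
  qed
qed

lemma F_dual_natural: "\<forall>x y. l (x + y) = l x + l y \<Longrightarrow> l (F_dual n f x) = F_dual n (\<lambda>ys. l (f ys)) x"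
proof (induction n arbitrary: f x)
  case 0 then show ?case by (simp add: free_ext_natural)
next
  case (Suc n) then show ?case by (simp add: free_ext_natural)
qed

lemma F_dual_add: "F_dual n (\<lambda>ys. f ys + g ys) x = F_dual n f x + F_dual n g x"
proof (induction n arbitrary: f g x)
  case 0 then show ?case by (simp add: free_ext_add_family)
next
  case (Suc n) then show ?case by (simp add: free_ext_add_family)
qed

lemma F_dual_minus: "F_dual n (\<lambda>ys. - f ys) x = - F_dual n f x"
  using F_dual_natural[of uminus n f x] by simp

lemma F_dual_diff: "F_dual n (\<lambda>ys. f ys - g ys) x = F_dual n f x - F_dual n g x"
  using F_dual_add[of n f "\<lambda>ys. - g ys" x] F_dual_minus[of n g x] by simp

lemma lin_on_F_dual_family:
  assumes V: "vector_space scv"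
    and add: "\<And>x x'. agree_len (Suc (Suc n)) (F (x + x')) (\<lambda>ys. F x ys + F x' ys)"
    and scale: "\<And>c x. agree_len (Suc (Suc n)) (F (sc c x)) (\<lambda>ys. scv c (F x ys))"
    and y: "y \<in> P n"
  shows "lin_on sc scv UNIV (\<lambda>x. F_dual n (F x) y)"
proof -
  interpret V: vector_space scv by fact
  show ?thesis unfolding lin_on_def
  proof (intro conjI ballI allI)
    fix x x' show "F_dual n (F (x + x')) y = F_dual n (F x) y + F_dual n (F x') y"
      using F_dual_cong[OF add y] by (simp add: F_dual_add)
  next
    fix c x show "F_dual n (F (sc c x)) y = scv c (F_dual n (F x) y)"
      using F_dual_cong[OF scale y] F_dual_natural[of "scv c" n "F x" y] by (simp add: V.scale_right_distrib)
  qed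
qed

lemma bilinear_on_basis_F_dual_gen:
  fixes scv :: "'k \<Rightarrow> 'v::ab_group_add \<Rightarrow> 'v"
  assumes V: "vector_space scv" and f: "multilin scv (Suc (Suc n)) f"
  shows "bilinear_on_basis scv n (F_dual_gen n f)"
proof (cases n)
  case 0
  have l0: "lin_on sc scv UNIV (\<lambda>a. f [a, v])" for v using multilin_slot[OF f, of "[]" "[v]"] 0 by simp
  have l1: "lin_on sc scv UNIV (\<lambda>c. f [a, c])" for a using multilin_slot[OF f, of "[a]" "[]"] 0 by simp
  show ?thesis unfolding bilinear_on_basis_def F_dual_gen_def using 0 l0 lin_on_comp[OF lin_on_mulR l1] by simp
next
  case (Suc m)
  have lin_first: "lin_on sc scv UNIV (\<lambda>a. f (a # zs))" if "length zs = Suc n" for zs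
    using multilin_slot[OF f, of "[]" zs] that by simp
  have lin_last: "lin_on sc scv UNIV (\<lambda>c. f (a # rmul c zs))" if "length zs = Suc n" for a zs
  proof -
    have "zs \<noteq> []" using that by auto
    then show ?thesis using lin_on_rmul[OF multilin_Cons[OF f, of a], of zs] that by simp
  qed
  show ?thesis unfolding bilinear_on_basis_def F_dual_gen_def Suc nat.case
  proof (intro conjI ballI allI)
    fix b c assume b: "b \<in> basis (Suc m)"
    have lf: "f ((x + x') # rmul c ys) = f (x # rmul c ys) + f (x' # rmul c ys) \<and>
        f (sc k x # rmul c ys) = scv k (f (x # rmul c ys))" if "length ys = Suc (Suc m)" for x x' k ys
      using lin_first[of "rmul c ys"] that Suc unfolding lin_on_def by simp
    show "lin_on sc scv UNIV (\<lambda>a. F_dual m (\<lambda>ys. f (a # rmul c ys)) (d m b))"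
      by (rule lin_on_F_dual_family[OF V _ _ d_P[OF basis_in_P[OF b]]]) (simp_all add: agree_len_def lf)
  next
    fix b a assume b: "b \<in> basis (Suc m)"
    have ll: "f (a # rmul (c + c') ys) = f (a # rmul c ys) + f (a # rmul c' ys) \<and>
        f (a # rmul (sc k c) ys) = scv k (f (a # rmul c ys))" if "length ys = Suc (Suc m)" for c c' k ys
      using lin_last[of ys a] that Suc unfolding lin_on_def by simp
    show "lin_on sc scv UNIV (\<lambda>c. F_dual m (\<lambda>ys. f (a # rmul c ys)) (d m b))"
      by (rule lin_on_F_dual_family[OF V _ _ d_P[OF basis_in_P[OF b]]]) (simp_all add: agree_len_def ll)
  qed
qed

lemma lin_on_F_dual: "vector_space scv \<Longrightarrow> multilin scv (Suc (Suc n)) f \<Longrightarrow> lin_on scp scv (P n) (F_dual n f)"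
  unfolding F_dual_eq_free_ext by (rule lin_on_free_ext[OF _ bilinear_on_basis_F_dual_gen])

lemma F_dual_lft_rgt:
  assumes V: "vector_space scv" and f: "multilin scv (Suc (Suc n)) f" and x: "x \<in> P n"
  shows "F_dual n f (lft a (rgt x c)) = F_dual n (\<lambda>ys. f (lmul a (rmul c ys))) x"
proof -
  have "F_dual n f (lft a (rgt x c)) = free_ext n (\<lambda>a' b c'. F_dual_gen n f (mul a a') b (mul c' c)) x"
    unfolding F_dual_eq_free_ext by (rule free_ext_lft_rgt[OF V bilinear_on_basis_F_dual_gen[OF V f] x])
  also have "\<dots> = free_ext n (F_dual_gen n (\<lambda>ys. f (lmul a (rmul c ys)))) x"
  proof (rule free_ext_cong[OF x])
    fix a' b c' assume b: "b \<in> basis n"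
    show "F_dual_gen n f (mul a a') b (mul c' c) = F_dual_gen n (\<lambda>ys. f (lmul a (rmul c ys))) a' b c'"
    proof (cases n)
      case 0 then show ?thesis by (simp add: F_dual_gen_def mul_assoc)
    next
      case (Suc m)
      have "agree_len (Suc (Suc m)) (\<lambda>ys. f (mul a a' # rmul (mul c' c) ys)) (\<lambda>ys. f (lmul a (rmul c (a' # rmul c' ys))))"
        by (auto simp: agree_len_def rmul_Cons_len rmul_rmul)
      then show ?thesis using F_dual_cong d_P[OF basis_in_P[OF b[unfolded Suc]]] by (simp add: F_dual_gen_def Suc)
    qed
  qed
  finally show ?thesis by (simp add: F_dual_eq_free_ext)
qed

lemma F_dual_in:
  assumes "x \<in> P n" "\<And>ys. f ys \<in> S" "0 \<in> S" "\<And>u v. u \<in> S \<Longrightarrow> v \<in> S \<Longrightarrow> u + v \<in> S"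
  shows "F_dual n f x \<in> S"
  using assms
proof (induction n arbitrary: f x)
  case 0 then show ?case by (auto intro!: free_ext_in)
next
  case (Suc n)
  show ?case unfolding F_dual.simps
    by (rule free_ext_in[OF Suc.prems(1)]) (auto intro!: Suc.IH d_P[OF basis_in_P] Suc.prems)
qed

lemma F_dual_0_bar_diff:
  fixes f :: "'a list \<Rightarrow> 'v::ab_group_add"
  assumes V: "vector_space scv" and f: "multilin scv 1 f" and x: "x \<in> P 0"
  shows "F_dual 0 (bar_diff f) x = f [aug x]"
proof -
  have add: "\<forall>x\<in>P 0. \<forall>y\<in>P 0. f [aug (x + y)] = f [aug x] + f [aug y]"
    using multilin_slot[OF f, of "[]" "[]"] by (simp add: aug_add lin_on_def)
  have "f [aug x] = free_ext 0 (\<lambda>a b c. f [aug (lft a (rgt b c))]) x"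
    by (rule free_ext_unique[OF add _ x]) simp
  also have "\<dots> = F_dual 0 (bar_diff f) x" unfolding F_dual.simps
    by (rule free_ext_cong[OF x]) (simp add: aug_lft aug_rgt rgt_P basis_in_P)
  finally show ?thesis by simp
qed

lemma F_dual_bar_diff_step:
  fixes f :: "'a list \<Rightarrow> 'v::ab_group_add" and scv :: "'k \<Rightarrow> 'v \<Rightarrow> 'v"
  assumes V: "vector_space scv" and f: "multilin scv (Suc (Suc n)) f" and x: "x \<in> P (Suc n)"
    and hyp: "\<And>\<Xi> b. multilin scv (Suc n) \<Xi> \<Longrightarrow> b \<in> basis (Suc n) \<Longrightarrow> F_dual n (bar_diff \<Xi>) (d n b) = 0"
  shows "F_dual (Suc n) (bar_diff f) x = F_dual n f (d n x)"
proof -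
  have lin: "lin_on scp scv (P n) (F_dual n f)" by (rule lin_on_F_dual[OF V f])
  have add: "\<forall>x\<in>P (Suc n). \<forall>y\<in>P (Suc n). F_dual n f (d n (x + y)) = F_dual n f (d n x) + F_dual n f (d n y)"
    using lin d_P by (simp add: d_add lin_on_def)
  have "F_dual n f (d n x) = free_ext (Suc n) (\<lambda>a b c. F_dual n f (d n (lft a (rgt b c)))) x"
    by (rule free_ext_unique[OF add _ x]) simp
  also have "\<dots> = F_dual (Suc n) (bar_diff f) x" unfolding F_dual.simps
  proof (rule free_ext_cong[OF x])
    fix a b c assume b: "b \<in> basis (Suc n)"
    have bP: "b \<in> P (Suc n)" by (rule basis_in_P[OF b])
    have dbP: "d n b \<in> P n" by (rule d_P[OF bP])
    define \<Xi> where "\<Xi> = (\<lambda>zs. f (a # rmul c zs))"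
    have mX: "multilin scv (Suc n) \<Xi>" unfolding \<Xi>_def using multilin_rmul[OF multilin_Cons[OF f, of a]] by simp
    have e: "agree_len (Suc (Suc n)) (\<lambda>ys. bar_diff f (a # rmul c ys)) (\<lambda>ys. f (lmul a (rmul c ys)) - bar_diff \<Xi> ys)"
    proof (unfold agree_len_def, intro allI impI)
      fix ys :: "'a list" assume l: "length ys = Suc (Suc n)"
      then have ne: "rmul c ys \<noteq> []" by (metis length_rmul list.size(3) nat.distinct(1))
      show "bar_diff f (a # rmul c ys) = f (lmul a (rmul c ys)) - bar_diff \<Xi> ys"
        using bar_diff_Cons[OF ne, of f a] bar_diff_rmul[of "\<lambda>zs. f (a # zs)" c ys] by (simp add: \<Xi>_def)
    qed
    have "F_dual n f (d n (lft a (rgt b c))) = F_dual n f (lft a (rgt (d n b) c))"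
      by (simp add: d_lft[OF rgt_P[OF bP]] d_rgt[OF bP])
    also have "\<dots> = F_dual n (\<lambda>ys. f (lmul a (rmul c ys))) (d n b)" by (rule F_dual_lft_rgt[OF V f dbP])
    also have "\<dots> = F_dual n (\<lambda>ys. f (lmul a (rmul c ys))) (d n b) - F_dual n (bar_diff \<Xi>) (d n b)"
      using hyp[OF mX b] by simp
    also have "\<dots> = F_dual n (\<lambda>ys. f (lmul a (rmul c ys)) - bar_diff \<Xi> ys) (d n b)" by (simp add: F_dual_diff)
    also have "\<dots> = F_dual n (\<lambda>ys. bar_diff f (a # rmul c ys)) (d n b)" using F_dual_cong[OF e dbP] by simp
    finally show "F_dual n f (d n (lft a (rgt b c))) = F_dual n (\<lambda>ys. bar_diff f (a # rmul c ys)) (d n b)" .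
  qed
  finally show ?thesis by simp
qed

lemma F_dual_bar_diff:
  fixes f :: "'a list \<Rightarrow> 'v::ab_group_add" and scv :: "'k \<Rightarrow> 'v \<Rightarrow> 'v"
  assumes V: "vector_space scv"
  shows "multilin scv (Suc (Suc n)) f \<Longrightarrow> x \<in> P (Suc n) \<Longrightarrow> F_dual (Suc n) (bar_diff f) x = F_dual n f (d n x)"
proof (induction n arbitrary: f x)
  case (0 f x)
  show ?case
  proof (rule F_dual_bar_diff_step[OF V 0])
    fix \<Xi> :: "'a list \<Rightarrow> 'v" and b assume X: "multilin scv (Suc 0) \<Xi>" and b: "b \<in> basis (Suc 0)"
    have "F_dual 0 (bar_diff \<Xi>) (d 0 b) = \<Xi> [aug (d 0 b)]"
      using F_dual_0_bar_diff[OF V _ d_P[OF basis_in_P[OF b]]] X by simp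
    also have "\<dots> = 0" using aug_d0[of b] basis_in_P[OF b] multilin_slot_0[OF X V, of "[]" "[]"] by simp
    finally show "F_dual 0 (bar_diff \<Xi>) (d 0 b) = 0" .
  qed
next
  case (Suc n f x)
  show ?case
  proof (rule F_dual_bar_diff_step[OF V Suc.prems])
    fix \<Xi> :: "'a list \<Rightarrow> 'v" and b assume X: "multilin scv (Suc (Suc n)) \<Xi>" and b: "b \<in> basis (Suc (Suc n))"
    have bP: "b \<in> P (Suc (Suc n))" by (rule basis_in_P[OF b])
    have "F_dual (Suc n) (bar_diff \<Xi>) (d (Suc n) b) = F_dual n \<Xi> (d n (d (Suc n) b))"
      by (rule Suc.IH[OF X d_P[OF bP]])
    also have "\<dots> = 0" using d_d[OF bP] lin_on_0[OF lin_on_F_dual[OF V X] P_0] by simp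
    finally show "F_dual (Suc n) (bar_diff \<Xi>) (d (Suc n) b) = 0" .
  qed
qed

lemma F_dual_natural_on:
  assumes l: "\<forall>u\<in>S. \<forall>v\<in>S. l (u + v) = l u + l v" and S0: "0 \<in> S" and Sadd: "\<forall>u\<in>S. \<forall>v\<in>S. u + v \<in> S"
  shows "(\<And>ys. f ys \<in> S) \<Longrightarrow> x \<in> P n \<Longrightarrow> l (F_dual n f x) = F_dual n (\<lambda>ys. l (f ys)) x"
proof (induction n arbitrary: f x)
  case 0 then show ?case unfolding F_dual.simps by (intro free_ext_natural_on[OF l S0 Sadd]) auto
next
  case (Suc n)
  show ?case unfolding F_dual.simps
  proof (subst free_ext_natural_on[OF l S0 Sadd _ Suc.prems(2)])
    show "F_dual n (\<lambda>ys. f (a # rmul c ys)) (d n b) \<in> S" if "b \<in> basis (Suc n)" for a b c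
      by (rule F_dual_in[OF d_P[OF basis_in_P[OF that]]]) (use Suc.prems S0 Sadd in auto)
    show "free_ext (Suc n) (\<lambda>a b c. l (F_dual n (\<lambda>ys. f (a # rmul c ys)) (d n b))) x =
        free_ext (Suc n) (\<lambda>a b c. F_dual n (\<lambda>ys. l (f (a # rmul c ys))) (d n b)) x"
      by (rule free_ext_cong[OF Suc.prems(2)]) (rule Suc.IH, use Suc.prems d_P[OF basis_in_P] in auto)
  qed
qed

section \<open>The comparison map from the bar resolution to P\<close>

lemma lin_on_d: "lin_on scp scp (P (Suc n)) (d n)"
  using d_add d_sc by (simp add: lin_on_def)

definition d_section :: "nat \<Rightarrow> 'p \<Rightarrow> 'p" where
  "d_section n = (SOME s. (\<forall>y. s y \<in> P (Suc n)) \<and> Vector_Spaces.linear scp scp s \<and> (\<forall>y\<in>d n ` P (Suc n). d n (s y) = y))"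

lemma d_section_spec: "(\<forall>y. d_section n y \<in> P (Suc n)) \<and> Vector_Spaces.linear scp scp (d_section n) \<and>
    (\<forall>y\<in>d n ` P (Suc n). d n (d_section n y) = y)"
  unfolding d_section_def by (rule someI_ex[OF exists_linear_section[OF vsp vsp subsp_P lin_on_d]])

lemma d_section_in_P: "d_section n y \<in> P (Suc n)" using d_section_spec by blast
lemma d_d_section: "y \<in> d n ` P (Suc n) \<Longrightarrow> d n (d_section n y) = y" using d_section_spec by blast
lemma lin_on_d_section: "lin_on scp scp UNIV (d_section n)"
  using d_section_spec[of n] by (auto simp: Vector_Spaces.linear_iff lin_on_def)

definition aug_lift_one :: 'p where "aug_lift_one = (SOME p. p \<in> P 0 \<and> aug p = one)"
lemma aug_lift_one_spec: "aug_lift_one \<in> P 0 \<and> aug aug_lift_one = one"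
proof -
  have "one \<in> aug ` P 0" using exact_aug by simp
  then obtain p where "p \<in> P 0" "aug p = one" by blast
  then show ?thesis unfolding aug_lift_one_def by (metis (mono_tags, lifting) someI)
qed

(* G_core n xs = G_n (1 \<otimes> xs \<otimes> 1): G_0 picks a preimage of 1 under aug, and G_(n+1) lifts
   the cycle G_n (b' (1 \<otimes> xs \<otimes> 1)) along d by a fixed linear section of d. *)
primrec G_core :: "nat \<Rightarrow> 'a list \<Rightarrow> 'p" where
  "G_core 0 xs = aug_lift_one"
| "G_core (Suc n) xs = d_section n (bar_diff (\<lambda>ys. lft (hd ys) (rgt (G_core n (butlast (tl ys))) (last ys))) (one # xs @ [one]))"

definition G_map :: "nat \<Rightarrow> 'a list \<Rightarrow> 'p" where
  "G_map n ys = lft (hd ys) (rgt (G_core n (butlast (tl ys))) (last ys))"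

lemma G_core_Suc: "G_core (Suc n) xs = d_section n (bar_diff (G_map n) (one # xs @ [one]))"
proof -
  have "G_map n = (\<lambda>ys. lft (hd ys) (rgt (G_core n (butlast (tl ys))) (last ys)))" by (rule ext) (simp only: G_map_def)
  then show ?thesis by (simp only: G_core.simps)
qed

declare G_core.simps(2)[simp del]

lemma G_core_in_P: "G_core n xs \<in> P n"
  by (cases n) (auto simp: aug_lift_one_spec d_section_in_P G_core_Suc)

lemma G_map_in_P: "G_map n ys \<in> P n"
  by (simp add: G_map_def lft_P rgt_P G_core_in_P)

lemma G_map_frame: "G_map n (a # zs @ [c]) = lft a (rgt (G_core n zs) c)"
  by (simp add: G_map_def)

lemma G_map_lmul_rmul: "2 \<le> length ys \<Longrightarrow> G_map n (lmul a (rmul c ys)) = lft a (rgt (G_map n ys) c)"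
proof -
  assume "2 \<le> length ys"
  then obtain y0 mid yl where ys: "ys = y0 # mid @ [yl]" using length_ge2_split by blast
  have gP: "G_core n mid \<in> P n" by (rule G_core_in_P)
  have "lmul a (rmul c ys) = mul a y0 # mid @ [mul yl c]"
    by (simp add: ys rmul_def butlast_append)
  then have "G_map n (lmul a (rmul c ys)) = lft (mul a y0) (rgt (G_core n mid) (mul yl c))" by (simp add: G_map_frame)
  also have "\<dots> = lft (mul a y0) (rgt (rgt (G_core n mid) yl) c)" by (simp only: rgt_mul[OF gP])
  also have "\<dots> = lft a (lft y0 (rgt (rgt (G_core n mid) yl) c))" by (rule lft_mul[OF rgt_P[OF rgt_P[OF gP]]])
  also have "\<dots> = lft a (rgt (lft y0 (rgt (G_core n mid) yl)) c)"
    by (simp add: lft_rgt[OF rgt_P[OF gP]])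
  finally show ?thesis by (simp add: ys G_map_frame)
qed

lemma P_closed_diff: "0 \<in> P n" "\<forall>x\<in>P n. \<forall>y\<in>P n. x - y \<in> P n"
  using P_0 P_diff by auto

lemma bar_diff_G_map_in_P: "bar_diff (G_map n) ys \<in> P n"
  using bar_diff_natural_on[of "P n" id "G_map n" ys] P_closed_diff G_map_in_P by simp

lemma bar_diff_G_map_lmul_rmul:
  assumes l: "length ys = Suc (Suc (Suc n))"
  shows "bar_diff (G_map n) (lmul a (rmul c ys)) = lft a (rgt (bar_diff (G_map n) ys) c)"
proof -
  have "bar_diff (G_map n) (lmul a (rmul c ys)) = bar_diff (\<lambda>z. G_map n (lmul a (rmul c z))) ys"
    by (simp add: bar_diff_lmul[symmetric] bar_diff_rmul[symmetric])
  also have "\<dots> = bar_diff (\<lambda>z. lft a (rgt (G_map n z) c)) ys"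
    by (rule bar_diff_cong[of "Suc (Suc n)"]) (auto simp: agree_len_def l G_map_lmul_rmul)
  also have "\<dots> = lft a (rgt (bar_diff (G_map n) ys) c)"
  proof -
    have "\<forall>x\<in>P n. \<forall>y\<in>P n. lft a (rgt (x + y) c) = lft a (rgt x c) + lft a (rgt y c)"
    proof (intro ballI)
      fix x y assume x: "x \<in> P n" and y: "y \<in> P n"
      show "lft a (rgt (x + y) c) = lft a (rgt x c) + lft a (rgt y c)"
        by (simp add: rgt_add[OF x y] lft_add[OF rgt_P[OF x] rgt_P[OF y]])
    qed
    then show ?thesis using bar_diff_natural_on[of "P n" "\<lambda>v. lft a (rgt v c)" "G_map n" ys] P_closed_diff G_map_in_P by simp
  qed
  finally show ?thesis .
qed

lemma aug_G_map_0: "aug (G_map 0 [y0, y1]) = mul y0 y1"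
  using aug_lift_one_spec by (simp add: G_map_def aug_lft aug_rgt rgt_P mul_oneL)

lemma bar_diff_G_core_in_image_0: "length zs = Suc 0 \<Longrightarrow> bar_diff (G_map 0) (one # zs @ [one]) \<in> d 0 ` P 1"
proof -
  assume l: "length zs = Suc 0"
  define B where "B = bar_diff (G_map 0) (one # zs @ [one])"
  have BP: "B \<in> P 0" by (simp add: B_def bar_diff_G_map_in_P)
  have "\<forall>x\<in>P 0. \<forall>y\<in>P 0. aug (x + y) = aug x + aug y" by (simp add: aug_add)
  then have "aug B = bar_diff (\<lambda>ys. aug (G_map 0 ys)) (one # zs @ [one])"
    using bar_diff_natural_on[of "P 0" aug "G_map 0"] P_closed_diff G_map_in_P by (simp add: B_def)
  also have "\<dots> = bar_diff (bar_diff hd) (one # zs @ [one])"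
  proof (rule bar_diff_cong[of 2])
    show "agree_len 2 (\<lambda>ys. aug (G_map 0 ys)) (bar_diff hd)"
    proof (unfold agree_len_def, intro allI impI)
      fix ys :: "'a list" assume "length ys = 2"
      then have "2 \<le> length ys" by simp
      then obtain y0 mid y1 where "ys = y0 # mid @ [y1]" using length_ge2_split by blast
      then have "ys = [y0, y1]" using \<open>length ys = 2\<close> by simp
      then show "aug (G_map 0 ys) = bar_diff hd ys" by (simp add: aug_G_map_0)
    qed
  qed (use l in simp)
  also have "\<dots> = 0" by (rule bar_diff_bar_diff)
  finally show ?thesis using ker_aug_subset_image[OF BP] B_def by simp
qed

lemma d_G_map_if_in_image:
  assumes M: "\<And>zs. length zs = Suc n \<Longrightarrow> bar_diff (G_map n) (one # zs @ [one]) \<in> d n ` P (Suc n)"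
    and l: "length ys = Suc (Suc (Suc n))"
  shows "d n (G_map (Suc n) ys) = bar_diff (G_map n) ys"
proof -
  obtain a zs c where ys: "ys = a # zs @ [c]" using l length_ge2_split[of ys] by fastforce
  then have lz: "length zs = Suc n" using l by simp
  define B where "B = bar_diff (G_map n) (one # zs @ [one])"
  have "d n (G_map (Suc n) ys) = d n (lft a (rgt (d_section n B) c))" by (simp only: ys G_map_frame G_core_Suc B_def)
  also have "\<dots> = lft a (rgt (d n (d_section n B)) c)" by (simp add: d_lft d_rgt rgt_P d_section_in_P)
  also have "\<dots> = lft a (rgt B c)" using M[OF lz] d_d_section by (simp add: B_def)
  also have "\<dots> = bar_diff (G_map n) (lmul a (rmul c (one # zs @ [one])))"
    unfolding B_def by (rule bar_diff_G_map_lmul_rmul[symmetric]) (simp add: lz)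
  also have "lmul a (rmul c (one # zs @ [one])) = ys"
    by (simp add: ys rmul_def butlast_append mul_oneL mul_oneR)
  finally show ?thesis .
qed

lemma bar_diff_G_core_in_image: "length zs = Suc n \<Longrightarrow> bar_diff (G_map n) (one # zs @ [one]) \<in> d n ` P (Suc n)"
proof (induction n arbitrary: zs)
  case 0 then show ?case using bar_diff_G_core_in_image_0 by simp
next
  case (Suc m)
  define B where "B = bar_diff (G_map (Suc m)) (one # zs @ [one])"
  have BP: "B \<in> P (Suc m)" by (simp add: B_def bar_diff_G_map_in_P)
  have "\<forall>x\<in>P (Suc m). \<forall>y\<in>P (Suc m). d m (x + y) = d m x + d m y" by (simp add: d_add)
  then have "d m B = bar_diff (\<lambda>ys. d m (G_map (Suc m) ys)) (one # zs @ [one])"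
    using bar_diff_natural_on[of "P (Suc m)" "d m" "G_map (Suc m)"] P_closed_diff G_map_in_P by (simp add: B_def)
  also have "\<dots> = bar_diff (bar_diff (G_map m)) (one # zs @ [one])"
  proof (rule bar_diff_cong[of "Suc (Suc (Suc m))"])
    show "agree_len (Suc (Suc (Suc m))) (\<lambda>ys. d m (G_map (Suc m) ys)) (bar_diff (G_map m))"
      unfolding agree_len_def using d_G_map_if_in_image[OF Suc.IH] by blast
  qed (simp add: Suc.prems)
  also have "\<dots> = 0" by (rule bar_diff_bar_diff)
  finally show ?case using ker_d_subset_image[OF BP] B_def by simp
qed

lemma d_G_map: "length ys = Suc (Suc (Suc n)) \<Longrightarrow> d n (G_map (Suc n) ys) = bar_diff (G_map n) ys"
  by (rule d_G_map_if_in_image[OF bar_diff_G_core_in_image])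

lemma d_G_core: "length xs = Suc n \<Longrightarrow> d n (G_core (Suc n) xs) = bar_diff (G_map n) (one # xs @ [one])"
  using bar_diff_G_core_in_image d_d_section by (simp add: G_core_Suc)

lemma multilin_G_map_if:
  assumes "multilin scp n (G_core n)"
  shows "multilin scp (Suc (Suc n)) (G_map n)"
proof (rule multilinI_frame)
  fix mid yl
  have r: "rgt (G_core n mid) yl \<in> P n" by (rule rgt_P[OF G_core_in_P])
  show "lin_on sc scp UNIV (\<lambda>x. G_map n (x # mid @ [yl]))"
    by (simp add: G_map_frame lin_on_def lft_addL[OF r] lft_scL[OF r])
next
  fix y0 mid
  have g: "G_core n mid \<in> P n" by (rule G_core_in_P)
  show "lin_on sc scp UNIV (\<lambda>x. G_map n (y0 # mid @ [x]))"
    by (simp add: G_map_frame lin_on_def rgt_addR[OF g] rgt_scR[OF g] lft_add[OF rgt_P[OF g] rgt_P[OF g]]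
        lft_sc[OF rgt_P[OF g]])
next
  fix y0 yl show "multilin scp n (\<lambda>mid. G_map n (y0 # mid @ [yl]))"
    using multilin_comp_left[OF assms G_core_in_P lin_on_lft_rgt] by (simp add: G_map_frame)
qed

lemma multilin_G_core: "multilin scp n (G_core n)"
proof (induction n)
  case 0 then show ?case by (simp add: multilin_def)
next
  case (Suc n)
  have "G_core (Suc n) = (\<lambda>xs. d_section n (bar_diff (G_map n) (one # xs @ [one])))"
    by (rule ext) (rule G_core_Suc)
  moreover have "multilin scp (Suc n) (\<lambda>xs. bar_diff (G_map n) (one # xs @ [one]))"
    by (rule multilin_frame[OF multilin_bar_diff[OF vsp multilin_G_map_if[OF Suc.IH]]])
  ultimately show ?case using multilin_comp_left[OF _ _ lin_on_d_section] by simp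
qed

lemma multilin_G_map: "multilin scp (Suc (Suc n)) (G_map n)" by (rule multilin_G_map_if[OF multilin_G_core])

lemma P_add_closed: "\<forall>u\<in>P n. \<forall>v\<in>P n. u + v \<in> P n" using P_add by blast

section \<open>The induced maps on cochains\<close>

definition F_star :: "nat \<Rightarrow> ('a list \<Rightarrow> 'k) \<Rightarrow> 'p \<Rightarrow> 'k" where
  "F_star n \<psi> = (\<lambda>x. if x \<in> P n then F_dual n (bar_cochain \<psi>) x else 0)"

definition G_star :: "nat \<Rightarrow> ('p \<Rightarrow> 'k) \<Rightarrow> 'a list \<Rightarrow> 'k" where
  "G_star n w = (\<lambda>xs. if length xs = n then w (G_core n xs) else 0)"

lemma F_dual_bar_cochain_lft_rgt:
  assumes psi: "\<psi> \<in> hoch_cochains sc n" and x: "x \<in> P n"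
  shows "F_dual n (bar_cochain \<psi>) (lft a (rgt x c)) = (eps a * eps c) * F_dual n (bar_cochain \<psi>) x"
proof -
  have "F_dual n (bar_cochain \<psi>) (lft a (rgt x c)) = F_dual n (\<lambda>ys. bar_cochain \<psi> (lmul a (rmul c ys))) x"
    by (rule F_dual_lft_rgt[OF field_vector_space multilin_bar_cochain[OF psi] x])
  also have "\<dots> = F_dual n (\<lambda>ys. (eps a * eps c) * bar_cochain \<psi> ys) x"
    by (rule F_dual_cong[OF _ x]) (simp add: agree_len_def bar_cochain_lmul_rmul)
  also have "\<dots> = (eps a * eps c) * F_dual n (bar_cochain \<psi>) x"
    by (rule F_dual_natural[symmetric]) (simp add: algebra_simps)
  finally show ?thesis .
qed

lemma bimod_functional_F_star: assumes psi: "\<psi> \<in> hoch_cochains sc n" shows "bimod_functional n (F_star n \<psi>)"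
  unfolding bimod_functional_def
proof (intro conjI allI ballI impI)
  show "x \<notin> P n \<Longrightarrow> F_star n \<psi> x = 0" for x by (simp add: F_star_def)
  show "lin_on scp (*) (P n) (F_star n \<psi>)"
    using lin_on_F_dual[OF field_vector_space multilin_bar_cochain[OF psi]] by (simp add: lin_on_def F_star_def P_add P_sc)
  fix a x assume x: "x \<in> P n"
  show "F_star n \<psi> (lft a x) = eps a * F_star n \<psi> x"
    using F_dual_bar_cochain_lft_rgt[OF psi x, of a one] x by (simp add: F_star_def lft_P rgt_one eps_one)
  show "F_star n \<psi> (rgt x a) = F_star n \<psi> x * eps a"
    using F_dual_bar_cochain_lft_rgt[OF psi x, of one a] x by (simp add: F_star_def rgt_P lft_one[OF rgt_P[OF x]] eps_one mult.commute)
qed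

lemma F_star_in_homAA: "\<psi> \<in> hoch_cochains sc n \<Longrightarrow> F_star n \<psi> \<in> homAA scp (P n) (HP n) lft rgt eps"
  using bimod_functional_F_star homAA_iff_bimod_functional by blast

lemma F_star_add: "F_star n (\<lambda>xs. \<psi>1 xs + \<psi>2 xs) = (\<lambda>x. F_star n \<psi>1 x + F_star n \<psi>2 x)"
  by (rule ext) (simp add: F_star_def bar_cochain_add F_dual_add)

lemma F_star_scale: "F_star n (\<lambda>xs. c * \<psi> xs) = (\<lambda>x. c * F_star n \<psi> x)"
  by (rule ext) (simp add: F_star_def bar_cochain_scale F_dual_natural[of "\<lambda>v. c * v", symmetric] algebra_simps)

lemma F_star_hoch_diff:
  assumes psi: "\<psi> \<in> hoch_cochains sc n"
  shows "hom_diff P d n (F_star n \<psi>) = F_star (Suc n) (hoch_diff mul eps n \<psi>)"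
proof (rule ext)
  fix x show "hom_diff P d n (F_star n \<psi>) x = F_star (Suc n) (hoch_diff mul eps n \<psi>) x"
  proof (cases "x \<in> P (Suc n)")
    case True
    have "F_dual n (bar_cochain \<psi>) (d n x) = F_dual (Suc n) (bar_diff (bar_cochain \<psi>)) x"
      by (rule F_dual_bar_diff[OF field_vector_space multilin_bar_cochain[OF psi] True, symmetric])
    also have "\<dots> = F_dual (Suc n) (bar_cochain (hoch_diff mul eps n \<psi>)) x"
      by (rule F_dual_cong[OF _ True]) (simp add: agree_len_def bar_diff_bar_cochain_cochain)
    finally show ?thesis using True d_P[OF True] by (simp add: hom_diff_def F_star_def)
  qed (simp add: hom_diff_def F_star_def)
qed

lemma G_star_in_cochains: assumes w: "bimod_functional n w" shows "G_star n w \<in> hoch_cochains sc n"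
  unfolding hoch_cochains_def
proof (intro CollectI conjI allI impI)
  show "length xs \<noteq> n \<Longrightarrow> G_star n w xs = 0" for xs by (simp add: G_star_def)
  fix us vs :: "'a list" assume l: "length us + length vs + 1 = n"
  have "lin_on sc (*) UNIV (\<lambda>x. w (G_core n (us @ x # vs)))"
    by (rule lin_on_comp_into[OF multilin_slot[OF multilin_G_core l] G_core_in_P bimod_functional_lin[OF w]])
  then show "lin_on sc (*) UNIV (\<lambda>x. G_star n w (us @ x # vs))" using l by (simp add: G_star_def)
qed

lemma bimod_functional_G_map:
  assumes w: "bimod_functional n w" and l: "length ys = Suc (Suc n)"
  shows "w (G_map n ys) = bar_cochain (G_star n w) ys"
proof -
  obtain y0 mid yl where ys: "ys = y0 # mid @ [yl]" using l length_ge2_split[of ys] by fastforce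
  then have lm: "length mid = n" using l by simp
  show ?thesis
    using bimod_functional_lft[OF w rgt_P[OF G_core_in_P]] bimod_functional_rgt[OF w G_core_in_P] lm
    by (simp add: ys G_map_frame bar_cochain_frame G_star_def)
qed

lemma bimod_functional_additive: "bimod_functional n w \<Longrightarrow> \<forall>u\<in>P n. \<forall>v\<in>P n. w (u + v) = w u + w v"
  using bimod_functional_add by blast

lemma G_star_hom_diff:
  assumes w: "bimod_functional n w"
  shows "G_star (Suc n) (hom_diff P d n w) = hoch_diff mul eps n (G_star n w)"
proof (rule ext)
  fix xs :: "'a list"
  show "G_star (Suc n) (hom_diff P d n w) xs = hoch_diff mul eps n (G_star n w) xs"
  proof (cases "length xs = Suc n")
    case True
    have "G_star (Suc n) (hom_diff P d n w) xs = w (d n (G_core (Suc n) xs))"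
      using True G_core_in_P by (simp add: G_star_def hom_diff_def)
    also have "\<dots> = w (bar_diff (G_map n) (one # xs @ [one]))" by (simp add: d_G_core[OF True])
    also have "\<dots> = bar_diff (\<lambda>ys. w (G_map n ys)) (one # xs @ [one])"
      using bar_diff_natural_on[of "P n" w "G_map n"] bimod_functional_additive[OF w] P_closed_diff G_map_in_P by simp
    also have "\<dots> = bar_diff (bar_cochain (G_star n w)) (one # xs @ [one])"
      by (rule bar_diff_cong[of "Suc (Suc n)"]) (auto simp: agree_len_def True bimod_functional_G_map[OF w])
    also have "\<dots> = hoch_diff mul eps n (G_star n w) xs" using bar_diff_bar_cochain[OF True] by (simp add: eps_one)
    finally show ?thesis .
  next
    case False then show ?thesis by (simp add: G_star_def hoch_diff_def)
  qed
qed

lemma F_star_G_star: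
  assumes w: "bimod_functional n w" and x: "x \<in> P n"
  shows "F_star n (G_star n w) x = w (F_dual n (G_map n) x)"
proof -
  have "F_star n (G_star n w) x = F_dual n (\<lambda>ys. w (G_map n ys)) x"
    using x by (simp add: F_star_def F_dual_cong[OF _ x] agree_len_def bimod_functional_G_map[OF w])
  also have "\<dots> = w (F_dual n (G_map n) x)"
    by (rule F_dual_natural_on[symmetric, OF bimod_functional_additive[OF w] P_0 P_add_closed G_map_in_P x])
  finally show ?thesis .
qed

lemma F_star_zero: "F_star n (\<lambda>_. 0) = (\<lambda>_. 0)"
proof -
  have "bar_cochain (\<lambda>_. 0) = (\<lambda>_. 0)" by (rule ext) (simp add: bar_cochain_def)
  moreover have "F_dual n (\<lambda>_. (0::'k)) x = 0" for x using F_dual_natural[of "\<lambda>v. (0::'k)" n "\<lambda>_. 0" x] by simp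
  ultimately show ?thesis by (intro ext) (simp add: F_star_def)
qed

lemma G_star_zero: "G_star n (\<lambda>_. 0) = (\<lambda>_. 0)" by (rule ext) (simp add: G_star_def)

section \<open>The homotopy GF \<simeq> id on P\<close>

(* F_dual applied to the P-valued G_map evaluates G_n (F_n x). *)
definition GF :: "nat \<Rightarrow> 'p \<Rightarrow> 'p" where "GF n x = F_dual n (G_map n) x"

lemma GF_in_P: "x \<in> P n \<Longrightarrow> GF n x \<in> P n"
  unfolding GF_def by (rule F_dual_in) (auto simp: G_map_in_P P_0 P_add)

lemma lin_on_GF: "lin_on scp scp (P n) (GF n)"
  unfolding GF_def[abs_def] by (rule lin_on_F_dual[OF vsp multilin_G_map])

lemma GF_add: "x \<in> P n \<Longrightarrow> y \<in> P n \<Longrightarrow> GF n (x + y) = GF n x + GF n y"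
  using lin_on_GF by (simp add: lin_on_def)

lemma lft_rgt_add: "\<forall>u\<in>P n. \<forall>v\<in>P n. lft a (rgt (u + v) c) = lft a (rgt u c) + lft a (rgt v c)"
  using lin_on_lft_rgt by (simp add: lin_on_def)

lemma GF_lft_rgt: "x \<in> P n \<Longrightarrow> GF n (lft a (rgt x c)) = lft a (rgt (GF n x) c)"
proof -
  assume x: "x \<in> P n"
  have "GF n (lft a (rgt x c)) = F_dual n (\<lambda>ys. G_map n (lmul a (rmul c ys))) x"
    unfolding GF_def by (rule F_dual_lft_rgt[OF vsp multilin_G_map x])
  also have "\<dots> = F_dual n (\<lambda>ys. lft a (rgt (G_map n ys) c)) x"
    by (rule F_dual_cong[OF _ x]) (simp add: agree_len_def G_map_lmul_rmul)
  also have "\<dots> = lft a (rgt (GF n x) c)"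
    unfolding GF_def by (rule F_dual_natural_on[symmetric, OF lft_rgt_add P_0 P_add_closed G_map_in_P x])
  finally show ?thesis .
qed

lemma d_additive: "\<forall>u\<in>P (Suc n). \<forall>v\<in>P (Suc n). d n (u + v) = d n u + d n v"
  using d_add by blast

lemma d_GF: "x \<in> P (Suc n) \<Longrightarrow> d n (GF (Suc n) x) = GF n (d n x)"
proof -
  assume x: "x \<in> P (Suc n)"
  have "d n (GF (Suc n) x) = F_dual (Suc n) (\<lambda>ys. d n (G_map (Suc n) ys)) x"
    unfolding GF_def by (rule F_dual_natural_on[OF d_additive P_0 P_add_closed G_map_in_P x])
  also have "\<dots> = F_dual (Suc n) (bar_diff (G_map n)) x"
    by (rule F_dual_cong[OF _ x]) (simp add: agree_len_def d_G_map)
  also have "\<dots> = GF n (d n x)"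
    unfolding GF_def by (rule F_dual_bar_diff[OF vsp multilin_G_map x])
  finally show ?thesis .
qed

lemma aug_additive: "\<forall>u\<in>P 0. \<forall>v\<in>P 0. aug (u + v) = aug u + aug v"
  using aug_add by blast

lemma aug_GF: "x \<in> P 0 \<Longrightarrow> aug (GF 0 x) = aug x"
proof -
  assume x: "x \<in> P 0"
  have "aug (GF 0 x) = F_dual 0 (\<lambda>ys. aug (G_map 0 ys)) x"
    unfolding GF_def by (rule F_dual_natural_on[OF aug_additive P_0 P_add_closed G_map_in_P x])
  also have "\<dots> = F_dual 0 (bar_diff hd) x"
  proof (rule F_dual_cong[OF _ x], unfold agree_len_def, intro allI impI)
    fix ys :: "'a list" assume "length ys = Suc (Suc 0)"
    then have "2 \<le> length ys" by simp
    then obtain y0 mid y1 where "ys = y0 # mid @ [y1]" using length_ge2_split by blast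
    then have "ys = [y0, y1]" using \<open>length ys = Suc (Suc 0)\<close> by simp
    then show "aug (G_map 0 ys) = bar_diff hd ys" by (simp add: aug_G_map_0)
  qed
  also have "\<dots> = aug x" using F_dual_0_bar_diff[OF vector_space_A multilin_hd x] by simp
  finally show ?thesis .
qed

(* On a generator b, htpy n b lifts the cycle b - GF b - htpy (d b) along d. *)
primrec htpy :: "nat \<Rightarrow> 'p \<Rightarrow> 'p" where
  "htpy 0 = free_ext 0 (\<lambda>a b c. lft a (rgt (d_section 0 (b - GF 0 b)) c))"
| "htpy (Suc n) = free_ext (Suc n) (\<lambda>a b c. lft a (rgt (d_section (Suc n) (b - GF (Suc n) b - htpy n (d n b))) c))"

definition htpy_gen :: "nat \<Rightarrow> 'p \<Rightarrow> 'p" where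
  "htpy_gen n b = (case n of 0 \<Rightarrow> d_section 0 (b - GF 0 b) | Suc m \<Rightarrow> d_section (Suc m) (b - GF (Suc m) b - htpy m (d m b)))"

lemma htpy_eq_free_ext: "htpy n = free_ext n (\<lambda>a b c. lft a (rgt (htpy_gen n b) c))"
  by (cases n) (simp_all add: htpy_gen_def)

declare htpy.simps[simp del]

lemma htpy_gen_in_P: "htpy_gen n b \<in> P (Suc n)"
  by (cases n) (simp_all add: htpy_gen_def d_section_in_P)

lemma bilinear_on_basis_htpy_gen: "bilinear_on_basis scp n (\<lambda>a b c. lft a (rgt (htpy_gen n b) c))"
  unfolding bilinear_on_basis_def lin_on_def
proof (intro conjI ballI allI)
  fix b x y c k a
  have hP: "htpy_gen n b \<in> P (Suc n)" by (rule htpy_gen_in_P)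
  show "lft (x + y) (rgt (htpy_gen n b) c) = lft x (rgt (htpy_gen n b) c) + lft y (rgt (htpy_gen n b) c)"
    by (rule lft_addL[OF rgt_P[OF hP]])
  show "lft (sc k x) (rgt (htpy_gen n b) c) = scp k (lft x (rgt (htpy_gen n b) c))"
    by (rule lft_scL[OF rgt_P[OF hP]])
  show "lft a (rgt (htpy_gen n b) (x + y)) = lft a (rgt (htpy_gen n b) x) + lft a (rgt (htpy_gen n b) y)"
    by (simp add: rgt_addR[OF hP] lft_add[OF rgt_P[OF hP] rgt_P[OF hP]])
  show "lft a (rgt (htpy_gen n b) (sc k x)) = scp k (lft a (rgt (htpy_gen n b) x))"
    by (simp add: rgt_scR[OF hP] lft_sc[OF rgt_P[OF hP]])
qed

lemma htpy_in_P: "x \<in> P n \<Longrightarrow> htpy n x \<in> P (Suc n)"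
  unfolding htpy_eq_free_ext by (rule free_ext_in) (auto simp: lft_P rgt_P htpy_gen_in_P P_0 P_add)

lemma lin_on_htpy: "lin_on scp scp (P n) (htpy n)"
  unfolding htpy_eq_free_ext by (rule lin_on_free_ext[OF vsp bilinear_on_basis_htpy_gen])

lemma htpy_add: "x \<in> P n \<Longrightarrow> y \<in> P n \<Longrightarrow> htpy n (x + y) = htpy n x + htpy n y"
  using lin_on_htpy by (simp add: lin_on_def)

lemma htpy_lft_rgt: "x \<in> P n \<Longrightarrow> htpy n (lft a (rgt x c)) = lft a (rgt (htpy n x) c)"
proof -
  assume x: "x \<in> P n"
  have "htpy n (lft a (rgt x c)) = free_ext n (\<lambda>a' b c'. lft (mul a a') (rgt (htpy_gen n b) (mul c' c))) x"
    unfolding htpy_eq_free_ext by (rule free_ext_lft_rgt[OF vsp bilinear_on_basis_htpy_gen x])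
  also have "\<dots> = free_ext n (\<lambda>a' b c'. lft a (rgt (lft a' (rgt (htpy_gen n b) c')) c)) x"
  proof (rule free_ext_cong[OF x])
    fix a' b c'
    have hP: "htpy_gen n b \<in> P (Suc n)" by (rule htpy_gen_in_P)
    have "lft (mul a a') (rgt (htpy_gen n b) (mul c' c)) = lft (mul a a') (rgt (rgt (htpy_gen n b) c') c)"
      by (simp only: rgt_mul[OF hP])
    also have "\<dots> = lft a (lft a' (rgt (rgt (htpy_gen n b) c') c))" by (rule lft_mul[OF rgt_P[OF rgt_P[OF hP]]])
    also have "\<dots> = lft a (rgt (lft a' (rgt (htpy_gen n b) c')) c)" by (simp add: lft_rgt[OF rgt_P[OF hP]])
    finally show "lft (mul a a') (rgt (htpy_gen n b) (mul c' c)) = lft a (rgt (lft a' (rgt (htpy_gen n b) c')) c)" .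
  qed
  also have "\<dots> = lft a (rgt (htpy n x) c)"
    unfolding htpy_eq_free_ext by (rule free_ext_natural_on[symmetric, OF lft_rgt_add[of "Suc n"] P_0[of "Suc n"] P_add_closed[of "Suc n"] _ x]) (simp add: lft_P rgt_P htpy_gen_in_P)
  finally show ?thesis .
qed

lemma htpy_basis: "b \<in> basis n \<Longrightarrow> htpy n b = htpy_gen n b"
  unfolding htpy_eq_free_ext using free_ext_basis[OF vsp bilinear_on_basis_htpy_gen] lft_one[OF htpy_gen_in_P] rgt_one[OF htpy_gen_in_P] by simp

definition htpy_defect :: "nat \<Rightarrow> 'p \<Rightarrow> 'p" where
  "htpy_defect n x = x - GF n x - (case n of 0 \<Rightarrow> 0 | Suc m \<Rightarrow> htpy m (d m x))"

lemma htpy_gen_eq: "htpy_gen n b = d_section n (htpy_defect n b)"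
  by (cases n) (simp_all add: htpy_gen_def htpy_defect_def)

lemma htpy_defect_in_P: "x \<in> P n \<Longrightarrow> htpy_defect n x \<in> P n"
  by (cases n) (auto simp: htpy_defect_def intro!: P_diff GF_in_P htpy_in_P d_P)

lemma htpy_defect_add: "x \<in> P n \<Longrightarrow> y \<in> P n \<Longrightarrow>
    htpy_defect n (x + y) = htpy_defect n x + htpy_defect n y"
proof (cases n)
  case 0 assume "x \<in> P n" "y \<in> P n" then show ?thesis using 0 by (simp add: htpy_defect_def GF_add)
next
  case (Suc m) assume x: "x \<in> P n" and y: "y \<in> P n"
  then show ?thesis using Suc by (simp add: htpy_defect_def GF_add d_add htpy_add d_P)
qed

lemma lft_rgt_diff: "u \<in> P n \<Longrightarrow> v \<in> P n \<Longrightarrow> lft a (rgt (u - v) c) = lft a (rgt u c) - lft a (rgt v c)"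
proof -
  assume u: "u \<in> P n" and v: "v \<in> P n"
  show ?thesis by (simp add: rgt_diff[OF u v] lft_diff[OF rgt_P[OF u] rgt_P[OF v]])
qed

lemma htpy_defect_lft_rgt: "x \<in> P n \<Longrightarrow> htpy_defect n (lft a (rgt x c)) = lft a (rgt (htpy_defect n x) c)"
proof (cases n)
  case 0 assume x: "x \<in> P n"
  then show ?thesis using 0 by (simp add: htpy_defect_def GF_lft_rgt lft_rgt_diff GF_in_P)
next
  case (Suc m) assume x: "x \<in> P n"
  have "d m (lft a (rgt x c)) = lft a (rgt (d m x) c)" using x Suc by (simp add: d_lft d_rgt rgt_P)
  have xG: "x - GF (Suc m) x \<in> P (Suc m)" using x Suc by (simp add: P_diff GF_in_P)
  have HP: "htpy m (d m x) \<in> P (Suc m)" using x Suc by (simp add: htpy_in_P d_P)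
  have "lft a (rgt (htpy_defect n x) c) = lft a (rgt (x - GF (Suc m) x) c) - lft a (rgt (htpy m (d m x)) c)"
    using Suc lft_rgt_diff[OF xG HP] by (simp add: htpy_defect_def)
  also have "\<dots> = lft a (rgt x c) - lft a (rgt (GF (Suc m) x) c) - lft a (rgt (htpy m (d m x)) c)"
    using x Suc lft_rgt_diff[of x "Suc m" "GF (Suc m) x"] GF_in_P by simp
  finally show ?thesis using x Suc \<open>d m (lft a (rgt x c)) = lft a (rgt (d m x) c)\<close>
    by (simp add: htpy_defect_def GF_lft_rgt htpy_lft_rgt d_P)
qed

lemma d_htpy_from_basis:
  assumes gen: "\<And>b. b \<in> basis n \<Longrightarrow> d n (htpy n b) = htpy_defect n b" and x: "x \<in> P n"
  shows "d n (htpy n x) = htpy_defect n x"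
proof -
  have f1: "d n (htpy n x) = free_ext n (\<lambda>a b c. d n (htpy n (lft a (rgt b c)))) x"
    by (rule free_ext_unique[OF _ _ x]) (auto simp: htpy_add htpy_in_P d_add)
  have f2: "htpy_defect n x = free_ext n (\<lambda>a b c. htpy_defect n (lft a (rgt b c))) x"
    by (rule free_ext_unique[OF _ _ x]) (auto simp: htpy_defect_add)
  show ?thesis unfolding f1 f2
    by (rule free_ext_cong[OF x]) (simp add: htpy_lft_rgt htpy_defect_lft_rgt basis_in_P d_lft d_rgt htpy_in_P rgt_P gen)
qed

lemma d_htpy_basis_0:
  assumes b: "b \<in> basis 0"
  shows "d 0 (htpy 0 b) = htpy_defect 0 b"
proof -
  have bP: "b \<in> P 0" by (rule basis_in_P[OF b])
  have "aug (htpy_defect 0 b) = aug b - aug (GF 0 b)"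
    using additive_on_diff[of "P 0" aug b "GF 0 b"] aug_additive P_0 P_minus bP GF_in_P[OF bP] by (simp add: htpy_defect_def)
  then have "aug (htpy_defect 0 b) = 0" using aug_GF[OF bP] by simp
  then have "htpy_defect 0 b \<in> d 0 ` P 1" using ker_aug_subset_image htpy_defect_in_P[OF bP] by blast
  then show ?thesis using htpy_basis[OF b] htpy_gen_eq d_d_section by simp
qed

lemma d_htpy_basis_Suc:
  assumes IH: "\<And>x. x \<in> P m \<Longrightarrow> d m (htpy m x) = htpy_defect m x" and b: "b \<in> basis (Suc m)"
  shows "d (Suc m) (htpy (Suc m) b) = htpy_defect (Suc m) b"
proof -
  have bP: "b \<in> P (Suc m)" by (rule basis_in_P[OF b])
  have dbP: "d m b \<in> P m" by (rule d_P[OF bP])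
  have "d m (htpy_defect (Suc m) b) = d m b - d m (GF (Suc m) b) - d m (htpy m (d m b))"
    using bP by (simp add: htpy_defect_def d_diff GF_in_P htpy_in_P dbP P_diff)
  also have "\<dots> = d m b - GF m (d m b) - htpy_defect m (d m b)" by (simp add: d_GF[OF bP] IH[OF dbP])
  also have "\<dots> = (case m of 0 \<Rightarrow> 0 | Suc m' \<Rightarrow> htpy m' (d m' (d m b)))" by (simp add: htpy_defect_def)
  also have "\<dots> = 0"
  proof (cases m)
    case (Suc m')
    have "d m' (d m b) = 0" using d_d[of b m'] bP Suc by simp
    then show ?thesis using Suc lin_on_0[OF lin_on_htpy P_0] by simp
  qed simp
  finally have "htpy_defect (Suc m) b \<in> d (Suc m) ` P (Suc (Suc m))" using ker_d_subset_image htpy_defect_in_P[OF bP] by blast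
  then show ?thesis using htpy_basis[OF b] htpy_gen_eq d_d_section by simp
qed

lemma d_htpy: "x \<in> P n \<Longrightarrow> d n (htpy n x) = htpy_defect n x"
proof (induction n arbitrary: x)
  case 0 then show ?case using d_htpy_from_basis d_htpy_basis_0 by blast
next
  case (Suc m) then show ?case using d_htpy_from_basis d_htpy_basis_Suc by blast
qed

definition htpy_dual :: "nat \<Rightarrow> ('p \<Rightarrow> 'k) \<Rightarrow> 'p \<Rightarrow> 'k" where
  "htpy_dual m w = (\<lambda>y. if y \<in> P m then w (htpy m y) else 0)"

lemma htpy_lft: "x \<in> P m \<Longrightarrow> htpy m (lft a x) = lft a (htpy m x)"
  using htpy_lft_rgt[of x m a one] by (simp add: rgt_one rgt_one[OF htpy_in_P])
lemma htpy_rgt: "x \<in> P m \<Longrightarrow> htpy m (rgt x c) = rgt (htpy m x) c"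
  using htpy_lft_rgt[of x m one c] by (simp add: lft_one[OF rgt_P] lft_one[OF rgt_P[OF htpy_in_P]])

lemma bimod_functional_htpy_dual: assumes w: "bimod_functional (Suc m) w" shows "bimod_functional m (htpy_dual m w)"
  unfolding bimod_functional_def
proof (intro conjI allI ballI impI)
  show "x \<notin> P m \<Longrightarrow> htpy_dual m w x = 0" for x by (simp add: htpy_dual_def)
  show "lin_on scp (*) (P m) (htpy_dual m w)"
    using lin_on_htpy[of m] bimod_functional_lin[OF w] htpy_in_P by (simp add: lin_on_def htpy_dual_def P_add P_sc)
  fix a x assume x: "x \<in> P m"
  show "htpy_dual m w (lft a x) = eps a * htpy_dual m w x"
    using x by (simp add: htpy_dual_def lft_P htpy_lft bimod_functional_lft[OF w htpy_in_P])
  show "htpy_dual m w (rgt x a) = htpy_dual m w x * eps a"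
    using x by (simp add: htpy_dual_def rgt_P htpy_rgt bimod_functional_rgt[OF w htpy_in_P])
qed

lemma sub_F_star_G_star_eq:
  assumes w: "bimod_functional n w" and cyc: "\<forall>y\<in>P (Suc n). w (d n y) = 0" and y: "y \<in> P n"
  shows "w y - F_star n (G_star n w) y = (case n of 0 \<Rightarrow> 0 | Suc m \<Rightarrow> w (htpy m (d m y)))"
proof -
  have wa: "\<forall>u\<in>P n. \<forall>v\<in>P n. w (u + v) = w u + w v" by (rule bimod_functional_additive[OF w])
  have "w y - F_star n (G_star n w) y = w y - w (GF n y)" by (simp add: F_star_G_star[OF w y] GF_def)
  also have "\<dots> = w (y - GF n y)"
    using additive_on_diff[of "P n" w y "GF n y"] wa P_0 P_minus y GF_in_P[OF y] by simp
  also have "y - GF n y = d n (htpy n y) + (case n of 0 \<Rightarrow> 0 | Suc m \<Rightarrow> htpy m (d m y))"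
    using d_htpy[OF y] by (simp add: htpy_defect_def)
  also have "w \<dots> = w (d n (htpy n y)) + w (case n of 0 \<Rightarrow> 0 | Suc m \<Rightarrow> htpy m (d m y))"
  proof (cases n)
    case 0 then show ?thesis using bimod_functional_0[OF w] by simp
  next
    case (Suc m)
    have "htpy m (d m y) \<in> P n" using Suc y by (simp add: htpy_in_P d_P)
    then show ?thesis using wa d_P[OF htpy_in_P[OF y]] Suc by simp
  qed
  also have "\<dots> = (case n of 0 \<Rightarrow> 0 | Suc m \<Rightarrow> w (htpy m (d m y)))"
    using cyc htpy_in_P[OF y] bimod_functional_0[OF w] by (cases n) auto
  finally show ?thesis .
qed

section \<open>The homotopy FG \<simeq> id on the bar resolution\<close>

declare F_dual.simps[simp del]

definition frame_one :: "'a list \<Rightarrow> 'a list" where "frame_one xs = one # butlast (tl xs) @ [one]"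

(* bar_htpy n f = f \<circ> K_n for K (a \<otimes> x \<otimes> c) = a s(u - FG u - K (b' u)) c with u = 1 \<otimes> x \<otimes> 1;
   the list frame_one xs is u. *)
primrec bar_htpy :: "nat \<Rightarrow> ('a list \<Rightarrow> 'k) \<Rightarrow> 'a list \<Rightarrow> 'k" where
  "bar_htpy 0 f xs = f (hd xs # rmul (last xs) (frame_one xs)) - F_dual 0 (\<lambda>zs. f (hd xs # rmul (last xs) zs)) (G_map 0 (frame_one xs))"
| "bar_htpy (Suc n) f xs = f (hd xs # rmul (last xs) (frame_one xs)) - F_dual (Suc n) (\<lambda>zs. f (hd xs # rmul (last xs) zs)) (G_map (Suc n) (frame_one xs))
      - bar_diff (bar_htpy n (\<lambda>zs. f (hd xs # rmul (last xs) zs))) (frame_one xs)"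

definition bar_htpy_core :: "nat \<Rightarrow> ('a list \<Rightarrow> 'k) \<Rightarrow> 'a list \<Rightarrow> 'k" where
  "bar_htpy_core n f u = f u - F_dual n f (G_map n u) - (case n of 0 \<Rightarrow> 0 | Suc m \<Rightarrow> bar_diff (bar_htpy m f) u)"

lemma bar_htpy_eq_core: "bar_htpy n f xs = bar_htpy_core n (\<lambda>zs. f (hd xs # rmul (last xs) zs)) (frame_one xs)"
  by (cases n) (simp_all add: bar_htpy_core_def)

declare bar_htpy.simps[simp del]

lemma bar_htpy_natural:
  assumes l: "\<forall>x y. l (x + y) = l x + l y"
  shows "bar_htpy n (\<lambda>ys. l (f ys)) xs = l (bar_htpy n f xs)"
proof -
  have l0: "l 0 = 0" and ld: "\<And>x y. l (x - y) = l x - l y" using additive_on[of UNIV l] l by auto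
  show ?thesis
  proof (induction n arbitrary: f xs)
    case 0 then show ?case by (simp add: bar_htpy_eq_core bar_htpy_core_def F_dual_natural[OF l] ld)
  next
    case (Suc n)
    have e: "bar_htpy n (\<lambda>zs. l (f (hd xs # rmul (last xs) zs))) = (\<lambda>ys. l (bar_htpy n (\<lambda>zs. f (hd xs # rmul (last xs) zs)) ys))"
      by (rule ext) (rule Suc.IH)
    have "bar_diff (bar_htpy n (\<lambda>zs. l (f (hd xs # rmul (last xs) zs)))) (frame_one xs) = l (bar_diff (bar_htpy n (\<lambda>zs. f (hd xs # rmul (last xs) zs))) (frame_one xs))"
      unfolding e by (simp add: bar_diff_natural[OF l])
    then show ?case by (simp add: bar_htpy_eq_core bar_htpy_core_def F_dual_natural[OF l] ld)
  qed
qed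

lemma bar_htpy_add: "bar_htpy n (\<lambda>ys. f ys + h ys) xs = bar_htpy n f xs + bar_htpy n h xs"
proof (induction n arbitrary: f h xs)
  case 0 then show ?case by (simp add: bar_htpy_eq_core bar_htpy_core_def F_dual_add)
next
  case (Suc n)
  have "bar_diff (bar_htpy n (\<lambda>zs. f (hd xs # rmul (last xs) zs) + h (hd xs # rmul (last xs) zs))) (frame_one xs)
      = bar_diff (bar_htpy n (\<lambda>zs. f (hd xs # rmul (last xs) zs))) (frame_one xs) + bar_diff (bar_htpy n (\<lambda>zs. h (hd xs # rmul (last xs) zs))) (frame_one xs)"
  proof -
    have e: "bar_htpy n (\<lambda>zs. f (hd xs # rmul (last xs) zs) + h (hd xs # rmul (last xs) zs))
        = (\<lambda>ys. bar_htpy n (\<lambda>zs. f (hd xs # rmul (last xs) zs)) ys + bar_htpy n (\<lambda>zs. h (hd xs # rmul (last xs) zs)) ys)"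
      by (rule ext) (rule Suc.IH)
    show ?thesis unfolding e by (rule bar_diff_add)
  qed
  then show ?case by (simp add: bar_htpy_eq_core bar_htpy_core_def F_dual_add)
qed

lemma bar_htpy_diff: "bar_htpy n (\<lambda>ys. f ys - h ys) xs = bar_htpy n f xs - bar_htpy n h xs"
  using bar_htpy_add[of n f "\<lambda>ys. - h ys" xs] bar_htpy_natural[of uminus n h xs] by simp

lemma bar_htpy_zero: "bar_htpy n (\<lambda>ys. 0) xs = 0"
  using bar_htpy_natural[of "\<lambda>v. 0" n "\<lambda>ys. 0" xs] by simp

lemma length_frame_one: "length xs = Suc (Suc n) \<Longrightarrow> length (frame_one xs) = Suc (Suc n)"
  by (simp add: frame_one_def)

lemma bar_htpy_cong: "agree_len (Suc (Suc (Suc n))) f f' \<Longrightarrow> length xs = Suc (Suc n) \<Longrightarrow>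
    bar_htpy n f xs = bar_htpy n f' xs"
proof (induction n arbitrary: f f' xs)
  case 0
  have e: "agree_len (Suc (Suc 0)) (\<lambda>zs. f (hd xs # rmul (last xs) zs)) (\<lambda>zs. f' (hd xs # rmul (last xs) zs))"
    using "0.prems"(1) by (auto simp: agree_len_def)
  show ?case using e "0.prems"(2) F_dual_cong[OF e G_map_in_P] by (simp add: bar_htpy_eq_core bar_htpy_core_def agree_len_def length_frame_one)
next
  case (Suc n)
  have e: "agree_len (Suc (Suc (Suc n))) (\<lambda>zs. f (hd xs # rmul (last xs) zs)) (\<lambda>zs. f' (hd xs # rmul (last xs) zs))"
    using Suc.prems(1) by (auto simp: agree_len_def)
  have b: "bar_diff (bar_htpy n (\<lambda>zs. f (hd xs # rmul (last xs) zs))) (frame_one xs) = bar_diff (bar_htpy n (\<lambda>zs. f' (hd xs # rmul (last xs) zs))) (frame_one xs)"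
    by (rule bar_diff_cong[of "Suc (Suc n)"]) (use Suc.IH[OF e] Suc.prems(2) in \<open>auto simp: agree_len_def length_frame_one\<close>)
  show ?case using e Suc.prems(2) F_dual_cong[OF e G_map_in_P] b by (simp add: bar_htpy_eq_core bar_htpy_core_def agree_len_def length_frame_one)
qed

lemma bar_htpy_core_cong: "agree_len (Suc (Suc n)) f f' \<Longrightarrow> length u = Suc (Suc n) \<Longrightarrow>
    bar_htpy_core n f u = bar_htpy_core n f' u"
proof -
  assume e: "agree_len (Suc (Suc n)) f f'" and l: "length u = Suc (Suc n)"
  have b: "(case n of 0 \<Rightarrow> 0 | Suc m \<Rightarrow> bar_diff (bar_htpy m f) u) = (case n of 0 \<Rightarrow> 0 | Suc m \<Rightarrow> bar_diff (bar_htpy m f') u)"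
  proof (cases n)
    case (Suc m)
    have "bar_diff (bar_htpy m f) u = bar_diff (bar_htpy m f') u"
      by (rule bar_diff_cong[of "Suc (Suc m)"]) (use bar_htpy_cong e l Suc in \<open>auto simp: agree_len_def\<close>)
    then show ?thesis using Suc by simp
  qed simp
  show ?thesis using e l F_dual_cong[OF e G_map_in_P] b by (simp add: bar_htpy_core_def agree_len_def)
qed

lemma bar_htpy_lmul_rmul:
  assumes l: "length xs = Suc (Suc n)"
  shows "bar_htpy n f (lmul a (rmul c xs)) = bar_htpy n (\<lambda>ys. f (lmul a (rmul c ys))) xs"
proof -
  obtain x0 mid xl where xs: "xs = x0 # mid @ [xl]" using l length_ge2_split[of xs] by fastforce
  have e1: "lmul a (rmul c xs) = mul a x0 # mid @ [mul xl c]" by (simp add: xs rmul_def butlast_append)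
  have eq: "agree_len (Suc (Suc n)) (\<lambda>zs. f (mul a x0 # rmul (mul xl c) zs)) (\<lambda>zs. f (lmul a (rmul c (x0 # rmul xl zs))))"
    by (auto simp: agree_len_def rmul_Cons_len rmul_rmul)
  have lm: "length (one # mid @ [one]) = Suc (Suc n)" using l xs by simp
  have "bar_htpy n f (lmul a (rmul c xs)) = bar_htpy_core n (\<lambda>zs. f (mul a x0 # rmul (mul xl c) zs)) (one # mid @ [one])"
    by (simp add: bar_htpy_eq_core e1 frame_one_def)
  also have "\<dots> = bar_htpy_core n (\<lambda>zs. f (lmul a (rmul c (x0 # rmul xl zs)))) (one # mid @ [one])"
    by (rule bar_htpy_core_cong[OF eq lm])
  also have "\<dots> = bar_htpy n (\<lambda>ys. f (lmul a (rmul c ys))) xs" by (simp add: bar_htpy_eq_core xs frame_one_def)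
  finally show ?thesis .
qed

lemma F_dual_bar_diff_G_map:
  assumes X: "multilin (*) (Suc n) \<Xi>" and l: "length u = Suc (Suc n)"
  shows "F_dual n (bar_diff \<Xi>) (G_map n u) = (case n of 0 \<Rightarrow> bar_diff \<Xi> u | Suc m \<Rightarrow> bar_diff (\<lambda>z. F_dual m \<Xi> (G_map m z)) u)"
proof (cases n)
  case 0
  obtain u0 mid u1 where "u = u0 # mid @ [u1]" using l length_ge2_split[of u] by fastforce
  then have u: "u = [u0, u1]" using l 0 by simp
  have "F_dual 0 (bar_diff \<Xi>) (G_map 0 u) = \<Xi> [aug (G_map 0 u)]" using F_dual_0_bar_diff[OF field_vector_space _ G_map_in_P] X 0 by simp
  then show ?thesis using 0 by (simp add: u aug_G_map_0)
next
  case (Suc m)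
  have X': "multilin (*) (Suc (Suc m)) \<Xi>" using X Suc by simp
  have "F_dual (Suc m) (bar_diff \<Xi>) (G_map (Suc m) u) = F_dual m \<Xi> (d m (G_map (Suc m) u))"
    by (rule F_dual_bar_diff[OF field_vector_space X' G_map_in_P])
  also have "\<dots> = F_dual m \<Xi> (bar_diff (G_map m) u)" using l Suc by (simp add: d_G_map)
  also have "\<dots> = bar_diff (\<lambda>z. F_dual m \<Xi> (G_map m z)) u"
  proof -
    have "\<forall>x\<in>P m. \<forall>y\<in>P m. F_dual m \<Xi> (x + y) = F_dual m \<Xi> x + F_dual m \<Xi> y"
      using lin_on_F_dual[OF field_vector_space X'] by (simp add: lin_on_def)
    then show ?thesis using bar_diff_natural_on[of "P m" "F_dual m \<Xi>" "G_map m" u] P_closed_diff G_map_in_P by simp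
  qed
  finally show ?thesis using Suc by simp
qed

lemma bar_diff_htpy_identity:
  assumes IH: "\<And>xs. length xs = Suc (Suc m) \<Longrightarrow> g xs - F_dual m g (G_map m xs)
      = bar_htpy m (bar_diff g) xs + (case m of 0 \<Rightarrow> 0 | Suc m' \<Rightarrow> bar_diff (bar_htpy m' g) xs)"
    and l: "length u = Suc (Suc (Suc m))"
  shows "bar_diff g u - bar_diff (\<lambda>z. F_dual m g (G_map m z)) u = bar_diff (bar_htpy m (bar_diff g)) u"
proof -
  have "agree_len (Suc (Suc m)) (\<lambda>z. g z - F_dual m g (G_map m z))
      (\<lambda>z. bar_htpy m (bar_diff g) z + (case m of 0 \<Rightarrow> 0 | Suc m' \<Rightarrow> bar_diff (bar_htpy m' g) z))"
    unfolding agree_len_def using IH by blast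
  then have "bar_diff (\<lambda>z. g z - F_dual m g (G_map m z)) u
      = bar_diff (\<lambda>z. bar_htpy m (bar_diff g) z + (case m of 0 \<Rightarrow> 0 | Suc m' \<Rightarrow> bar_diff (bar_htpy m' g) z)) u"
    by (rule bar_diff_cong) (simp add: l)
  also have "\<dots> = bar_diff (bar_htpy m (bar_diff g)) u"
    by (cases m) (simp_all add: bar_diff_zero bar_diff_add bar_diff_bar_diff)
  finally show ?thesis by (simp add: bar_diff_diff)
qed

lemma bar_htpy_identity_frame:
  assumes f: "multilin (*) (Suc (Suc n)) f" and lm: "length mid = n"
    and IH: "\<And>m f xs. n = Suc m \<Longrightarrow> multilin (*) (Suc (Suc m)) f \<Longrightarrow> length xs = Suc (Suc m) \<Longrightarrow>
         f xs - F_dual m f (G_map m xs) = bar_htpy m (bar_diff f) xs + (case m of 0 \<Rightarrow> 0 | Suc m' \<Rightarrow> bar_diff (bar_htpy m' f) xs)"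
  shows "f (one # mid @ [one]) - F_dual n f (G_map n (one # mid @ [one])) =
     bar_htpy n (bar_diff f) (one # mid @ [one]) + (case n of 0 \<Rightarrow> 0 | Suc m \<Rightarrow> bar_diff (bar_htpy m f) (one # mid @ [one]))"
proof -
  define u where "u = one # mid @ [one]"
  have lu: "length u = Suc (Suc n)" using lm by (simp add: u_def)
  define sf where "sf = (\<lambda>zs. f (one # zs))"
  have msf: "multilin (*) (Suc n) sf" unfolding sf_def using multilin_Cons[OF f, of one] by simp
  have uu_u: "frame_one u = u" by (simp add: u_def frame_one_def)
  have e1: "agree_len (Suc (Suc n)) (\<lambda>zs. bar_diff f (one # rmul (last u) zs)) (\<lambda>zs. f zs - bar_diff sf zs)"
  proof (unfold agree_len_def, intro allI impI)
    fix zs :: "'a list" assume "length zs = Suc (Suc n)"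
    then have "zs \<noteq> []" by auto
    then show "bar_diff f (one # rmul (last u) zs) = f zs - bar_diff sf zs"
      by (simp add: u_def rmul_one bar_diff_one sf_def)
  qed
  have Kb1: "bar_htpy n (bar_diff f) u = bar_htpy_core n (\<lambda>zs. f zs - bar_diff sf zs) u"
    unfolding bar_htpy_eq_core uu_u using bar_htpy_core_cong[OF e1 lu] by (simp add: u_def)
  have Kf: "bar_htpy m (\<lambda>zs. f zs - bar_diff sf zs) = (\<lambda>ys. bar_htpy m f ys - bar_htpy m (bar_diff sf) ys)" for m
    by (rule ext) (rule bar_htpy_diff)
  show ?thesis
  proof (cases n)
    case 0
    have "F_dual 0 (bar_diff sf) (G_map 0 u) = bar_diff sf u" using F_dual_bar_diff_G_map[OF msf lu] 0 by simp
    then show ?thesis using Kb1 0 by (simp add: bar_htpy_core_def F_dual_diff u_def[symmetric])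
  next
    case (Suc m)
    have T: "F_dual n (bar_diff sf) (G_map n u) = bar_diff (\<lambda>z. F_dual m sf (G_map m z)) u" using F_dual_bar_diff_G_map[OF msf lu] Suc by simp
    have msf': "multilin (*) (Suc (Suc m)) sf" using msf Suc by simp
    have B: "bar_diff sf u - bar_diff (\<lambda>z. F_dual m sf (G_map m z)) u = bar_diff (bar_htpy m (bar_diff sf)) u"
      using bar_diff_htpy_identity[OF IH[OF Suc msf']] lu Suc by simp
    have "bar_htpy n (bar_diff f) u = (f u - bar_diff sf u) - (F_dual n f (G_map n u) - F_dual n (bar_diff sf) (G_map n u))
        - (bar_diff (bar_htpy m f) u - bar_diff (bar_htpy m (bar_diff sf)) u)"
      using Kb1 Suc by (simp add: bar_htpy_core_def F_dual_diff Kf bar_diff_diff)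
    then show ?thesis using T B Suc by (simp add: u_def[symmetric] algebra_simps)
  qed
qed

lemma bar_htpy_identity:
  "multilin (*) (Suc (Suc n)) f \<Longrightarrow> length xs = Suc (Suc n) \<Longrightarrow>
    f xs - F_dual n f (G_map n xs) = bar_htpy n (bar_diff f) xs + (case n of 0 \<Rightarrow> 0 | Suc m \<Rightarrow> bar_diff (bar_htpy m f) xs)"
proof (induction n arbitrary: f xs rule: less_induct)
  case (less n)
  obtain a0 mid c where xs: "xs = a0 # mid @ [c]" using less.prems(2) length_ge2_split[of xs] by fastforce
  have lm: "length mid = n" using less.prems(2) xs by simp
  define f' where "f' = (\<lambda>ys. f (lmul a0 (rmul c ys)))"
  have mf': "multilin (*) (Suc (Suc n)) f'" unfolding f'_def using multilin_rmul[OF multilin_lmul[OF less.prems(1)], of a0 c] by simp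
  define u where "u = one # mid @ [one]"
  have lu: "length u = Suc (Suc n)" using lm by (simp add: u_def)
  have xsu: "xs = lmul a0 (rmul c u)" by (simp add: xs u_def rmul_def butlast_append mul_oneL mul_oneR)
  have I: "f' u - F_dual n f' (G_map n u) = bar_htpy n (bar_diff f') u + (case n of 0 \<Rightarrow> 0 | Suc m \<Rightarrow> bar_diff (bar_htpy m f') u)"
    unfolding u_def by (rule bar_htpy_identity_frame[OF mf' lm]) (rule less.IH, auto)
  have gP: "G_core n mid \<in> P n" by (rule G_core_in_P)
  have a1: "f xs = f' u" by (simp add: xsu f'_def)
  have a2: "F_dual n f (G_map n xs) = F_dual n f' (G_map n u)"
  proof -
    have "F_dual n f (G_map n xs) = F_dual n f (lft a0 (rgt (G_core n mid) c))" by (simp add: xs G_map_frame)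
    also have "\<dots> = F_dual n f' (G_core n mid)" unfolding f'_def by (rule F_dual_lft_rgt[OF field_vector_space less.prems(1) gP])
    also have "\<dots> = F_dual n f' (G_map n u)" by (simp add: u_def G_map_frame lft_one[OF gP] rgt_one[OF gP])
    finally show ?thesis .
  qed
  have a3: "bar_htpy n (bar_diff f) xs = bar_htpy n (bar_diff f') u"
  proof -
    have "bar_htpy n (bar_diff f) xs = bar_htpy n (\<lambda>ys. bar_diff f (lmul a0 (rmul c ys))) u" unfolding xsu by (rule bar_htpy_lmul_rmul[OF lu])
    also have "(\<lambda>ys. bar_diff f (lmul a0 (rmul c ys))) = bar_diff f'" by (rule ext) (simp add: f'_def bar_diff_lmul_rmul)
    finally show ?thesis .
  qed
  have a4: "(case n of 0 \<Rightarrow> 0 | Suc m \<Rightarrow> bar_diff (bar_htpy m f) xs) = (case n of 0 \<Rightarrow> 0 | Suc m \<Rightarrow> bar_diff (bar_htpy m f') u)"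
  proof (cases n)
    case (Suc m)
    have "bar_diff (bar_htpy m f) xs = bar_diff (\<lambda>z. bar_htpy m f (lmul a0 (rmul c z))) u" unfolding xsu by (rule bar_diff_lmul_rmul)
    also have "\<dots> = bar_diff (bar_htpy m f') u"
      by (rule bar_diff_cong[of "Suc (Suc m)"]) (auto simp: agree_len_def f'_def bar_htpy_lmul_rmul lu Suc)
    finally show ?thesis using Suc by simp
  qed simp
  show ?case using I a1 a2 a3 a4 by simp
qed

lemma bar_htpy_core_add: "bar_htpy_core n (\<lambda>z. f1 z + f2 z) u = bar_htpy_core n f1 u + bar_htpy_core n f2 u"
proof -
  have "bar_htpy m (\<lambda>z. f1 z + f2 z) = (\<lambda>z. bar_htpy m f1 z + bar_htpy m f2 z)" for m by (rule ext) (rule bar_htpy_add)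
  then show ?thesis by (cases n) (simp_all add: bar_htpy_core_def F_dual_add bar_diff_add)
qed

lemma bar_htpy_core_natural:
  assumes l: "\<forall>x y. l (x + y) = l x + l y"
  shows "bar_htpy_core n (\<lambda>z. l (f z)) u = l (bar_htpy_core n f u)"
proof -
  have l0: "l 0 = 0" and ld: "\<And>x y. l (x - y) = l x - l y" using additive_on[of UNIV l] l by auto
  have "bar_htpy m (\<lambda>z. l (f z)) = (\<lambda>z. l (bar_htpy m f z))" for m by (rule ext) (rule bar_htpy_natural[OF l])
  then show ?thesis by (cases n) (simp_all add: bar_htpy_core_def F_dual_natural[OF l] bar_diff_natural[OF l] ld l0)
qed

lemma lin_on_bar_htpy_core:
  assumes "\<And>x y. agree_len (Suc (Suc n)) (F (x + y)) (\<lambda>z. F x z + F y z)"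
    and "\<And>k x. agree_len (Suc (Suc n)) (F (sc k x)) (\<lambda>z. k * F x z)"
    and l: "length u = Suc (Suc n)"
  shows "lin_on sc (*) UNIV (\<lambda>x. bar_htpy_core n (F x) u)"
  unfolding lin_on_def
proof (intro conjI ballI allI)
  fix x y show "bar_htpy_core n (F (x + y)) u = bar_htpy_core n (F x) u + bar_htpy_core n (F y) u"
    using bar_htpy_core_cong[OF assms(1) l] bar_htpy_core_add by simp
next
  fix k x show "bar_htpy_core n (F (sc k x)) u = k * bar_htpy_core n (F x) u"
    using bar_htpy_core_cong[OF assms(2) l] bar_htpy_core_natural[of "\<lambda>v. k * v"] by (simp add: algebra_simps)
qed

lemma multilin_bar_htpy_core_frame:
  assumes \<Phi>: "multilin (*) (Suc (Suc n)) \<Phi>"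
    and IH: "\<And>m. n = Suc m \<Longrightarrow> multilin (*) (Suc (Suc m)) (bar_htpy m \<Phi>)"
  shows "multilin (*) n (\<lambda>mid. bar_htpy_core n \<Phi> (one # mid @ [one]))"
  unfolding multilin_def
proof (intro allI impI)
  fix us vs :: "'a list" assume l: "length us + length vs + 1 = n"
  have A: "lin_on sc (*) UNIV (\<lambda>x. \<Phi> (one # (us @ x # vs) @ [one]))"
    using multilin_slot[OF multilin_frame[OF \<Phi>] l] by simp
  have B: "lin_on sc (*) UNIV (\<lambda>x. F_dual n \<Phi> (G_map n (one # (us @ x # vs) @ [one])))"
    using lin_on_comp_into[OF multilin_slot[OF multilin_frame[OF multilin_G_map] l] G_map_in_P lin_on_F_dual[OF field_vector_space \<Phi>]] by simp
  have C: "lin_on sc (*) UNIV (\<lambda>x. (case n of 0 \<Rightarrow> 0 | Suc m \<Rightarrow> bar_diff (bar_htpy m \<Phi>) (one # us @ x # vs @ [one])))"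
  proof (cases n)
    case 0 then show ?thesis by (simp add: lin_on_def)
  next
    case (Suc m)
    have "multilin (*) (Suc (Suc (Suc m))) (bar_diff (bar_htpy m \<Phi>))" by (rule multilin_bar_diff[OF field_vector_space IH[OF Suc]])
    from multilin_slot[OF multilin_frame[OF this] l[unfolded Suc]] show ?thesis using Suc by simp
  qed
  show "lin_on sc (*) UNIV (\<lambda>x. bar_htpy_core n \<Phi> (one # (us @ x # vs) @ [one]))"
    using lin_on_diff[OF field_vector_space lin_on_diff[OF field_vector_space A B] C] by (simp add: bar_htpy_core_def)
qed

lemma multilin_bar_htpy_step:
  assumes f: "multilin (*) (Suc (Suc (Suc n))) f"
    and IH: "\<And>m \<Phi>. n = Suc m \<Longrightarrow> multilin (*) (Suc (Suc (Suc m))) \<Phi> \<Longrightarrow> multilin (*) (Suc (Suc m)) (bar_htpy m \<Phi>)"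
  shows "multilin (*) (Suc (Suc n)) (bar_htpy n f)"
proof -
  have frame: "bar_htpy n f (a # mid @ [c]) = bar_htpy_core n (\<lambda>zs. f (a # rmul c zs)) (one # mid @ [one])"
    for a mid c
    by (simp add: bar_htpy_eq_core frame_one_def)
  have lin_first: "f ((x + y) # zs) = f (x # zs) + f (y # zs) \<and> f (sc k x # zs) = k * f (x # zs)"
    if "length zs = Suc (Suc n)" for x y k zs
    using multilin_slot[OF f, of "[]" zs] that unfolding lin_on_def by simp
  have lin_last: "f (a # rmul (x + y) zs) = f (a # rmul x zs) + f (a # rmul y zs) \<and>
      f (a # rmul (sc k x) zs) = k * f (a # rmul x zs)" if "length zs = Suc (Suc n)" for a x y k zs
  proof -
    have "zs \<noteq> []" using that by auto
    then show ?thesis using lin_on_rmul[OF multilin_Cons[OF f, of a], of zs] that unfolding lin_on_def by simp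
  qed
  show ?thesis
  proof (rule multilinI_frame)
    fix mid :: "'a list" and c assume "length mid = n"
    then show "lin_on sc (*) UNIV (\<lambda>x. bar_htpy n f (x # mid @ [c]))"
      unfolding frame by (intro lin_on_bar_htpy_core) (simp_all add: agree_len_def lin_first)
  next
    fix a and mid :: "'a list" assume "length mid = n"
    then show "lin_on sc (*) UNIV (\<lambda>x. bar_htpy n f (a # mid @ [x]))"
      unfolding frame by (intro lin_on_bar_htpy_core) (simp_all add: agree_len_def lin_last)
  next
    fix a c
    have \<Phi>: "multilin (*) (Suc (Suc n)) (\<lambda>zs. f (a # rmul c zs))"
      using multilin_rmul[OF multilin_Cons[OF f, of a], of c] by simp
    show "multilin (*) n (\<lambda>mid. bar_htpy n f (a # mid @ [c]))"
      unfolding frame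
    proof (rule multilin_bar_htpy_core_frame[OF \<Phi>])
      fix m assume "n = Suc m"
      then show "multilin (*) (Suc (Suc m)) (bar_htpy m (\<lambda>zs. f (a # rmul c zs)))" using IH \<Phi> by simp
    qed
  qed
qed

lemma multilin_bar_htpy: "multilin (*) (Suc (Suc (Suc n))) f \<Longrightarrow> multilin (*) (Suc (Suc n)) (bar_htpy n f)"
proof (induction n arbitrary: f)
  case (0 f) show ?case by (rule multilin_bar_htpy_step[OF "0.prems"]) simp
next
  case (Suc n f)
  show ?case
  proof (rule multilin_bar_htpy_step[OF Suc.prems])
    fix m \<Phi> assume "Suc n = Suc m" "multilin (*) (Suc (Suc (Suc m))) \<Phi>"
    then show "multilin (*) (Suc (Suc m)) (bar_htpy m \<Phi>)" using Suc.IH by simp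
  qed
qed

definition htpy_cochain :: "nat \<Rightarrow> ('a list \<Rightarrow> 'k) \<Rightarrow> 'a list \<Rightarrow> 'k" where
  "htpy_cochain m \<psi> = (\<lambda>xs. if length xs = m then bar_htpy m (bar_cochain \<psi>) (one # xs @ [one]) else 0)"

lemma htpy_cochain_in_cochains: assumes psi: "\<psi> \<in> hoch_cochains sc (Suc m)" shows "htpy_cochain m \<psi> \<in> hoch_cochains sc m"
  unfolding hoch_cochains_def
proof (intro CollectI conjI allI impI)
  show "length xs \<noteq> m \<Longrightarrow> htpy_cochain m \<psi> xs = 0" for xs by (simp add: htpy_cochain_def)
  fix us vs :: "'a list" assume l: "length us + length vs + 1 = m"
  have "multilin (*) m (\<lambda>xs. bar_htpy m (bar_cochain \<psi>) (one # xs @ [one]))"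
    by (rule multilin_frame[OF multilin_bar_htpy]) (use multilin_bar_cochain[OF psi] in simp)
  from multilin_slot[OF this l] show "lin_on sc (*) UNIV (\<lambda>x. htpy_cochain m \<psi> (us @ x # vs))"
    using l by (simp add: htpy_cochain_def)
qed

lemma bar_htpy_bar_cochain:
  assumes l: "length ys = Suc (Suc m)"
  shows "bar_htpy m (bar_cochain \<psi>) ys = bar_cochain (htpy_cochain m \<psi>) ys"
proof -
  obtain a0 mid c where ys: "ys = a0 # mid @ [c]" using l length_ge2_split[of ys] by fastforce
  have lm: "length mid = m" using l ys by simp
  define u where "u = one # mid @ [one]"
  have lu: "length u = Suc (Suc m)" using lm by (simp add: u_def)
  have ysu: "ys = lmul a0 (rmul c u)" by (simp add: ys u_def rmul_def butlast_append mul_oneL mul_oneR)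
  have "bar_htpy m (bar_cochain \<psi>) ys = bar_htpy m (\<lambda>zs. bar_cochain \<psi> (lmul a0 (rmul c zs))) u" unfolding ysu by (rule bar_htpy_lmul_rmul[OF lu])
  also have "\<dots> = bar_htpy m (\<lambda>zs. (eps a0 * eps c) * bar_cochain \<psi> zs) u"
    by (rule bar_htpy_cong[OF _ lu]) (simp add: agree_len_def bar_cochain_lmul_rmul)
  also have "\<dots> = (eps a0 * eps c) * bar_htpy m (bar_cochain \<psi>) u" by (rule bar_htpy_natural) (simp add: algebra_simps)
  also have "\<dots> = bar_cochain (htpy_cochain m \<psi>) ys" by (simp add: ys bar_cochain_frame htpy_cochain_def lm u_def)
  finally show ?thesis .
qed

lemma sub_G_star_F_star_eq:
  assumes psi: "\<psi> \<in> hoch_cochains sc n" and cyc: "hoch_diff mul eps n \<psi> = (\<lambda>_. 0)"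
    and l: "length xs = n"
  shows "\<psi> xs - G_star n (F_star n \<psi>) xs = (case n of 0 \<Rightarrow> 0 | Suc m \<Rightarrow> hoch_diff mul eps m (htpy_cochain m \<psi>) xs)"
proof -
  define u where "u = one # xs @ [one]"
  have lu: "length u = Suc (Suc n)" using l by (simp add: u_def)
  have KI': "bar_cochain \<psi> u - F_dual n (bar_cochain \<psi>) (G_map n u) = bar_htpy n (bar_diff (bar_cochain \<psi>)) u + (case n of 0 \<Rightarrow> 0 | Suc m \<Rightarrow> bar_diff (bar_htpy m (bar_cochain \<psi>)) u)"
    by (rule bar_htpy_identity[OF multilin_bar_cochain[OF psi] lu])
  have gP: "G_core n xs \<in> P n" by (rule G_core_in_P)
  have a1: "bar_cochain \<psi> u = \<psi> xs" by (simp add: u_def bar_cochain_frame eps_one)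
  have a2: "F_dual n (bar_cochain \<psi>) (G_map n u) = G_star n (F_star n \<psi>) xs"
    using l gP by (simp add: u_def G_map_frame lft_one[OF gP] rgt_one[OF gP] G_star_def F_star_def)
  have a3: "bar_htpy n (bar_diff (bar_cochain \<psi>)) u = 0"
  proof -
    have "bar_htpy n (bar_diff (bar_cochain \<psi>)) u = bar_htpy n (\<lambda>_. 0) u"
      by (rule bar_htpy_cong[OF _ lu]) (simp add: agree_len_def bar_diff_bar_cochain_cochain cyc bar_cochain_def)
    then show ?thesis by (simp add: bar_htpy_zero)
  qed
  have a4: "(case n of 0 \<Rightarrow> 0 | Suc m \<Rightarrow> bar_diff (bar_htpy m (bar_cochain \<psi>)) u) = (case n of 0 \<Rightarrow> 0 | Suc m \<Rightarrow> hoch_diff mul eps m (htpy_cochain m \<psi>) xs)"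
  proof (cases n)
    case (Suc m)
    have "bar_diff (bar_htpy m (bar_cochain \<psi>)) u = bar_diff (bar_cochain (htpy_cochain m \<psi>)) u"
      by (rule bar_diff_cong[of "Suc (Suc m)"]) (auto simp: agree_len_def bar_htpy_bar_cochain lu Suc)
    also have "\<dots> = hoch_diff mul eps m (htpy_cochain m \<psi>) xs" using bar_diff_bar_cochain[of xs m] l Suc by (simp add: u_def eps_one)
    finally show ?thesis using Suc by simp
  qed simp
  show ?thesis using KI' a1 a2 a3 a4 by simp
qed

section \<open>Cohomology\<close>

lemma F_star_cocycle:
  "\<psi> \<in> hoch_cocycles sc mul eps n \<Longrightarrow> F_star n \<psi> \<in> hom_cocycles scp P HP lft rgt eps d n"
  using F_star_in_homAA F_star_hoch_diff F_star_zero by (simp add: hoch_cocycles_def hom_cocycles_def)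

lemma F_star_coboundary:
  assumes "\<psi> \<in> hoch_coboundaries sc mul eps n"
  shows "F_star n \<psi> \<in> hom_coboundaries scp P HP lft rgt eps d n"
proof (cases n)
  case 0 then show ?thesis using assms F_star_zero by (simp add: hoch_coboundaries_def hom_coboundaries_def)
next
  case (Suc m)
  then obtain \<chi> where \<chi>: "\<chi> \<in> hoch_cochains sc m" "\<psi> = hoch_diff mul eps m \<chi>"
    using assms by (auto simp: hoch_coboundaries_def)
  then have "F_star n \<psi> = hom_diff P d m (F_star m \<chi>)" using F_star_hoch_diff Suc by simp
  then show ?thesis using F_star_in_homAA[OF \<chi>(1)] Suc by (simp add: hom_coboundaries_def)
qed

lemma G_star_cocycle:
  assumes "w \<in> hom_cocycles scp P HP lft rgt eps d n"
  shows "G_star n w \<in> hoch_cocycles sc mul eps n"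
proof -
  have wb: "bimod_functional n w" using assms homAA_iff_bimod_functional by (simp add: hom_cocycles_def)
  have "hoch_diff mul eps n (G_star n w) = G_star (Suc n) (hom_diff P d n w)"
    by (simp add: G_star_hom_diff[OF wb])
  also have "\<dots> = (\<lambda>_. 0)" using assms G_star_zero by (simp add: hom_cocycles_def)
  finally show ?thesis using G_star_in_cochains[OF wb] by (simp add: hoch_cocycles_def)
qed

lemma G_star_coboundary:
  assumes "w \<in> hom_coboundaries scp P HP lft rgt eps d n"
  shows "G_star n w \<in> hoch_coboundaries sc mul eps n"
proof (cases n)
  case 0 then show ?thesis using assms G_star_zero by (simp add: hoch_coboundaries_def hom_coboundaries_def)
next
  case (Suc m)
  then obtain v where v: "v \<in> homAA scp (P m) (HP m) lft rgt eps" "w = hom_diff P d m v"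
    using assms by (auto simp: hom_coboundaries_def)
  then have vb: "bimod_functional m v" using homAA_iff_bimod_functional by blast
  have "G_star n w = hoch_diff mul eps m (G_star m v)" using G_star_hom_diff[OF vb] v(2) Suc by simp
  then show ?thesis using G_star_in_cochains[OF vb] Suc by (simp add: hoch_coboundaries_def)
qed

lemma sub_G_star_F_star_coboundary:
  assumes \<psi>: "\<psi> \<in> hoch_cocycles sc mul eps n"
  shows "(\<lambda>xs. \<psi> xs - G_star n (F_star n \<psi>) xs) \<in> hoch_coboundaries sc mul eps n"
proof -
  have \<psi>c: "\<psi> \<in> hoch_cochains sc n" and \<psi>d: "hoch_diff mul eps n \<psi> = (\<lambda>_. 0)"
    using \<psi> by (auto simp: hoch_cocycles_def)
  have eq: "\<psi> xs - G_star n (F_star n \<psi>) xs = (case n of 0 \<Rightarrow> 0 | Suc m \<Rightarrow> hoch_diff mul eps m (htpy_cochain m \<psi>) xs)"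
    for xs
  proof (cases "length xs = n")
    case True then show ?thesis by (rule sub_G_star_F_star_eq[OF \<psi>c \<psi>d])
  next
    case False then show ?thesis
      using hoch_cochain_length[OF \<psi>c False] by (cases n) (simp_all add: G_star_def hoch_diff_def)
  qed
  show ?thesis
  proof (cases n)
    case 0 then show ?thesis using eq by (simp add: hoch_coboundaries_def)
  next
    case (Suc m)
    then have "(\<lambda>xs. \<psi> xs - G_star n (F_star n \<psi>) xs) = hoch_diff mul eps m (htpy_cochain m \<psi>)"
      using eq by auto
    then show ?thesis using htpy_cochain_in_cochains \<psi>c Suc by (simp add: hoch_coboundaries_def)
  qed
qed

lemma sub_F_star_G_star_coboundary:
  assumes w: "w \<in> hom_cocycles scp P HP lft rgt eps d n"
  shows "(\<lambda>y. w y - F_star n (G_star n w) y) \<in> hom_coboundaries scp P HP lft rgt eps d n"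
proof -
  have wb: "bimod_functional n w" and wd: "hom_diff P d n w = (\<lambda>_. 0)"
    using w homAA_iff_bimod_functional by (auto simp: hom_cocycles_def)
  have cyc: "\<forall>y\<in>P (Suc n). w (d n y) = 0"
    using wd by (metis hom_diff_def)
  have eq: "w y - F_star n (G_star n w) y = (case n of 0 \<Rightarrow> 0 | Suc m \<Rightarrow> hom_diff P d m (htpy_dual m w) y)"
    for y
  proof (cases "y \<in> P n")
    case True then show ?thesis
      using sub_F_star_G_star_eq[OF wb cyc True] d_P[of y] by (cases n) (simp_all add: hom_diff_def htpy_dual_def)
  next
    case False then show ?thesis
      using bimod_functional_outside[OF wb False] by (cases n) (simp_all add: F_star_def hom_diff_def)
  qed
  show ?thesis
  proof (cases n)
    case 0 then show ?thesis using eq by (simp add: hom_coboundaries_def)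
  next
    case (Suc m)
    then have "(\<lambda>y. w y - F_star n (G_star n w) y) = hom_diff P d m (htpy_dual m w)" using eq by auto
    moreover have "htpy_dual m w \<in> homAA scp (P m) (HP m) lft rgt eps"
      using bimod_functional_htpy_dual wb Suc homAA_iff_bimod_functional by simp
    ultimately show ?thesis using Suc by (simp add: hom_coboundaries_def)
  qed
qed

lemma quot_iso_hochschild_hom:
  "quot_iso (hoch_cocycles sc mul eps n) (hoch_coboundaries sc mul eps n)
     (hom_cocycles scp P HP lft rgt eps d n) (hom_coboundaries scp P HP lft rgt eps d n)"
proof (rule quot_iso_intro[where \<phi> = "F_star n" and \<gamma> = "G_star n"])
  show "\<forall>u\<in>hoch_coboundaries sc mul eps n. \<forall>v\<in>hoch_coboundaries sc mul eps n.
      (\<lambda>xs. u xs + v xs) \<in> hoch_coboundaries sc mul eps n"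
    using hoch_coboundaries_add by blast
qed (simp_all add: F_star_cocycle G_star_cocycle F_star_add F_star_scale F_star_coboundary
    G_star_coboundary sub_G_star_F_star_coboundary sub_F_star_G_star_coboundary)

end

theorem proposition4p24:
  fixes sc :: "'k::field \<Rightarrow> 'a::ab_group_add \<Rightarrow> 'a"
    and H :: "'g::ab_group_add \<Rightarrow> 'a set"
    and act :: "'g \<Rightarrow> 'a \<Rightarrow> 'a"
    and mul :: "'a \<Rightarrow> 'a \<Rightarrow> 'a" and one :: 'a and eps :: "'a \<Rightarrow> 'k"
    and scp :: "'k \<Rightarrow> 'p::ab_group_add \<Rightarrow> 'p"
    and P :: "nat \<Rightarrow> 'p set" and HP :: "nat \<Rightarrow> 'g \<Rightarrow> 'p set" and actp :: "'g \<Rightarrow> 'p \<Rightarrow> 'p"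
    and lft :: "'a \<Rightarrow> 'p \<Rightarrow> 'p" and rgt :: "'p \<Rightarrow> 'a \<Rightarrow> 'p"
    and d :: "nat \<Rightarrow> 'p \<Rightarrow> 'p" and aug :: "'p \<Rightarrow> 'a"
  assumes alg: "yd_aug_alg sc H act mul one eps"
    and vsp: "vector_space scp"
    and bimod: "\<forall>n. yd_bimod sc H act mul one scp (P n) (HP n) actp lft rgt"
    and diff: "\<forall>n. yd_bimod_hom scp (P (Suc n)) (HP (Suc n)) actp lft rgt scp (P n) (HP n) actp lft rgt (d n)"
    and augm: "yd_bimod_hom scp (P 0) (HP 0) actp lft rgt sc UNIV H act mul mul aug"
    and exact_aug: "aug ` P 0 = UNIV"
    and exact_0: "{x \<in> P 0. aug x = 0} = d 0 ` P 1"
    and exact_n: "\<forall>n. {x \<in> P (Suc n). d n x = 0} = d (Suc n) ` P (Suc (Suc n))"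
    and free: "\<forall>n. free_fin_graded sc lft rgt (P n) (HP n)"
  shows "\<forall>n. quot_iso (hoch_cocycles sc mul eps n) (hoch_coboundaries sc mul eps n)
                      (hom_cocycles scp P HP lft rgt eps d n) (hom_coboundaries scp P HP lft rgt eps d n)"
proof -
  interpret free_yd_resolution sc H act mul one eps scp P HP actp lft rgt d aug
    using assms by (simp add: free_yd_resolution_def free_yd_resolution_axioms_def yd_augmented_algebra_def)
  show ?thesis using quot_iso_hochschild_hom by blast
qed

end
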